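(* Let $n\ge 2$ and $q=e^{2\pi i/6}$. The subalgebra $\mathcal{A}_n\subset Q_n$ generated by $s_1,\dots,s_{n-1}$ is isomorphic to $\mathcal{H}_n(3,6)$; more precisely, the homomorphism $\varphi:\mathcal{H}_n(q)\to Q_n$, $g_i\mapsto s_i$, has kernel exactly $\mathrm{Ann}(\mathrm{tr})$ and induces an isomorphism $\mathcal{H}_n(3,6)=\mathcal{H}_n(q)/\mathrm{Ann}(\mathrm{tr})\cong \mathcal{A}_n$.
   Context: $Q_n$ is the $\mathbb{C}$-algebra with generators $u_1,v_1,\dots,u_{n-1},v_{n-1}$ and relations (G1) $u_i^2=v_i^2=-1$; (G2) $[u_i,v_j]=-1$ if $|i-j|\le1$; (G3) $[u_i,v_j]=1$ if $|i-j|\ge2$; (G4) $[u_i,u_j]=[v_i,v_j]=1$, with $[a,b]=aba^{-1}b^{-1}$. $s_i=\frac{-1}{2q}(1+u_i+v_i+u_iv_i)$ for $1\le i\le n-1$. The Hecke algebra $\mathcal{H}_n(q)$ has generators $g_1,\dots,g_{n-1}$ with relations $g_ig_{i+1}g_i=g_{i+1}g_ig_{i+1}$, $g_ig_j=g_jg_i$ ($|i-j|>1$), $(g_i+1)(g_i-q)=0$; $e_i=(q-g_i)/(1+q)$. $\mathrm{tr}$ is Ocneanu's Markov trace with parameter $\eta=1/2$: the unique linear functional on $\bigcup_n\mathcal{H}_n(q)$ with $\mathrm{tr}(1)=1$, $\mathrm{tr}(ab)=\mathrm{tr}(ba)$, $\mathrm{tr}(xe_n)=\eta\,\mathrm{tr}(x)$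 for $x\in\mathcal{H}_n(q)$. $\mathrm{Ann}(\mathrm{tr})=\{a\in\mathcal{H}_n(q):\mathrm{tr}(ab)=0\ \forall b\in\mathcal{H}_n(q)\}$ and $\mathcal{H}_n(3,6)=\mathcal{H}_n(q)/\mathrm{Ann}(\mathrm{tr})$ is the $(3,6)$-quotient. *)

theory Defs
  imports Complex_Main
begin

type_synonym ncpoly = "nat list \<Rightarrow> complex"

definition ncmul :: "ncpoly \<Rightarrow> ncpoly \<Rightarrow> ncpoly" (infixl "\<star>" 70) where
  "f \<star> g = (\<lambda>w. \<Sum>i\<le>length w. f (take i w) * g (drop i w))"

definition ncadd :: "ncpoly \<Rightarrow> ncpoly \<Rightarrow> ncpoly" (infixl "\<oplus>" 65) where
  "f \<oplus> g = (\<lambda>w. f w + g w)"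

definition ncsmul :: "complex \<Rightarrow> ncpoly \<Rightarrow> ncpoly" (infixr "\<cdot>" 75) where
  "c \<cdot> f = (\<lambda>w. c * f w)"

definition ncsub :: "ncpoly \<Rightarrow> ncpoly \<Rightarrow> ncpoly" (infixl "\<ominus>" 65) where
  "f \<ominus> g = (\<lambda>w. f w - g w)"

definition nczero :: ncpoly where "nczero = (\<lambda>w. 0)"

definition ncone :: ncpoly where "ncone = (\<lambda>w. if w = [] then 1 else 0)"

definition ncvar :: "nat \<Rightarrow> ncpoly" where "ncvar i = (\<lambda>w. if w = [i] then 1 else 0)"

definition ncpolys_on :: "nat set \<Rightarrow> ncpoly set" where
  "ncpolys_on L = {f. finite {w. f w \<noteq> 0} \<and> (\<forall>w. f w \<noteq> 0 \<longrightarrow> set w \<subseteq> L)}"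

inductive_set ideal_gen :: "nat set \<Rightarrow> ncpoly set \<Rightarrow> ncpoly set" for L R where
  gen: "r \<in> R \<Longrightarrow> r \<in> ideal_gen L R"
| zero: "nczero \<in> ideal_gen L R"
| add: "a \<in> ideal_gen L R \<Longrightarrow> b \<in> ideal_gen L R \<Longrightarrow> a \<oplus> b \<in> ideal_gen L R"
| mul: "a \<in> ideal_gen L R \<Longrightarrow> p \<in> ncpolys_on L \<Longrightarrow> r \<in> ncpolys_on L
          \<Longrightarrow> p \<star> a \<star> r \<in> ideal_gen L R"

inductive_set subalg_gen :: "ncpoly set \<Rightarrow> ncpoly set" for S where
  gen: "s \<in> S \<Longrightarrow> s \<in> subalg_gen S"
| one: "ncone \<in> subalg_gen S"
| add: "a \<in> subalg_gen S \<Longrightarrow> b \<in> subalg_gen S \<Longrightarrow> a \<oplus> b \<in> subalg_gen S"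
| smul: "a \<in> subalg_gen S \<Longrightarrow> c \<cdot> a \<in> subalg_gen S"
| mul: "a \<in> subalg_gen S \<Longrightarrow> b \<in> subalg_gen S \<Longrightarrow> a \<star> b \<in> subalg_gen S"

definition ncprod :: "ncpoly list \<Rightarrow> ncpoly" where
  "ncprod xs = foldr ncmul xs ncone"

definition ncsubst :: "(nat \<Rightarrow> ncpoly) \<Rightarrow> ncpoly \<Rightarrow> ncpoly" where
  "ncsubst \<sigma> f = (\<lambda>v. \<Sum>w\<in>{w. f w \<noteq> 0}. f w * ncprod (map \<sigma> w) v)"

text \<open>Generators: u_i is letter 2i, v_i is letter 2i+1, for 1 <= i <= n-1.
  Since u_i^2 = v_i^2 = -1 all generators are invertible, and a commutator
  relation [a,b] = c is equivalent to a b = c b a; we use the latter form.\<close>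

definition Uq :: "nat \<Rightarrow> ncpoly" where "Uq i = ncvar (2 * i)"
definition Vq :: "nat \<Rightarrow> ncpoly" where "Vq i = ncvar (2 * i + 1)"

definition Q_letters :: "nat \<Rightarrow> nat set" where
  "Q_letters n = (\<Union>i\<in>{1..<n}. {2 * i, 2 * i + 1})"

definition Q_rels :: "nat \<Rightarrow> ncpoly set" where
  "Q_rels n =
     {Uq i \<star> Uq i \<oplus> ncone | i. i \<in> {1..<n}}
   \<union> {Vq i \<star> Vq i \<oplus> ncone | i. i \<in> {1..<n}}
   \<union> {Uq i \<star> Vq j \<oplus> Vq j \<star> Uq i | i j. i \<in> {1..<n} \<and> j \<in> {1..<n} \<and> dist (real i) (real j) \<le> 1}
   \<union> {Uq i \<star> Vq j \<ominus> Vq j \<star> Uq i | i j. i \<in> {1..<n} \<and> j \<in> {1..<n} \<and> dist (real i) (real j) \<ge> 2}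
   \<union> {Uq i \<star> Uq j \<ominus> Uq j \<star> Uq i | i j. i \<in> {1..<n} \<and> j \<in> {1..<n}}
   \<union> {Vq i \<star> Vq j \<ominus> Vq j \<star> Vq i | i j. i \<in> {1..<n} \<and> j \<in> {1..<n}}"

definition Q_ideal :: "nat \<Rightarrow> ncpoly set" where
  "Q_ideal n = ideal_gen (Q_letters n) (Q_rels n)"

definition qq :: complex where "qq = exp (2 * of_real pi * \<i> / 6)"

definition s_el :: "nat \<Rightarrow> ncpoly" where
  "s_el i = (- 1 / (2 * qq)) \<cdot> (ncone \<oplus> Uq i \<oplus> Vq i \<oplus> Uq i \<star> Vq i)"

text \<open>Relations of the Hecke algebra on generators indexed by S.
  H_n(q) uses S = {1..<n}; the union of all H_n(q) uses S = {1..}.\<close>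
definition hecke_rels :: "nat set \<Rightarrow> ncpoly set" where
  "hecke_rels S =
     {ncvar i \<star> ncvar (i+1) \<star> ncvar i \<ominus> ncvar (i+1) \<star> ncvar i \<star> ncvar (i+1) | i. i \<in> S \<and> i + 1 \<in> S}
   \<union> {ncvar i \<star> ncvar j \<ominus> ncvar j \<star> ncvar i | i j. i \<in> S \<and> j \<in> S \<and> dist (real i) (real j) > 1}
   \<union> {(ncvar i \<oplus> ncone) \<star> (ncvar i \<ominus> qq \<cdot> ncone) | i. i \<in> S}"

definition hecke_ideal :: "nat set \<Rightarrow> ncpoly set" where
  "hecke_ideal S = ideal_gen S (hecke_rels S)"

definition e_el :: "nat \<Rightarrow> ncpoly" where
  "e_el i = (1 / (1 + qq)) \<cdot> (qq \<cdot> ncone \<ominus> ncvar i)"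

definition eta :: complex where "eta = 1 / 2"

text \<open>Ocneanu's Markov trace on the union of all H_n(q), realised as a linear
  functional on noncommutative polynomials in g_1, g_2, ... vanishing on the Hecke
  ideal (i.e. a functional on the union of the H_n(q)); normalised to 0 outside
  the polynomials so that it is a well-defined function.\<close>
definition is_markov_trace :: "(ncpoly \<Rightarrow> complex) \<Rightarrow> bool" where
  "is_markov_trace T \<longleftrightarrow>
     (\<forall>f. f \<notin> ncpolys_on {1..} \<longrightarrow> T f = 0) \<and>
     (\<forall>f\<in>ncpolys_on {1..}. \<forall>g\<in>ncpolys_on {1..}. T (f \<oplus> g) = T f + T g) \<and>
     (\<forall>f\<in>ncpolys_on {1..}. \<forall>c. T (c \<cdot> f) = c * T f) \<and>
     (\<forall>f\<in>hecke_ideal {1..}. T f = 0) \<and>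
     T ncone = 1 \<and>
     (\<forall>a\<in>ncpolys_on {1..}. \<forall>b\<in>ncpolys_on {1..}. T (a \<star> b) = T (b \<star> a)) \<and>
     (\<forall>m\<ge>1. \<forall>x\<in>ncpolys_on {1..<m}. T (x \<star> e_el m) = eta * T x)"

definition tr :: "ncpoly \<Rightarrow> complex" where
  "tr = (THE T. is_markov_trace T)"

text \<open>(Preimage in the free algebra of) Ann(tr) inside H_n(q).\<close>
definition Ann_tr :: "nat \<Rightarrow> ncpoly set" where
  "Ann_tr n = {a \<in> ncpolys_on {1..<n}. \<forall>b\<in>ncpolys_on {1..<n}. tr (a \<star> b) = 0}"

definition phi :: "ncpoly \<Rightarrow> ncpoly" where
  "phi = ncsubst s_el"

end

theory Submission
  imports Defs
begin

(* The argument: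
   (1) Q_n is a twisted group algebra.  Modulo the relations every word in the letters
       u_i, v_i equals +-1 times a strictly sorted word, its normal form nf.  Writing
       qnull x for "x vanishes after replacing every word by its normal form", we get
       Q_ideal n = {x on the letters of Q_n. qnull x}: the relations are qnull
       (soundness) and every word is congruent to its normal form (completeness).
   (2) tau, the coefficient of the empty normal form, is a trace on Q_n, and it is
       faithful: tau (x * dag x) is the sum of the squared moduli of the normal-form
       coefficients of x, where dag is the conjugate-linear anti-involution with
       dag u_i = - u_i, dag v_i = - v_i.
   (3) The s_i satisfy the Hecke relations in Q_n and tau (phi (x e_m)) = tau (phi x) / 2
       for x in g_1, ..., g_(m-1), so tau o phi is a Markov trace with eta = 1/2.  Markov traces
       are unique (H_{m+1} = H_m + H_m g_{m+1} H_m), hence tr = tau o phi.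
   (4) If phi a lies in Q_ideal then tr (a b) = tau (phi a * phi b) = 0.  Conversely
       dag (phi a) is congruent to some phi b, because dag s_i is an affine function of
       s_i; so a in Ann(tr) gives tau (phi a * dag (phi a)) = 0, hence qnull (phi a) by
       faithfulness, hence phi a in Q_ideal by completeness.
   The statement about the image holds because the image of a substitution
   homomorphism is the subalgebra generated by the images of the letters. *)

section \<open>Finitely supported coefficient functions form a ring\<close>

definition supp :: "ncpoly \<Rightarrow> nat list set" where "supp f = {w. f w \<noteq> 0}"

lemma ncmul_apply: "(f \<star> g) u = (\<Sum>i\<le>length u. f (take i u) * g (drop i u))"
  by (simp add: ncmul_def)

lemma splits_image: "(\<lambda>i. (take i u, drop i u)) ` {..length u} = {p. fst p @ snd p = u}"
proof
  show "{p. fst p @ snd p = u} \<subseteq> (\<lambda>i. (take i u, drop i u)) ` {..length u}"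
  proof
    fix p assume "p \<in> {p. fst p @ snd p = u}"
    then show "p \<in> (\<lambda>i. (take i u, drop i u)) ` {..length u}"
      by (intro image_eqI[where x="length (fst p)"]) (auto simp: prod_eq_iff)
  qed
qed auto

lemma finite_splits: "finite {p. fst p @ snd p = u}"
  unfolding splits_image[symmetric] by simp

lemma splits_sum:
  "(\<Sum>i\<le>length u. Fn (take i u) (drop i u)) = (\<Sum>p\<in>{p. fst p @ snd p = u}. Fn (fst p) (snd p))"
proof -
  have "inj_on (\<lambda>i. (take i u, drop i u)) {..length u}"
    by (rule inj_onI) (metis atMost_iff length_take min.absorb2 prod.inject)
  from sum.reindex[OF this, of "\<lambda>p. Fn (fst p) (snd p)"] show ?thesis
    by (simp add: splits_image)
qed

lemma conv_pairs:
  assumes "finite (supp f)" "finite (supp g)"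
  shows "(f \<star> g) u = (\<Sum>p\<in>{p\<in>supp f \<times> supp g. fst p @ snd p = u}. f (fst p) * g (snd p))"
proof -
  have "(f \<star> g) u = (\<Sum>p\<in>{p. fst p @ snd p = u}. f (fst p) * g (snd p))"
    using splits_sum[of "\<lambda>a b. f a * g b" u] by (simp add: ncmul_apply)
  also have "\<dots> = (\<Sum>p\<in>{p\<in>supp f \<times> supp g. fst p @ snd p = u}. f (fst p) * g (snd p))"
    by (rule sum.mono_neutral_right) (auto simp: finite_splits supp_def)
  finally show ?thesis .
qed

lemma supp_conv: "supp (f \<star> g) \<subseteq> (\<lambda>p. fst p @ snd p) ` (supp f \<times> supp g)"
proof
  fix u assume "u \<in> supp (f \<star> g)"
  then have "(\<Sum>i\<le>length u. f (take i u) * g (drop i u)) \<noteq> 0" by (simp add: supp_def ncmul_apply)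
  then obtain i where "f (take i u) * g (drop i u) \<noteq> 0" by (meson sum.neutral)
  then show "u \<in> (\<lambda>p. fst p @ snd p) ` (supp f \<times> supp g)"
    by (intro image_eqI[where x="(take i u, drop i u)"]) (auto simp: supp_def)
qed

lemma finite_supp_conv: "finite (supp f) \<Longrightarrow> finite (supp g) \<Longrightarrow> finite (supp (f \<star> g))"
  by (rule finite_subset[OF supp_conv]) auto

text \<open>weigh h f pairs the coefficients of f with a weight function h on words.  Every
  linear functional on finitely supported functions has this form.\<close>
definition weigh :: "(nat list \<Rightarrow> complex) \<Rightarrow> ncpoly \<Rightarrow> complex" where
  "weigh h f = (\<Sum>w\<in>supp f. f w * h w)"

lemma weigh_superset: "finite A \<Longrightarrow> supp f \<subseteq> A \<Longrightarrow> weigh h f = (\<Sum>w\<in>A. f w * h w)"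
  unfolding weigh_def by (rule sum.mono_neutral_left) (auto simp: supp_def)

lemma weigh_conv:
  assumes "finite (supp f)" "finite (supp g)"
  shows "weigh h (f \<star> g) = (\<Sum>a\<in>supp f. \<Sum>b\<in>supp g. f a * g b * h (a @ b))"
proof -
  let ?P = "supp f \<times> supp g"
  let ?c = "\<lambda>p::nat list \<times> nat list. fst p @ snd p"
  have fP: "finite ?P" using assms by simp
  have "weigh h (f \<star> g) = (\<Sum>u\<in>?c ` ?P. (f \<star> g) u * h u)"
    by (rule weigh_superset) (use fP supp_conv in auto)
  also have "\<dots> = (\<Sum>u\<in>?c ` ?P. \<Sum>p\<in>{p\<in>?P. ?c p = u}. f (fst p) * g (snd p) * h (?c p))"
    by (rule sum.cong[OF refl]) (simp add: conv_pairs[OF assms] sum_distrib_right)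
  also have "\<dots> = (\<Sum>p\<in>?P. f (fst p) * g (snd p) * h (?c p))"
    by (rule sum.group) (use fP in auto)
  also have "\<dots> = (\<Sum>a\<in>supp f. \<Sum>b\<in>supp g. f a * g b * h (a @ b))"
    by (simp add: sum.cartesian_product case_prod_beta)
  finally show ?thesis .
qed

lemma point_weigh: "finite (supp f) \<Longrightarrow> f u = weigh (\<lambda>w. if w = u then 1 else 0) f"
  unfolding weigh_def
  by (cases "u \<in> supp f") (auto simp: supp_def if_distrib cong: if_cong)

text \<open>Associativity of convolution, checked against every point evaluation.\<close>
lemma ncmul_assoc:
  assumes f: "finite (supp f)" and g: "finite (supp g)" and h: "finite (supp h)"
  shows "(f \<star> g) \<star> h = f \<star> (g \<star> h)"
proof
  fix u
  define d where "d = (\<lambda>w::nat list. if w = u then (1::complex) else 0)"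
  have fg: "finite (supp (f \<star> g))" and gh: "finite (supp (g \<star> h))"
    using f g h finite_supp_conv by auto
  have "((f \<star> g) \<star> h) u = weigh d ((f \<star> g) \<star> h)"
    unfolding d_def by (rule point_weigh) (use fg h finite_supp_conv in auto)
  also have "\<dots> = (\<Sum>a\<in>supp (f \<star> g). \<Sum>c\<in>supp h. (f \<star> g) a * h c * d (a @ c))"
    by (rule weigh_conv[OF fg h])
  also have "\<dots> = weigh (\<lambda>a. \<Sum>c\<in>supp h. h c * d (a @ c)) (f \<star> g)"
    unfolding weigh_def by (simp add: sum_distrib_left mult.assoc)
  also have "\<dots> = (\<Sum>a\<in>supp f. \<Sum>b\<in>supp g. f a * g b * (\<Sum>c\<in>supp h. h c * d ((a @ b) @ c)))"
    by (rule weigh_conv[OF f g])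
  also have "\<dots> = (\<Sum>a\<in>supp f. f a * (\<Sum>b\<in>supp g. \<Sum>c\<in>supp h. g b * h c * d (a @ b @ c)))"
    by (simp add: sum_distrib_left mult.assoc)
  also have "\<dots> = (\<Sum>a\<in>supp f. f a * weigh (\<lambda>bc. d (a @ bc)) (g \<star> h))"
    by (simp add: weigh_conv[OF g h])
  also have "\<dots> = (\<Sum>a\<in>supp f. \<Sum>b\<in>supp (g \<star> h). f a * (g \<star> h) b * d (a @ b))"
    by (simp add: weigh_def sum_distrib_left mult.assoc)
  also have "\<dots> = weigh d (f \<star> (g \<star> h))"
    by (simp add: weigh_conv[OF f gh])
  also have "\<dots> = (f \<star> (g \<star> h)) u"
    unfolding d_def by (rule point_weigh[symmetric]) (use f gh finite_supp_conv in auto)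
  finally show "((f \<star> g) \<star> h) u = (f \<star> (g \<star> h)) u" .
qed

lemma ncmul_distR: "(f \<oplus> g) \<star> h = (f \<star> h) \<oplus> (g \<star> h)"
  by (simp add: ncmul_def ncadd_def fun_eq_iff sum.distrib distrib_right)

lemma ncmul_distL: "h \<star> (f \<oplus> g) = (h \<star> f) \<oplus> (h \<star> g)"
  by (simp add: ncmul_def ncadd_def fun_eq_iff sum.distrib distrib_left)

lemma smul_ncone_mul: "(c \<cdot> ncone) \<star> f = c \<cdot> f"
proof
  fix w
  have "((c \<cdot> ncone) \<star> f) w = (\<Sum>i\<le>length w. if i = 0 then c * f w else 0)"
    unfolding ncmul_apply ncone_def ncsmul_def by (rule sum.cong) auto
  then show "((c \<cdot> ncone) \<star> f) w = (c \<cdot> f) w" by (simp add: ncsmul_def)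
qed

lemma mul_smul_ncone: "f \<star> (c \<cdot> ncone) = c \<cdot> f"
proof
  fix w
  have "(f \<star> (c \<cdot> ncone)) w = (\<Sum>i\<le>length w. if i = length w then c * f w else 0)"
    unfolding ncmul_apply ncone_def ncsmul_def by (rule sum.cong) auto
  then show "(f \<star> (c \<cdot> ncone)) w = (c \<cdot> f) w" by (simp add: ncsmul_def)
qed

lemma ncone_mul: "ncone \<star> f = f"
  using smul_ncone_mul[of 1 f] by (simp add: ncsmul_def)

lemma mul_ncone: "f \<star> ncone = f"
  using mul_smul_ncone[of f 1] by (simp add: ncsmul_def)

lemma fin_add: "finite (supp f) \<Longrightarrow> finite (supp g) \<Longrightarrow> finite (supp (f \<oplus> g))"
  by (rule finite_subset[of _ "supp f \<union> supp g"]) (auto simp: supp_def ncadd_def)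
lemma fin_sub: "finite (supp f) \<Longrightarrow> finite (supp g) \<Longrightarrow> finite (supp (f \<ominus> g))"
  by (rule finite_subset[of _ "supp f \<union> supp g"]) (auto simp: supp_def ncsub_def)
lemma fin_neg: "finite (supp f) \<Longrightarrow> finite (supp (\<lambda>w. - f w))"
  by (simp add: supp_def)
lemma fin_smul: "finite (supp f) \<Longrightarrow> finite (supp (c \<cdot> f))"
  by (rule finite_subset[of _ "supp f"]) (auto simp: supp_def ncsmul_def)
lemma fin_zero: "finite (supp nczero)" by (simp add: supp_def nczero_def)
lemma fin_one: "finite (supp ncone)"
  by (rule finite_subset[of _ "{[]}"]) (auto simp: supp_def ncone_def)
lemma fin_delta: "finite (supp (\<lambda>v. if v = w then c else 0))"
  by (rule finite_subset[of _ "{w}"]) (auto simp: supp_def)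

typedef fpoly = "{f::ncpoly. finite (supp f)}" morphisms coeff fpoly_of
  by (rule exI[of _ nczero]) (simp add: fin_zero)

lemma fin_coeff: "finite (supp (coeff x))" using coeff by simp

instantiation fpoly :: ring_1
begin
definition "zero_fpoly = fpoly_of nczero"
definition "one_fpoly = fpoly_of ncone"
definition "plus_fpoly x y = fpoly_of (coeff x \<oplus> coeff y)"
definition "minus_fpoly x y = fpoly_of (coeff x \<ominus> coeff y)"
definition "uminus_fpoly x = fpoly_of (\<lambda>w. - coeff x w)"
definition "times_fpoly x y = fpoly_of (coeff x \<star> coeff y)"

lemma coeff_zero: "coeff 0 = nczero" unfolding zero_fpoly_def by (simp add: fpoly_of_inverse fin_zero)
lemma coeff_one: "coeff 1 = ncone" unfolding one_fpoly_def by (simp add: fpoly_of_inverse fin_one)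
lemma coeff_plus: "coeff (x + y) = coeff x \<oplus> coeff y" unfolding plus_fpoly_def by (simp add: fpoly_of_inverse fin_add fin_coeff)
lemma coeff_minus: "coeff (x - y) = coeff x \<ominus> coeff y" unfolding minus_fpoly_def by (simp add: fpoly_of_inverse fin_sub fin_coeff)
lemma coeff_uminus: "coeff (- x) = (\<lambda>w. - coeff x w)" unfolding uminus_fpoly_def by (simp add: fpoly_of_inverse fin_neg fin_coeff)
lemma coeff_times: "coeff (x * y) = coeff x \<star> coeff y" unfolding times_fpoly_def by (simp add: fpoly_of_inverse finite_supp_conv fin_coeff)

instance
proof
  fix a b c :: fpoly
  show "a * b * c = a * (b * c)"
    by (simp add: coeff_inject[symmetric] coeff_times ncmul_assoc fin_coeff)
  show "a + b + c = a + (b + c)"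
    by (simp add: coeff_inject[symmetric] coeff_plus ncadd_def add.assoc)
  show "a + b = b + a"
    by (simp add: coeff_inject[symmetric] coeff_plus ncadd_def add.commute)
  show "0 + a = a"
    by (simp add: coeff_inject[symmetric] coeff_plus coeff_zero ncadd_def nczero_def)
  show "- a + a = 0"
    by (simp add: coeff_inject[symmetric] coeff_plus coeff_zero coeff_uminus ncadd_def nczero_def)
  show "a - b = a + - b"
    by (simp add: coeff_inject[symmetric] coeff_plus coeff_minus coeff_uminus ncadd_def ncsub_def)
  show "(a + b) * c = a * c + b * c"
    by (simp add: coeff_inject[symmetric] coeff_plus coeff_times ncmul_distR)
  show "a * (b + c) = a * b + a * c"
    by (simp add: coeff_inject[symmetric] coeff_plus coeff_times ncmul_distL)
  show "1 * a = a"
    by (simp add: coeff_inject[symmetric] coeff_one coeff_times ncone_mul)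
  show "a * 1 = a"
    by (simp add: coeff_inject[symmetric] coeff_one coeff_times mul_ncone)
  show "(0::fpoly) \<noteq> 1"
  proof
    assume "(0::fpoly) = 1"
    then have "coeff 0 [] = coeff 1 []" by simp
    then show False by (simp add: coeff_zero coeff_one nczero_def ncone_def)
  qed
qed
end

definition scal :: "complex \<Rightarrow> fpoly" where "scal c = fpoly_of (c \<cdot> ncone)"

lemma coeff_scal: "coeff (scal c) = c \<cdot> ncone" unfolding scal_def by (simp add: fpoly_of_inverse fin_smul fin_one)

lemma coeff_scal_mul: "coeff (scal c * x) = c \<cdot> coeff x"
  by (simp add: coeff_times coeff_scal smul_ncone_mul)

lemma scal_comm: "scal c * x = x * scal c"
  by (simp add: coeff_inject[symmetric] coeff_times coeff_scal smul_ncone_mul mul_smul_ncone)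

lemma scal_add: "scal (a + b) = scal a + scal b"
  by (simp add: coeff_inject[symmetric] coeff_scal coeff_plus ncsmul_def ncadd_def fun_eq_iff distrib_right)
lemma scal_mult: "scal (a * b) = scal a * scal b"
  by (simp add: coeff_inject[symmetric] coeff_scal coeff_times smul_ncone_mul) (simp add: ncsmul_def fun_eq_iff)
lemma scal_one: "scal 1 = 1"
  by (simp add: coeff_inject[symmetric] coeff_scal coeff_one ncsmul_def)
lemma scal_zero: "scal 0 = 0"
  by (simp add: coeff_inject[symmetric] coeff_scal coeff_zero ncsmul_def nczero_def)
lemma scal_uminus: "scal (- a) = - scal a"
  by (simp add: coeff_inject[symmetric] coeff_scal coeff_uminus ncsmul_def fun_eq_iff)
lemma scal_minus: "scal (a - b) = scal a - scal b"
  by (simp add: coeff_inject[symmetric] coeff_scal coeff_minus ncsmul_def ncsub_def fun_eq_iff algebra_simps)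
lemma scal_numeral: "scal (numeral k) = numeral k"
proof (induction k)
  case One then show ?case by (simp add: scal_one)
next
  case (Bit0 k) then show ?case by (metis numeral_Bit0 scal_add)
next
  case (Bit1 k) then show ?case by (metis numeral_Bit1 scal_add scal_one)
qed

lemma scal_mult_mult: "(scal a * x) * (scal b * y) = scal (a * b) * (x * y)"
proof -
  have c: "x * scal b = scal b * x" by (rule scal_comm[symmetric])
  have "(scal a * x) * (scal b * y) = scal a * ((x * scal b) * y)" by (simp only: mult.assoc)
  also have "\<dots> = scal a * ((scal b * x) * y)" by (simp only: c)
  also have "\<dots> = scal (a * b) * (x * y)" by (simp only: mult.assoc scal_mult)
  finally show ?thesis .
qed

definition mon :: "nat list \<Rightarrow> fpoly" where "mon w = fpoly_of (\<lambda>v. if v = w then 1 else 0)"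

lemma coeff_mon: "coeff (mon w) = (\<lambda>v. if v = w then 1 else 0)"
  unfolding mon_def by (simp add: fpoly_of_inverse fin_delta)

lemma mon_nil: "mon [] = 1"
  by (simp add: coeff_inject[symmetric] coeff_mon coeff_one ncone_def)

lemma mon_append: "mon (a @ b) = mon a * mon b"
proof -
  have "coeff (mon a * mon b) u = (if u = a @ b then 1 else 0)" for u
  proof -
    have "coeff (mon a * mon b) u = (\<Sum>i\<le>length u. if i = length a \<and> u = a @ b then 1 else 0)"
      unfolding coeff_times ncmul_apply coeff_mon
      by (rule sum.cong) (auto simp: append_eq_conv_conj)
    then show ?thesis by auto
  qed
  then show ?thesis by (simp add: coeff_inject[symmetric] coeff_mon fun_eq_iff)
qed

lemma mon_Cons: "mon (a # w) = mon [a] * mon w"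
  using mon_append[of "[a]" w] by simp

lemma coeff_mon_var: "coeff (mon [i]) = ncvar i"
  by (simp add: coeff_mon ncvar_def)

lemma fpoly_expand: "x = (\<Sum>w\<in>supp (coeff x). scal (coeff x w) * mon w)"
proof -
  have R: "coeff (\<Sum>w\<in>A. scal (coeff x w) * mon w) = (\<lambda>v. if v \<in> A then coeff x v else 0)" if "finite A" for A
    using that
  proof (induction A rule: finite_induct)
    case empty then show ?case by (simp add: coeff_zero nczero_def)
  next
    case (insert a A)
    then show ?case
      by (auto simp: coeff_plus coeff_scal_mul coeff_mon ncadd_def ncsmul_def fun_eq_iff)
  qed
  have "coeff (\<Sum>w\<in>supp (coeff x). scal (coeff x w) * mon w) = coeff x"
    using R[OF fin_coeff] by (auto simp: fun_eq_iff supp_def)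
  then show ?thesis by (metis coeff_inverse)
qed

definition Pol :: "nat set \<Rightarrow> fpoly set" where "Pol L = {x. \<forall>w\<in>supp (coeff x). set w \<subseteq> L}"

lemma ncpolys_on_coeff: "f \<in> ncpolys_on L \<longleftrightarrow> (\<exists>x\<in>Pol L. f = coeff x)"
proof
  assume "f \<in> ncpolys_on L"
  then have "finite (supp f)" "\<forall>w\<in>supp f. set w \<subseteq> L" by (auto simp: ncpolys_on_def supp_def)
  then show "\<exists>x\<in>Pol L. f = coeff x"
    by (intro bexI[where x="fpoly_of f"]) (auto simp: Pol_def fpoly_of_inverse)
next
  assume "\<exists>x\<in>Pol L. f = coeff x"
  then show "f \<in> ncpolys_on L" using fin_coeff by (auto simp: ncpolys_on_def Pol_def supp_def)
qed

lemma coeff_in_ncpolys: "x \<in> Pol L \<Longrightarrow> coeff x \<in> ncpolys_on L"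
  using ncpolys_on_coeff by blast

lemma polys_fin: "f \<in> ncpolys_on L \<Longrightarrow> finite (supp f)"
  by (simp add: ncpolys_on_def supp_def)

lemma fpoly_of_add: "finite (supp f) \<Longrightarrow> finite (supp g) \<Longrightarrow> fpoly_of (f \<oplus> g) = fpoly_of f + fpoly_of g"
  by (simp add: plus_fpoly_def fpoly_of_inverse)

lemma fpoly_of_mul: "finite (supp f) \<Longrightarrow> finite (supp g) \<Longrightarrow> fpoly_of (f \<star> g) = fpoly_of f * fpoly_of g"
  by (simp add: times_fpoly_def fpoly_of_inverse)

lemma fpoly_of_smul: "finite (supp f) \<Longrightarrow> fpoly_of (c \<cdot> f) = scal c * fpoly_of f"
  by (metis fpoly_of_inverse coeff_inverse coeff_scal_mul mem_Collect_eq)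

lemma Pol_zero: "0 \<in> Pol L" by (simp add: Pol_def coeff_zero supp_def nczero_def)
lemma Pol_one: "1 \<in> Pol L" by (simp add: Pol_def coeff_one supp_def ncone_def)
lemma Pol_add: assumes "x \<in> Pol L" "y \<in> Pol L" shows "x + y \<in> Pol L"
proof (unfold Pol_def mem_Collect_eq, intro ballI)
  fix w assume "w \<in> supp (coeff (x + y))"
  then have "coeff x w \<noteq> 0 \<or> coeff y w \<noteq> 0" by (auto simp: supp_def coeff_plus ncadd_def)
  then show "set w \<subseteq> L" using \<open>x \<in> Pol L\<close> \<open>y \<in> Pol L\<close> by (auto simp: Pol_def supp_def)
qed
lemma Pol_uminus: "x \<in> Pol L \<Longrightarrow> - x \<in> Pol L"
  by (auto simp: Pol_def coeff_uminus supp_def)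
lemma Pol_diff: "x \<in> Pol L \<Longrightarrow> y \<in> Pol L \<Longrightarrow> x - y \<in> Pol L"
  unfolding diff_conv_add_uminus by (intro Pol_add Pol_uminus)
lemma Pol_scal: "scal c \<in> Pol L" by (simp add: Pol_def coeff_scal supp_def ncone_def ncsmul_def)
lemma Pol_mult: assumes x: "x \<in> Pol L" and y: "y \<in> Pol L" shows "x * y \<in> Pol L"
proof -
  show ?thesis unfolding Pol_def mem_Collect_eq coeff_times
  proof
    fix w assume "w \<in> supp (coeff x \<star> coeff y)"
    then obtain p where p: "p \<in> supp (coeff x) \<times> supp (coeff y)" "w = fst p @ snd p"
      using supp_conv[of "coeff x" "coeff y"] by blast
    then show "set w \<subseteq> L" using x y by (auto simp: Pol_def)
  qed
qed
lemma Pol_mon: "set w \<subseteq> L \<Longrightarrow> mon w \<in> Pol L"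
  by (simp add: Pol_def coeff_mon supp_def)
lemma Pol_mono: "x \<in> Pol L \<Longrightarrow> L \<subseteq> L' \<Longrightarrow> x \<in> Pol L'"
  by (auto simp: Pol_def)

text \<open>Pol1 is the algebra of polynomials in g_1, g_2, ..., the free counterpart of
  the union of all H_n.\<close>
abbreviation Pol1 :: "fpoly set" where "Pol1 \<equiv> Pol {1..}"
lemma Pol_Pol1: "x \<in> Pol {1..m} \<Longrightarrow> x \<in> Pol1" by (erule Pol_mono) auto
lemma Pol_Pol1': "x \<in> Pol {1..<m} \<Longrightarrow> x \<in> Pol1" by (erule Pol_mono) auto

lemma Pol_numeral: "numeral k \<in> Pol L" by (metis Pol_scal scal_numeral)

lemma fpoly_of_Pol: "f \<in> ncpolys_on L \<Longrightarrow> fpoly_of f \<in> Pol L"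
  using ncpolys_on_coeff coeff_inverse by metis

lemma polys_add: "f \<in> ncpolys_on L \<Longrightarrow> g \<in> ncpolys_on L \<Longrightarrow> f \<oplus> g \<in> ncpolys_on L"
proof -
  assume f: "f \<in> ncpolys_on L" and g: "g \<in> ncpolys_on L"
  have "fpoly_of f + fpoly_of g \<in> Pol L" using f g by (intro Pol_add fpoly_of_Pol)
  then have "coeff (fpoly_of f + fpoly_of g) \<in> ncpolys_on L" by (rule coeff_in_ncpolys)
  then show ?thesis using f g polys_fin by (simp add: coeff_plus fpoly_of_inverse)
qed

lemma polys_mul: "f \<in> ncpolys_on L \<Longrightarrow> g \<in> ncpolys_on L \<Longrightarrow> f \<star> g \<in> ncpolys_on L"
proof -
  assume f: "f \<in> ncpolys_on L" and g: "g \<in> ncpolys_on L"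
  have "fpoly_of f * fpoly_of g \<in> Pol L" using f g by (intro Pol_mult fpoly_of_Pol)
  then have "coeff (fpoly_of f * fpoly_of g) \<in> ncpolys_on L" by (rule coeff_in_ncpolys)
  then show ?thesis using f g polys_fin by (simp add: coeff_times fpoly_of_inverse)
qed

lemma polys_smul: "f \<in> ncpolys_on L \<Longrightarrow> c \<cdot> f \<in> ncpolys_on L"
proof -
  assume f: "f \<in> ncpolys_on L"
  have "scal c * fpoly_of f \<in> Pol L" using f by (intro Pol_mult Pol_scal fpoly_of_Pol)
  then have "coeff (scal c * fpoly_of f) \<in> ncpolys_on L" by (rule coeff_in_ncpolys)
  then show ?thesis using f polys_fin by (simp add: coeff_scal_mul fpoly_of_inverse)
qed

lemma polys_mono: "f \<in> ncpolys_on L \<Longrightarrow> L \<subseteq> L' \<Longrightarrow> f \<in> ncpolys_on L'"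
  by (auto simp: ncpolys_on_def)

lemma Pol_induct[consumes 1, case_names zero add mon]:
  assumes x: "x \<in> Pol L"
    and z: "P 0"
    and a: "\<And>a b. a \<in> Pol L \<Longrightarrow> b \<in> Pol L \<Longrightarrow> P a \<Longrightarrow> P b \<Longrightarrow> P (a + b)"
    and m: "\<And>c w. set w \<subseteq> L \<Longrightarrow> P (scal c * mon w)"
  shows "P x"
proof -
  have "\<forall>w\<in>supp (coeff x). set w \<subseteq> L" using x by (simp add: Pol_def)
  have "B \<subseteq> supp (coeff x) \<Longrightarrow> P (\<Sum>w\<in>B. scal (coeff x w) * mon w) \<and> (\<Sum>w\<in>B. scal (coeff x w) * mon w) \<in> Pol L" for B
  proof (induction B rule: infinite_finite_induct)
    case (infinite A) then show ?case using z Pol_zero by simp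
  next
    case empty then show ?case using z Pol_zero by simp
  next
    case (insert w B)
    have "set w \<subseteq> L" using insert x by (auto simp: Pol_def)
    then have "P (scal (coeff x w) * mon w)" "scal (coeff x w) * mon w \<in> Pol L"
      using m Pol_mult Pol_scal Pol_mon by auto
    then show ?case using insert a Pol_add by simp
  qed
  then show ?thesis using fpoly_expand[of x] by (metis order_refl)
qed

definition lin :: "(nat list \<Rightarrow> complex) \<Rightarrow> fpoly \<Rightarrow> complex" where "lin h x = weigh h (coeff x)"

lemma lin_add: "lin h (x + y) = lin h x + lin h y"
proof -
  have A: "finite (supp (coeff x) \<union> supp (coeff y))" using fin_coeff by simp
  have "lin h (x + y) = (\<Sum>w\<in>supp (coeff x) \<union> supp (coeff y). coeff (x + y) w * h w)"
    unfolding lin_def by (rule weigh_superset[OF A]) (auto simp: supp_def coeff_plus ncadd_def)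
  also have "\<dots> = (\<Sum>w\<in>supp (coeff x) \<union> supp (coeff y). coeff x w * h w) + (\<Sum>w\<in>supp (coeff x) \<union> supp (coeff y). coeff y w * h w)"
    by (simp add: coeff_plus ncadd_def distrib_right sum.distrib)
  also have "\<dots> = lin h x + lin h y"
    unfolding lin_def by (simp add: weigh_superset[OF A])
  finally show ?thesis .
qed

lemma lin_zero: "lin h 0 = 0" by (simp add: lin_def weigh_def coeff_zero nczero_def)

lemma lin_scal: "lin h (scal c * x) = c * lin h x"
proof -
  have "lin h (scal c * x) = (\<Sum>w\<in>supp (coeff x). coeff (scal c * x) w * h w)"
    unfolding lin_def by (rule weigh_superset) (auto simp: fin_coeff[unfolded supp_def] supp_def coeff_scal_mul ncsmul_def)
  then show ?thesis by (simp add: coeff_scal_mul ncsmul_def lin_def weigh_def sum_distrib_left mult.assoc)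
qed

lemma lin_uminus: "lin h (- x) = - lin h x"
proof -
  have "lin h (- x) + lin h x = 0" using lin_add[of h "- x" x] by (simp add: lin_zero)
  then show ?thesis by (simp add: eq_neg_iff_add_eq_0)
qed
lemma lin_diff: "lin h (x - y) = lin h x - lin h y"
  unfolding diff_conv_add_uminus by (simp only: lin_add lin_uminus)

lemma lin_mon: "lin h (mon w) = h w"
  by (simp add: lin_def weigh_def coeff_mon supp_def)

lemma lin_mult: "lin h (x * y) = (\<Sum>a\<in>supp (coeff x). \<Sum>b\<in>supp (coeff y). coeff x a * coeff y b * h (a @ b))"
  unfolding lin_def coeff_times by (rule weigh_conv[OF fin_coeff fin_coeff])

lemma lin_expl: "lin h x = (\<Sum>a\<in>supp (coeff x). coeff x a * h a)"
  by (simp add: lin_def weigh_def)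

lemma lin_mult_mon: "lin h (x * mon w) = lin (\<lambda>c. h (c @ w)) x"
proof -
  have "supp (coeff (mon w)) = {w}" by (auto simp: supp_def coeff_mon)
  then show ?thesis unfolding lin_mult by (simp add: lin_expl coeff_mon)
qed

lemma lin_diff_fun: "lin (\<lambda>c. h1 c - h2 c) x = lin h1 x - lin h2 x"
  by (simp add: lin_expl right_diff_distrib sum_subtractf)

lemma lin_smul_fun: "lin (\<lambda>c. k * h c) x = k * lin h x"
  by (simp add: lin_expl sum_distrib_left mult_ac)

lemma lin_zero_fun: "(\<And>a. h a = 0) \<Longrightarrow> lin h x = 0" by (simp add: lin_expl)

lemma lin_scal_const: "lin h (scal c) = c * h []"
proof -
  have "lin h (scal c * mon []) = c * h []" by (simp only: lin_scal lin_mon)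
  then show ?thesis by (simp add: mon_nil)
qed

lemma coeff_sum: "coeff (sum f A) v = (\<Sum>i\<in>A. coeff (f i) v)"
  by (induction A rule: infinite_finite_induct) (auto simp: coeff_zero coeff_plus nczero_def ncadd_def)

definition subst_hom :: "(nat \<Rightarrow> fpoly) \<Rightarrow> fpoly \<Rightarrow> fpoly" where
  "subst_hom \<sigma> x = (\<Sum>w\<in>supp (coeff x). scal (coeff x w) * prod_list (map \<sigma> w))"

lemma subst_hom_superset:
  assumes "finite A" "supp (coeff x) \<subseteq> A"
  shows "subst_hom \<sigma> x = (\<Sum>w\<in>A. scal (coeff x w) * prod_list (map \<sigma> w))"
  unfolding subst_hom_def by (rule sum.mono_neutral_left) (use assms in \<open>auto simp: supp_def scal_zero\<close>)

lemma subst_hom_add: "subst_hom \<sigma> (x + y) = subst_hom \<sigma> x + subst_hom \<sigma> y"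
proof -
  let ?A = "supp (coeff x) \<union> supp (coeff y)"
  have A: "finite ?A" using fin_coeff by simp
  have "subst_hom \<sigma> (x + y) = (\<Sum>w\<in>?A. scal (coeff (x+y) w) * prod_list (map \<sigma> w))"
    by (rule subst_hom_superset[OF A]) (auto simp: supp_def coeff_plus ncadd_def)
  also have "\<dots> = (\<Sum>w\<in>?A. scal (coeff x w) * prod_list (map \<sigma> w)) + (\<Sum>w\<in>?A. scal (coeff y w) * prod_list (map \<sigma> w))"
    by (simp add: coeff_plus ncadd_def scal_add distrib_right sum.distrib)
  also have "\<dots> = subst_hom \<sigma> x + subst_hom \<sigma> y"
    by (simp add: subst_hom_superset[OF A])
  finally show ?thesis .
qed

lemma subst_hom_zero: "subst_hom \<sigma> 0 = 0" by (simp add: subst_hom_def coeff_zero supp_def nczero_def)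

lemma subst_hom_scal: "subst_hom \<sigma> (scal c * x) = scal c * subst_hom \<sigma> x"
proof -
  have "subst_hom \<sigma> (scal c * x) = (\<Sum>w\<in>supp (coeff x). scal (coeff (scal c * x) w) * prod_list (map \<sigma> w))"
    by (rule subst_hom_superset) (auto simp: fin_coeff[unfolded supp_def] supp_def coeff_scal_mul ncsmul_def)
  then show ?thesis
    by (simp add: subst_hom_def coeff_scal_mul ncsmul_def scal_mult sum_distrib_left mult.assoc)
qed

lemma subst_hom_mon: "subst_hom \<sigma> (mon w) = prod_list (map \<sigma> w)"
  by (simp add: subst_hom_def coeff_mon supp_def scal_one)

lemma subst_hom_one: "subst_hom \<sigma> 1 = 1" using subst_hom_mon[of \<sigma> "[]"] by (simp add: mon_nil)

lemma subst_hom_scal_const: "subst_hom \<sigma> (scal c) = scal c"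
  using subst_hom_scal[of \<sigma> c 1] by (simp add: subst_hom_one)

lemma subst_hom_uminus: "subst_hom \<sigma> (- x) = - subst_hom \<sigma> x"
proof -
  have "subst_hom \<sigma> (- x) + subst_hom \<sigma> x = 0" using subst_hom_add[of \<sigma> "- x" x] by (simp add: subst_hom_zero)
  then show ?thesis by (rule eq_neg_iff_add_eq_0[THEN iffD2])
qed

lemma subst_hom_diff: "subst_hom \<sigma> (x - y) = subst_hom \<sigma> x - subst_hom \<sigma> y"
  unfolding diff_conv_add_uminus by (simp only: subst_hom_add subst_hom_uminus)

lemma mon_scal_mult: "scal c * mon w * (scal d * mon v) = scal (c * d) * mon (w @ v)"
proof -
  have c: "mon w * scal d = scal d * mon w" by (rule scal_comm[symmetric])
  have "scal c * mon w * (scal d * mon v) = scal c * (mon w * scal d) * mon v" by (simp only: mult.assoc)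
  also have "\<dots> = scal c * (scal d * mon w) * mon v" by (simp only: c)
  also have "\<dots> = scal (c * d) * mon (w @ v)" by (simp only: mon_append scal_mult mult.assoc)
  finally show ?thesis .
qed

lemma fpoly_pair_induct[case_names zero_left add_left zero_right add_right mon]:
  assumes "\<And>y. P 0 y" and "\<And>a b y. P a y \<Longrightarrow> P b y \<Longrightarrow> P (a + b) y"
    and "\<And>x. P x 0" and "\<And>x a b. P x a \<Longrightarrow> P x b \<Longrightarrow> P x (a + b)"
    and "\<And>c w d v. P (scal c * mon w) (scal d * mon v)"
  shows "P x y"
proof -
  have x: "x \<in> Pol UNIV" and y: "y \<in> Pol UNIV" by (auto simp: Pol_def)
  show ?thesis using x
  proof (induction x rule: Pol_induct)
    case (mon c w)
    from y show ?case by (induction y rule: Pol_induct) (use assms in auto)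
  qed (use assms in auto)
qed

lemma subst_hom_mult: "subst_hom \<sigma> (x * y) = subst_hom \<sigma> x * subst_hom \<sigma> y"
proof (induction x y rule: fpoly_pair_induct)
  case (mon c w d v)
  have comm: "prod_list (map \<sigma> w) * (scal d * y) = scal d * (prod_list (map \<sigma> w) * y)" for y
    by (metis mult.assoc scal_comm)
  have "subst_hom \<sigma> (scal c * mon w * (scal d * mon v)) = subst_hom \<sigma> (scal (c * d) * mon (w @ v))"
    by (simp only: mon_scal_mult)
  also have "\<dots> = scal (c * d) * (prod_list (map \<sigma> w) * prod_list (map \<sigma> v))"
    by (simp only: subst_hom_scal subst_hom_mon map_append prod_list.append)
  also have "\<dots> = scal c * prod_list (map \<sigma> w) * (scal d * prod_list (map \<sigma> v))"
    by (simp only: scal_mult mult.assoc comm)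
  finally show ?case by (simp only: subst_hom_scal subst_hom_mon)
qed (simp_all add: subst_hom_zero subst_hom_add distrib_left distrib_right)

lemma subst_hom_Pol:
  assumes x: "x \<in> Pol L" and s: "\<And>i. i \<in> L \<Longrightarrow> \<sigma> i \<in> Pol L'"
  shows "subst_hom \<sigma> x \<in> Pol L'"
  using x
proof (induction x rule: Pol_induct)
  case zero then show ?case by (simp add: subst_hom_zero Pol_zero)
next
  case (add a b) then show ?case by (simp add: subst_hom_add Pol_add)
next
  case (mon c w)
  have "prod_list (map \<sigma> w) \<in> Pol L'" using mon
    by (induction w) (auto intro: Pol_mult Pol_one s)
  then show ?case by (simp add: subst_hom_scal subst_hom_mon Pol_mult Pol_scal)
qed

lemma coeff_subst_hom:
  assumes "\<And>i. coeff (\<sigma> i) = \<sigma>' i"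
  shows "ncsubst \<sigma>' (coeff x) = coeff (subst_hom \<sigma> x)"
proof -
  have P: "ncprod (map \<sigma>' w) = coeff (prod_list (map \<sigma> w))" for w
    by (induction w) (simp_all add: ncprod_def coeff_one coeff_times assms)
  show ?thesis
    by (simp add: ncsubst_def subst_hom_def coeff_sum coeff_scal_mul ncsmul_def P fun_eq_iff supp_def)
qed

section \<open>The generators and the homomorphism phi\<close>

definition Ugen :: "nat \<Rightarrow> fpoly" where "Ugen i = mon [2 * i]"
definition Vgen :: "nat \<Rightarrow> fpoly" where "Vgen i = mon [2 * i + 1]"
definition Ggen :: "nat \<Rightarrow> fpoly" where "Ggen i = mon [i]"

definition Sgen :: "nat \<Rightarrow> fpoly" where
  "Sgen i = scal (- 1 / (2 * qq)) * (1 + Ugen i + Vgen i + Ugen i * Vgen i)"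

lemma coeff_Ugen: "coeff (Ugen i) = Uq i" by (simp add: Ugen_def Uq_def coeff_mon_var)
lemma coeff_Vgen: "coeff (Vgen i) = Vq i" by (simp add: Vgen_def Vq_def coeff_mon_var)
lemma coeff_Ggen: "coeff (Ggen i) = ncvar i" by (simp add: Ggen_def coeff_mon_var)

lemma coeff_Sgen: "coeff (Sgen i) = s_el i"
  unfolding Sgen_def s_el_def coeff_scal_mul by (simp add: coeff_plus coeff_one coeff_times coeff_Ugen coeff_Vgen)

lemma phi_coeff: "phi (coeff x) = coeff (subst_hom Sgen x)"
  unfolding phi_def by (rule coeff_subst_hom) (simp add: coeff_Sgen)

lemma Ugen_Pol: "i \<in> {1..<n} \<Longrightarrow> Ugen i \<in> Pol (Q_letters n)"
  unfolding Ugen_def by (rule Pol_mon) (auto simp: Q_letters_def)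
lemma Vgen_Pol: "i \<in> {1..<n} \<Longrightarrow> Vgen i \<in> Pol (Q_letters n)"
  unfolding Vgen_def by (rule Pol_mon) (auto simp: Q_letters_def)
lemma Sgen_Pol: "i \<in> {1..<n} \<Longrightarrow> Sgen i \<in> Pol (Q_letters n)"
  unfolding Sgen_def by (intro Pol_mult Pol_add Pol_scal Pol_one Ugen_Pol Vgen_Pol)

lemma Ggen_Pol: "i \<in> L \<Longrightarrow> Ggen i \<in> Pol L" unfolding Ggen_def by (rule Pol_mon) simp

lemma Ggen_Pol1: "i \<ge> 1 \<Longrightarrow> Ggen i \<in> Pol1" unfolding Ggen_def by (rule Pol_mon) simp

lemma subst_Sgen_Pol: "a \<in> Pol {1..<n} \<Longrightarrow> subst_hom Sgen a \<in> Pol (Q_letters n)"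
  by (rule subst_hom_Pol) (auto intro: Sgen_Pol)

lemma nczero_subalg: "nczero \<in> subalg_gen X"
proof -
  have "0 \<cdot> ncone \<in> subalg_gen X" by (intro subalg_gen.smul subalg_gen.one)
  moreover have "0 \<cdot> ncone = nczero" by (simp add: ncsmul_def nczero_def fun_eq_iff)
  ultimately show ?thesis by simp
qed

lemma subst_hom_in_subalg:
  assumes "a \<in> Pol {1..<n}"
  shows "coeff (subst_hom Sgen a) \<in> subalg_gen (s_el ` {1..<n})"
  using assms
proof (induction a rule: Pol_induct)
  case zero then show ?case by (simp add: subst_hom_zero coeff_zero nczero_subalg)
next
  case (add a b) then show ?case by (simp add: subst_hom_add coeff_plus subalg_gen.add)
next
  case (mon c w)
  have "coeff (prod_list (map Sgen w)) \<in> subalg_gen (s_el ` {1..<n})" using mon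
  proof (induction w)
    case Nil then show ?case by (simp add: coeff_one subalg_gen.one)
  next
    case (Cons a w)
    then have "coeff (Sgen a) \<in> subalg_gen (s_el ` {1..<n})"
      by (simp add: coeff_Sgen subalg_gen.gen)
    with Cons show ?case by (simp add: coeff_times subalg_gen.mul)
  qed
  then show ?case by (simp add: subst_hom_scal subst_hom_mon coeff_scal_mul subalg_gen.smul)
qed

lemma subalg_in_subst_hom:
  assumes "y \<in> subalg_gen (s_el ` {1..<n})"
  shows "\<exists>a\<in>Pol {1..<n}. y = coeff (subst_hom Sgen a)"
  using assms
proof (induction y rule: subalg_gen.induct)
  case (gen s)
  then obtain i where i: "i \<in> {1..<n}" "s = s_el i" by auto
  show ?case
    by (rule bexI[where x="Ggen i"]) (use i in \<open>auto simp: Ggen_def subst_hom_mon coeff_Sgen intro!: Pol_mon\<close>)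
next
  case one
  show ?case by (rule bexI[where x=1]) (auto simp: subst_hom_one coeff_one Pol_one)
next
  case (add a b)
  then obtain x y where "x \<in> Pol {1..<n}" "a = coeff (subst_hom Sgen x)" "y \<in> Pol {1..<n}" "b = coeff (subst_hom Sgen y)" by blast
  then show ?case by (intro bexI[where x="x + y"]) (auto simp: subst_hom_add coeff_plus Pol_add)
next
  case (smul a c)
  then obtain x where "x \<in> Pol {1..<n}" "a = coeff (subst_hom Sgen x)" by blast
  then show ?case by (intro bexI[where x="scal c * x"]) (auto simp: subst_hom_scal coeff_scal_mul Pol_mult Pol_scal)
next
  case (mul a b)
  then obtain x y where "x \<in> Pol {1..<n}" "a = coeff (subst_hom Sgen x)" "y \<in> Pol {1..<n}" "b = coeff (subst_hom Sgen y)" by blast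
  then show ?case by (intro bexI[where x="x * y"]) (auto simp: subst_hom_mult coeff_times Pol_mult)
qed

lemma phi_image: "phi ` ncpolys_on {1..<n} = subalg_gen (s_el ` {1..<n})"
proof
  show "phi ` ncpolys_on {1..<n} \<subseteq> subalg_gen (s_el ` {1..<n})"
    using subst_hom_in_subalg phi_coeff ncpolys_on_coeff by auto
  show "subalg_gen (s_el ` {1..<n}) \<subseteq> phi ` ncpolys_on {1..<n}"
    using subalg_in_subst_hom phi_coeff coeff_in_ncpolys by (metis image_eqI subsetI)
qed

section \<open>Normal forms of words in the twisted group of Q\<close>

text \<open>Two letters of Q anticommute iff they are a u and a v with indices at distance
  at most 1; otherwise they commute.  csign records the commutation sign.\<close>

definition anticomm :: "nat \<Rightarrow> nat \<Rightarrow> bool" where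
  "anticomm x y \<longleftrightarrow> x mod 2 \<noteq> y mod 2 \<and> x div 2 \<le> y div 2 + 1 \<and> y div 2 \<le> x div 2 + 1"

definition csign :: "nat \<Rightarrow> nat \<Rightarrow> complex" where "csign x y = (if anticomm x y then -1 else 1)"

lemma anticomm_sym: "anticomm x y = anticomm y x" unfolding anticomm_def by auto
lemma csign_sym: "csign x y = csign y x" unfolding csign_def using anticomm_sym by simp
lemma anticomm_refl: "\<not> anticomm x x" unfolding anticomm_def by simp
lemma csign_refl: "csign x x = 1" unfolding csign_def using anticomm_refl by simp
lemma csign_sq: "csign x y * csign x y = 1" unfolding csign_def by simp

text \<open>The sign acquired when the letter x is moved past the word zs.\<close>
definition pass_sign :: "nat \<Rightarrow> nat list \<Rightarrow> complex" where "pass_sign x zs = prod_list (map (\<lambda>z. csign z x) zs)"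

text \<open>Normal forms are pairs (sign, strictly increasing list of letters).  ins x L
  multiplies the sorted word L by the letter x on the right: x is moved to its place,
  and if it is already present the two copies cancel (x * x = -1).\<close>
fun ins :: "nat \<Rightarrow> nat list \<Rightarrow> complex \<times> nat list" where
  "ins x [] = (1, [x])"
| "ins x (y # ys) = (if y < x then (fst (ins x ys), y # snd (ins x ys))
     else if y = x then (- pass_sign x ys, ys) else (pass_sign x (y # ys), x # y # ys))"

definition nf_step :: "complex \<times> nat list \<Rightarrow> nat \<Rightarrow> complex \<times> nat list" where
  "nf_step st x = (fst st * fst (ins x (snd st)), snd (ins x (snd st)))"

definition nf_run :: "complex \<times> nat list \<Rightarrow> nat list \<Rightarrow> complex \<times> nat list" where
  "nf_run st w = foldl nf_step st w"

definition nf :: "nat list \<Rightarrow> complex \<times> nat list" where "nf w = nf_run (1, []) w"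

lemma nf_run_Nil[simp]: "nf_run st [] = st" by (simp add: nf_run_def)
lemma nf_run_Cons: "nf_run st (x # w) = nf_run (nf_step st x) w" by (simp add: nf_run_def)
lemma nf_run_append: "nf_run st (u @ v) = nf_run (nf_run st u) v" by (simp add: nf_run_def)
lemma nf_run_snoc: "nf_run st (u @ [x]) = nf_step (nf_run st u) x" by (simp add: nf_run_def)

definition toggle :: "'a set \<Rightarrow> 'a \<Rightarrow> 'a set" where
  "toggle A x = (if x \<in> A then A - {x} else insert x A)"

text \<open>The closed form of the sign produced by ins.\<close>
definition ins_sign :: "nat \<Rightarrow> nat set \<Rightarrow> complex" where
  "ins_sign x A = (\<Prod>y\<in>{y\<in>A. x < y}. csign y x) * (if x \<in> A then -1 else 1)"

abbreviation strict_sorted :: "nat list \<Rightarrow> bool" where "strict_sorted L \<equiv> sorted_wrt (<) L"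

lemma pass_sign_set: "strict_sorted zs \<Longrightarrow> pass_sign x zs = (\<Prod>z\<in>set zs. csign z x)"
  unfolding pass_sign_def by (simp add: prod.distinct_set_conv_list[symmetric] strict_sorted_iff)

lemma ins_props:
  "strict_sorted L \<Longrightarrow> strict_sorted (snd (ins x L)) \<and> set (snd (ins x L)) = toggle (set L) x \<and> fst (ins x L) = ins_sign x (set L)"
proof (induction L)
  case Nil then show ?case by (simp add: toggle_def ins_sign_def)
next
  case (Cons y ys)
  have sys: "strict_sorted ys" and gy: "\<forall>z\<in>set ys. y < z" using Cons.prems by auto
  show ?case
  proof (cases "y < x")
    case True
    with Cons.IH[OF sys] have IH: "strict_sorted (snd (ins x ys))" "set (snd (ins x ys)) = toggle (set ys) x"
        "fst (ins x ys) = ins_sign x (set ys)" by auto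
    have "\<forall>z\<in>set (snd (ins x ys)). y < z" using IH(2) gy True by (auto simp: toggle_def split: if_splits)
    moreover have "{z \<in> insert y (set ys). x < z} = {z\<in>set ys. x < z}" using True by auto
    ultimately show ?thesis using True IH by (auto simp: toggle_def ins_sign_def)
  next
    case False
    show ?thesis
    proof (cases "y = x")
      case True
      have "x \<notin> set ys" using gy True by auto
      moreover have "{z \<in> insert x (set ys). x < z} = set ys" using gy True by auto
      ultimately show ?thesis using True sys Cons.prems
        by (auto simp: toggle_def ins_sign_def pass_sign_set)
    next
      case False2: False
      with False have xy: "x < y" by simp
      have "x \<notin> set (y # ys)" using gy xy by auto
      moreover have "{z \<in> set (y # ys). x < z} = set (y # ys)" using gy xy by auto
      moreover have "strict_sorted (x # y # ys)" using Cons.prems gy xy by auto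
      ultimately show ?thesis using xy False2 Cons.prems
        by (auto simp: toggle_def ins_sign_def pass_sign_set)
    qed
  qed
qed

lemma nf_step_strict_sorted: "strict_sorted (snd st) \<Longrightarrow> strict_sorted (snd (nf_step st x))"
  using ins_props by (simp add: nf_step_def)
lemma nf_step_set: "strict_sorted (snd st) \<Longrightarrow> set (snd (nf_step st x)) = toggle (set (snd st)) x"
  using ins_props by (simp add: nf_step_def)
lemma nf_step_fst: "strict_sorted (snd st) \<Longrightarrow> fst (nf_step st x) = fst st * ins_sign x (set (snd st))"
  using ins_props by (simp add: nf_step_def)

lemma nf_run_strict_sorted: "strict_sorted (snd st) \<Longrightarrow> strict_sorted (snd (nf_run st w))"
  by (induction w arbitrary: st) (auto simp: nf_run_Cons nf_step_strict_sorted)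

lemma nf_run_scale: "nf_run (c * s, L) w = (c * fst (nf_run (s, L) w), snd (nf_run (s, L) w))"
proof (induction w arbitrary: s L)
  case Nil then show ?case by simp
next
  case (Cons x w)
  have "nf_step (c * s, L) x = (c * fst (nf_step (s, L) x), snd (nf_step (s, L) x))"
    by (simp add: nf_step_def)
  then show ?case using Cons.IH[of "s * fst (ins x L)" "snd (ins x L)"]
    by (simp add: nf_run_Cons nf_step_def mult.assoc)
qed

lemma nf_run_factor_sign: "nf_run (c, L) w = (c * fst (nf_run (1, L) w), snd (nf_run (1, L) w))"
  using nf_run_scale[of c 1 L w] by simp

lemma ins_sign_toggle:
  assumes "finite A" "a \<noteq> b"
  shows "ins_sign b (toggle A a) = ins_sign b A * (if b < a then csign a b else 1)"
proof -
  have mem: "(b \<in> toggle A a) = (b \<in> A)" using assms by (auto simp: toggle_def)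
  have trf: "finite {y\<in>A. b < y}" using assms by simp
  have P: "(\<Prod>y\<in>{y\<in>toggle A a. b < y}. csign y b) = (\<Prod>y\<in>{y\<in>A. b < y}. csign y b) * (if b < a then csign a b else 1)"
  proof (cases "b < a")
    case True
    show ?thesis
    proof (cases "a \<in> A")
      case True2: True
      have "{y\<in>toggle A a. b < y} = {y\<in>A. b < y} - {a}" using True2 by (auto simp: toggle_def)
      moreover have "(\<Prod>y\<in>{y\<in>A. b < y}. csign y b) = csign a b * (\<Prod>y\<in>{y\<in>A. b < y} - {a}. csign y b)"
        using True True2 trf by (simp add: prod.remove)
      ultimately show ?thesis using True csign_sq[of a b] by (simp add: mult.assoc mult.commute mult.left_commute)
    next
      case False2: False
      have "{y\<in>toggle A a. b < y} = insert a {y\<in>A. b < y}" using False2 True by (auto simp: toggle_def)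
      then show ?thesis using False2 trf True by (simp add: mult.commute)
    qed
  next
    case False
    then have "{y\<in>toggle A a. b < y} = {y\<in>A. b < y}" by (auto simp: toggle_def)
    then show ?thesis using False by simp
  qed
  show ?thesis unfolding ins_sign_def using P mem by simp
qed

lemma toggle_comm: "toggle (toggle A a) b = toggle (toggle A b) a"
  by (auto simp: toggle_def)

lemma toggle_self: "toggle (toggle A a) a = A"
  by (auto simp: toggle_def)

lemma nf_step_comm:
  assumes "strict_sorted (snd st)" "a \<noteq> b"
  shows "nf_step (nf_step st a) b = (csign a b * fst (nf_step (nf_step st b) a), snd (nf_step (nf_step st b) a))"
proof -
  let ?A = "set (snd st)"
  have s1: "strict_sorted (snd (nf_step st a))" "strict_sorted (snd (nf_step st b))" using assms nf_step_strict_sorted by auto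
  have sets: "snd (nf_step (nf_step st a) b) = snd (nf_step (nf_step st b) a)"
  proof -
    have "strict_sorted (snd (nf_step (nf_step st a) b))" "strict_sorted (snd (nf_step (nf_step st b) a))" using s1 nf_step_strict_sorted by auto
    moreover have "set (snd (nf_step (nf_step st a) b)) = set (snd (nf_step (nf_step st b) a))"
      using s1 assms by (simp add: nf_step_set toggle_comm)
    ultimately show ?thesis by (simp add: strict_sorted_equal)
  qed
  have f: "finite ?A" by simp
  have "fst (nf_step (nf_step st a) b) = fst st * ins_sign a ?A * ins_sign b (toggle ?A a)"
    using assms s1 by (simp add: nf_step_fst nf_step_set)
  also have "\<dots> = fst st * ins_sign a ?A * ins_sign b ?A * (if b < a then csign a b else 1)"
    using ins_sign_toggle[OF f assms(2)] by simp
  finally have e1: "fst (nf_step (nf_step st a) b) = fst st * ins_sign a ?A * ins_sign b ?A * (if b < a then csign a b else 1)" .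
  have "fst (nf_step (nf_step st b) a) = fst st * ins_sign b ?A * ins_sign a (toggle ?A b)"
    using assms s1 by (simp add: nf_step_fst nf_step_set)
  also have "\<dots> = fst st * ins_sign b ?A * ins_sign a ?A * (if a < b then csign b a else 1)"
    using ins_sign_toggle[OF f, of b a] assms(2) by simp
  finally have e2: "fst (nf_step (nf_step st b) a) = fst st * ins_sign b ?A * ins_sign a ?A * (if a < b then csign b a else 1)" .
  have "fst (nf_step (nf_step st a) b) = csign a b * fst (nf_step (nf_step st b) a)"
    unfolding e1 e2 using assms(2) csign_sq[of a b] csign_sym[of a b]
    by (cases "a < b") (auto simp: algebra_simps)
  with sets show ?thesis by (metis prod.collapse)
qed

lemma nf_step_sq:
  assumes "strict_sorted (snd st)"
  shows "nf_step (nf_step st a) a = (- fst st, snd st)"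
proof -
  let ?A = "set (snd st)"
  have s1: "strict_sorted (snd (nf_step st a))" using assms nf_step_strict_sorted by auto
  have "strict_sorted (snd (nf_step (nf_step st a) a))" using s1 nf_step_strict_sorted by auto
  moreover have "set (snd (nf_step (nf_step st a) a)) = set (snd st)"
    using s1 assms by (simp add: nf_step_set toggle_self)
  ultimately have sets: "snd (nf_step (nf_step st a) a) = snd st" using assms by (simp add: strict_sorted_equal)
  have "{y\<in>toggle ?A a. a < y} = {y\<in>?A. a < y}" by (auto simp: toggle_def)
  moreover have "(a \<in> toggle ?A a) = (a \<notin> ?A)" by (auto simp: toggle_def)
  ultimately have "ins_sign a (toggle ?A a) * ins_sign a ?A = - ((\<Prod>y\<in>{y\<in>?A. a < y}. csign y a) * (\<Prod>y\<in>{y\<in>?A. a < y}. csign y a))"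
    unfolding ins_sign_def by auto
  also have "(\<Prod>y\<in>{y\<in>?A. a < y}. csign y a) * (\<Prod>y\<in>{y\<in>?A. a < y}. csign y a) = 1"
    by (simp add: prod.distrib[symmetric] csign_sq)
  finally have "ins_sign a (toggle ?A a) * ins_sign a ?A = -1" by simp
  moreover have e: "fst (nf_step (nf_step st a) a) = fst st * ins_sign a ?A * ins_sign a (toggle ?A a)"
    using assms s1 by (simp add: nf_step_fst nf_step_set)
  moreover have "fst st * ins_sign a ?A * ins_sign a (toggle ?A a) = fst st * (ins_sign a (toggle ?A a) * ins_sign a ?A)"
    by (simp only: mult.assoc mult.commute[of "ins_sign a ?A"])
  ultimately have "fst (nf_step (nf_step st a) a) = - fst st" by simp
  with sets show ?thesis by (metis prod.collapse)
qed

lemma nf_run_rescale_fst: "nf_run (c * fst st, snd st) w = (c * fst (nf_run st w), snd (nf_run st w))"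
  using nf_run_scale[of c "fst st" "snd st" w] by simp

lemma nf_run_neg: "nf_run (- fst st, snd st) w = (- fst (nf_run st w), snd (nf_run st w))"
  using nf_run_rescale_fst[of "-1" st w] by simp

lemma nf_run_rel_sq:
  assumes "strict_sorted (snd st)"
  shows "nf_run st (p @ [a, a] @ q) = (- fst (nf_run st (p @ q)), snd (nf_run st (p @ q)))"
proof -
  have "strict_sorted (snd (nf_run st p))" using assms nf_run_strict_sorted by auto
  then have "nf_step (nf_step (nf_run st p) a) a = (- fst (nf_run st p), snd (nf_run st p))"
    by (rule nf_step_sq)
  then show ?thesis
    by (simp add: nf_run_append nf_run_Cons nf_run_neg)
qed

lemma nf_run_rel_comm:
  assumes "strict_sorted (snd st)" "a \<noteq> b"
  shows "nf_run st (p @ [a, b] @ q) = (csign a b * fst (nf_run st (p @ [b, a] @ q)), snd (nf_run st (p @ [b, a] @ q)))"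
proof -
  have "strict_sorted (snd (nf_run st p))" using assms nf_run_strict_sorted by auto
  then have "nf_step (nf_step (nf_run st p) a) b = (csign a b * fst (nf_step (nf_step (nf_run st p) b) a), snd (nf_step (nf_step (nf_run st p) b) a))"
    by (rule nf_step_comm[OF _ assms(2)])
  then show ?thesis
    by (simp add: nf_run_append nf_run_Cons nf_run_rescale_fst)
qed

definition odd_letters :: "nat list \<Rightarrow> nat set" where "odd_letters w = {y. odd (count_list w y)}"

lemma odd_letters_Nil[simp]: "odd_letters [] = {}" by (simp add: odd_letters_def)
lemma odd_letters_snoc: "odd_letters (w @ [x]) = toggle (odd_letters w) x"
  by (auto simp: odd_letters_def toggle_def)
lemma odd_letters_Cons: "odd_letters (x # w) = toggle (odd_letters w) x"
  by (auto simp: odd_letters_def toggle_def)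
lemma odd_letters_sub: "odd_letters w \<subseteq> set w"
proof
  fix x assume "x \<in> odd_letters w"
  then have "odd (count_list w x)" by (simp add: odd_letters_def)
  then have "count_list w x \<noteq> 0" by (metis even_zero)
  then show "x \<in> set w" using count_list_0_iff by metis
qed
lemma finite_odd_letters: "finite (odd_letters w)" using odd_letters_sub finite_subset by blast

definition symdiff :: "'a set \<Rightarrow> 'a set \<Rightarrow> 'a set" where "symdiff A B = (A - B) \<union> (B - A)"

lemma symdiff_toggle: "symdiff A (toggle B x) = toggle (symdiff A B) x"
  by (auto simp: symdiff_def toggle_def)

lemma nf_run_set: "strict_sorted (snd st) \<Longrightarrow> set (snd (nf_run st w)) = symdiff (set (snd st)) (odd_letters w)"
proof (induction w rule: rev_induct)
  case Nil then show ?case by (simp add: symdiff_def)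
next
  case (snoc x w)
  then show ?case by (simp add: nf_run_snoc nf_step_set nf_run_strict_sorted odd_letters_snoc symdiff_toggle)
qed

lemma nf_strict_sorted: "strict_sorted (snd (nf w))" unfolding nf_def by (rule nf_run_strict_sorted) simp
lemma nf_set: "set (snd (nf w)) = odd_letters w" unfolding nf_def by (simp add: nf_run_set symdiff_def)

lemma pass_sign_cases: "pass_sign x zs = 1 \<or> pass_sign x zs = -1"
  by (induction zs) (auto simp: pass_sign_def csign_def)

lemma ins_cases: "fst (ins x L) = 1 \<or> fst (ins x L) = -1"
proof (induction L)
  case Nil then show ?case by simp
next
  case (Cons y ys)
  have "- pass_sign x ys = 1 \<or> - pass_sign x ys = -1" using pass_sign_cases[of x ys] by auto
  then show ?case using Cons pass_sign_cases[of x "y # ys"] by auto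
qed

lemma fst_nf_run_cases: "fst (nf_run (1, L) w) = 1 \<or> fst (nf_run (1, L) w) = -1"
proof (induction w rule: rev_induct)
  case Nil then show ?case by simp
next
  case (snoc x w)
  have "fst (nf_run (1, L) (w @ [x])) = fst (nf_run (1, L) w) * fst (ins x (snd (nf_run (1, L) w)))"
    by (simp add: nf_run_snoc nf_step_def)
  then show ?case using snoc ins_cases[of x "snd (nf_run (1, L) w)"] by auto
qed

lemma fst_nf_sq: "fst (nf w) * fst (nf w) = 1"
  using fst_nf_run_cases[of "[]" w] unfolding nf_def by auto

definition rescale :: "complex \<Rightarrow> complex \<times> nat list \<Rightarrow> complex \<times> nat list" where
  "rescale c st = (c * fst st, snd st)"

lemma nf_run_rescale: "nf_run (rescale c st) w = rescale c (nf_run st w)"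
  unfolding rescale_def by (rule nf_run_rescale_fst)

lemma nf_step_comm_rescale: "strict_sorted (snd st) \<Longrightarrow> a \<noteq> b \<Longrightarrow> nf_step (nf_step st a) b = rescale (csign a b) (nf_step (nf_step st b) a)"
  using nf_step_comm unfolding rescale_def by blast

lemma rescale_rescale: "rescale c (rescale d st) = rescale (c * d) st" by (simp add: rescale_def mult.assoc)

lemma nf_run_rot: "strict_sorted (snd st) \<Longrightarrow> nf_run st (x # w) = rescale (prod_list (map (csign x) w)) (nf_run st (w @ [x]))"
proof (induction w arbitrary: st)
  case Nil then show ?case by (simp add: rescale_def nf_run_Cons)
next
  case (Cons y w)
  have s1: "strict_sorted (snd (nf_step st y))" using Cons.prems nf_step_strict_sorted by blast
  have "nf_run st (x # y # w) = nf_run (nf_step (nf_step st x) y) w" by (simp add: nf_run_Cons)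
  also have "nf_step (nf_step st x) y = rescale (csign x y) (nf_step (nf_step st y) x)"
  proof (cases "x = y")
    case True then show ?thesis by (simp add: csign_refl rescale_def)
  next
    case False then show ?thesis using nf_step_comm_rescale[OF Cons.prems False] by simp
  qed
  also have "nf_run (rescale (csign x y) (nf_step (nf_step st y) x)) w = rescale (csign x y) (nf_run (nf_step st y) (x # w))"
    by (simp add: nf_run_rescale nf_run_Cons)
  also have "\<dots> = rescale (csign x y) (rescale (prod_list (map (csign x) w)) (nf_run (nf_step st y) (w @ [x])))"
    using Cons.IH[OF s1] by simp
  finally show ?case by (simp add: rescale_rescale nf_run_Cons)
qed

lemma nf_run_comm_words:
  assumes "\<forall>a\<in>set w. \<forall>b\<in>set v. csign a b = 1" "strict_sorted (snd st)"
  shows "nf_run st (w @ v @ u) = nf_run st (v @ w @ u)"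
  using assms
proof (induction w arbitrary: st)
  case Nil then show ?case by simp
next
  case (Cons a w)
  have s1: "strict_sorted (snd (nf_step st a))" using Cons.prems nf_step_strict_sorted by blast
  have IH: "nf_run (nf_step st a) (w @ v @ u) = nf_run (nf_step st a) (v @ w @ u)"
    using Cons.IH[OF _ s1] Cons.prems(1) by simp
  have "prod_list (map (csign a) v) = 1" using Cons.prems(1)
    by (induction v) auto
  then have r: "nf_run st (a # v) = nf_run st (v @ [a])"
    using nf_run_rot[OF Cons.prems(2), of a v] by (simp add: rescale_def)
  have "nf_run st ((a # w) @ v @ u) = nf_run (nf_step st a) (v @ w @ u)" using IH by (simp add: nf_run_Cons)
  also have "\<dots> = nf_run (nf_run st (a # v)) (w @ u)" by (simp add: nf_run_Cons nf_run_append)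
  also have "\<dots> = nf_run (nf_run st (v @ [a])) (w @ u)" using r by simp
  also have "\<dots> = nf_run st ((v @ [a]) @ (w @ u))" by (rule nf_run_append[symmetric])
  finally show ?case by simp
qed

lemma prod_toggle:
  assumes "finite A"
  shows "(\<Prod>y\<in>toggle A z. csign x y) = csign x z * (\<Prod>y\<in>A. csign x y)"
proof (cases "z \<in> A")
  case True
  then have "(\<Prod>y\<in>A. csign x y) = csign x z * (\<Prod>y\<in>A - {z}. csign x y)" using assms by (simp add: prod.remove)
  then have "csign x z * (\<Prod>y\<in>A. csign x y) = (\<Prod>y\<in>A - {z}. csign x y)"
    using csign_sq[of x z] by (simp add: mult.assoc[symmetric])
  then show ?thesis using True by (simp add: toggle_def)
next
  case False then show ?thesis using assms by (simp add: toggle_def)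
qed

lemma prod_csign_odd_letters: "prod_list (map (csign x) w) = (\<Prod>y\<in>odd_letters w. csign x y)"
  by (induction w) (simp_all add: odd_letters_Cons prod_toggle finite_odd_letters)

section \<open>The trace tau and the null space of Q\<close>

definition word_tr :: "nat list \<Rightarrow> complex" where "word_tr w = (if snd (nf w) = [] then fst (nf w) else 0)"

text \<open>Rotating a word: the sign is the product of csign x y over the letters y occurring
  oddly in w; when the normal form is 1 these are just x itself, so the sign is 1.\<close>
lemma word_tr_rot: "word_tr (x # w) = word_tr (w @ [x])"
proof -
  have e: "nf (x # w) = rescale (prod_list (map (csign x) w)) (nf (w @ [x]))"
    unfolding nf_def by (rule nf_run_rot) simp
  show ?thesis
  proof (cases "snd (nf (w @ [x])) = []")
    case True
    then have "odd_letters (w @ [x]) = {}" using nf_set[of "w @ [x]"] by simp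
    then have "odd_letters w = {x}" by (auto simp: odd_letters_snoc toggle_def split: if_splits)
    then have "prod_list (map (csign x) w) = 1" by (simp add: prod_csign_odd_letters csign_refl)
    then show ?thesis using e by (simp add: word_tr_def rescale_def)
  next
    case False then show ?thesis using e by (simp add: word_tr_def rescale_def)
  qed
qed

lemma word_tr_swap: "word_tr (a @ b) = word_tr (b @ a)"
proof (induction a arbitrary: b)
  case Nil then show ?case by simp
next
  case (Cons x a)
  have "word_tr ((x # a) @ b) = word_tr (a @ b @ [x])" using word_tr_rot[of x "a @ b"] by simp
  also have "\<dots> = word_tr ((b @ [x]) @ a)" using Cons.IH[of "b @ [x]"] by simp
  finally show ?case by simp
qed

definition tau :: "fpoly \<Rightarrow> complex" where "tau x = lin word_tr x"

lemma tau_comm: "tau (x * y) = tau (y * x)"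
  unfolding tau_def lin_mult by (subst sum.swap) (simp add: word_tr_swap mult.commute)

lemma tau_add: "tau (x + y) = tau x + tau y" by (simp add: tau_def lin_add)

lemma tau_scal: "tau (scal c * x) = c * tau x" by (simp add: tau_def lin_scal)

lemma tau_diff: "tau (x - y) = tau x - tau y" by (simp add: tau_def lin_diff)

lemma tau_one: "tau 1 = 1"
  using lin_mon[of word_tr "[]"] by (simp add: tau_def mon_nil word_tr_def nf_def)

lemma tau_vanish:
  assumes X: "\<forall>c\<in>supp (coeff X). l \<notin> set c" and w: "odd (count_list w l)"
  shows "tau (X * mon w) = 0"
proof -
  have "tau (X * mon w) = lin (\<lambda>c. word_tr (c @ w)) X" by (simp add: tau_def lin_mult_mon)
  also have "\<dots> = 0" unfolding lin_expl
  proof (rule sum.neutral, rule ballI)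
    fix c assume c: "c \<in> supp (coeff X)"
    have "count_list c l = 0" using X c by (simp add: count_list_0_iff)
    then have "l \<in> odd_letters (c @ w)" using w by (simp add: odd_letters_def)
    then have "snd (nf (c @ w)) \<noteq> []" using nf_set[of "c @ w"] by auto
    then show "coeff X c * word_tr (c @ w) = 0" by (simp add: word_tr_def)
  qed
  finally show ?thesis .
qed

text \<open>qnull x: x becomes zero once every word is replaced by its normal form.  Since the
  normal-form coefficients can be tested against arbitrary weights g, this says that all
  normal-form coefficients of x vanish.\<close>
definition qnull :: "fpoly \<Rightarrow> bool" where
  "qnull x \<longleftrightarrow> (\<forall>g. lin (\<lambda>a. fst (nf a) * g (snd (nf a))) x = 0)"

lemma qnull_zero: "qnull 0" by (simp add: qnull_def lin_zero)
lemma qnull_add: "qnull x \<Longrightarrow> qnull y \<Longrightarrow> qnull (x + y)" by (simp add: qnull_def lin_add)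

lemma nf_append: "nf (a @ b) = (fst (nf a) * fst (nf_run (1, snd (nf a)) b), snd (nf_run (1, snd (nf a)) b))"
proof -
  have "nf (a @ b) = nf_run (fst (nf a), snd (nf a)) b" by (simp add: nf_def nf_run_append)
  then show ?thesis using nf_run_factor_sign[of "fst (nf a)" "snd (nf a)" b] by simp
qed

lemma qnull_mult: "qnull x \<Longrightarrow> qnull (x * y)"
proof -
  assume x: "qnull x"
  show "qnull (x * y)" unfolding qnull_def
  proof
    fix g
    define trf where "trf b M = fst (nf_run (1, M) b) * g (snd (nf_run (1, M) b))" for b M
    define g' where "g' M = (\<Sum>b\<in>supp (coeff y). coeff y b * trf b M)" for M
    have "lin (\<lambda>a. fst (nf a) * g (snd (nf a))) (x * y)
       = (\<Sum>a\<in>supp (coeff x). \<Sum>b\<in>supp (coeff y). coeff x a * coeff y b * (fst (nf a) * trf b (snd (nf a))))"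
      unfolding lin_mult by (simp add: nf_append trf_def mult.assoc)
    also have "\<dots> = (\<Sum>a\<in>supp (coeff x). coeff x a * (fst (nf a) * g' (snd (nf a))))"
      unfolding g'_def by (simp add: sum_distrib_left sum_distrib_right mult_ac)
    also have "\<dots> = lin (\<lambda>a. fst (nf a) * g' (snd (nf a))) x" by (simp add: lin_expl)
    also have "\<dots> = 0" using x by (simp add: qnull_def)
    finally show "lin (\<lambda>a. fst (nf a) * g (snd (nf a))) (x * y) = 0" .
  qed
qed

lemma word_tr_alt: "word_tr a = fst (nf a) * (if snd (nf a) = [] then 1 else 0)"
  by (simp add: word_tr_def)

lemma tau_qnull: "qnull x \<Longrightarrow> tau x = 0"
  unfolding tau_def qnull_def word_tr_alt by (drule spec[where x="\<lambda>M. if M = [] then 1 else 0"]) simp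

definition Qnull :: "fpoly set" where "Qnull = {y. \<forall>p. qnull (p * y)}"

lemma Qnull_zero: "0 \<in> Qnull" by (simp add: Qnull_def qnull_zero)
lemma Qnull_add: "x \<in> Qnull \<Longrightarrow> y \<in> Qnull \<Longrightarrow> x + y \<in> Qnull"
  by (simp add: Qnull_def distrib_left qnull_add)
lemma Qnull_mult: "x \<in> Qnull \<Longrightarrow> p * x * r \<in> Qnull"
proof -
  assume "x \<in> Qnull"
  then have "qnull (p' * p * x * r)" for p' using qnull_mult by (simp add: Qnull_def mult.assoc[symmetric])
  then show "p * x * r \<in> Qnull" by (simp add: Qnull_def mult.assoc)
qed
lemma Qnull_tau: "x \<in> Qnull \<Longrightarrow> tau (y * x) = 0"
  by (simp add: Qnull_def tau_qnull)

lemma tau_Qnull: "y \<in> Qnull \<Longrightarrow> tau y = 0" using Qnull_tau[of y 1] by simp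

lemma Qnull_word_rel:
  assumes "\<And>c. nf (c @ u) = (k * fst (nf (c @ v)), snd (nf (c @ v)))"
  shows "mon u - scal k * mon v \<in> Qnull"
proof -
  have "qnull (p * (mon u - scal k * mon v))" for p
    unfolding qnull_def
  proof
    fix g
    have "p * (mon u - scal k * mon v) = p * mon u - scal k * (p * mon v)"
      by (simp only: right_diff_distrib mult.assoc[symmetric] scal_comm[of k p, symmetric])
    then have "lin (\<lambda>a. fst (nf a) * g (snd (nf a))) (p * (mon u - scal k * mon v))
      = lin (\<lambda>c. fst (nf (c @ u)) * g (snd (nf (c @ u))) - k * (fst (nf (c @ v)) * g (snd (nf (c @ v))))) p"
      by (simp add: lin_diff lin_scal lin_mult_mon lin_diff_fun lin_smul_fun)
    also have "\<dots> = 0"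
      by (rule lin_zero_fun) (simp add: assms)
    finally show "lin (\<lambda>a. fst (nf a) * g (snd (nf a))) (p * (mon u - scal k * mon v)) = 0" .
  qed
  then show ?thesis by (simp add: Qnull_def)
qed

lemma Qnull_sq: "mon [a, a] + 1 \<in> Qnull"
proof -
  have "nf (c @ [a, a]) = (- 1 * fst (nf (c @ [])), snd (nf (c @ [])))" for c
    using nf_run_rel_sq[of "(1, [])" c a "[]"] by (simp add: nf_def)
  from Qnull_word_rel[OF this] show ?thesis by (simp add: mon_nil scal_uminus scal_one)
qed

lemma Qnull_comm: "a \<noteq> b \<Longrightarrow> mon [a, b] - scal (csign a b) * mon [b, a] \<in> Qnull"
  by (rule Qnull_word_rel) (use nf_run_rel_comm[of "(1, [])" a b _ "[]"] in \<open>simp add: nf_def\<close>)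

lemma Qnull_comm_words:
  assumes "\<forall>a\<in>set w. \<forall>b\<in>set v. csign a b = 1"
  shows "mon w * mon v - mon v * mon w \<in> Qnull"
proof -
  have "nf (c @ w @ v) = (1 * fst (nf (c @ v @ w)), snd (nf (c @ v @ w)))" for c
    unfolding nf_def nf_run_append[of _ c]
    using nf_run_comm_words[OF assms, of "nf_run (1, []) c" "[]"] nf_run_strict_sorted[of "(1, [])" c] by simp
  from Qnull_word_rel[OF this] show ?thesis by (simp add: mon_append scal_one)
qed

lemma Qnull_scal: "x \<in> Qnull \<Longrightarrow> scal c * x \<in> Qnull" using Qnull_mult[of x "scal c" 1] by simp

lemma Qnull_comm_Pol:
  assumes x: "x \<in> Pol A" and y: "y \<in> Pol B" and c: "\<forall>a\<in>A. \<forall>b\<in>B. csign a b = 1"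
  shows "x * y - y * x \<in> Qnull"
  using x
proof (induction x rule: Pol_induct)
  case zero then show ?case by (simp add: Qnull_zero)
next
  case (add a b)
  have "(a + b) * y - y * (a + b) = (a * y - y * a) + (b * y - y * b)" by (simp add: algebra_simps)
  then show ?case using add Qnull_add by simp
next
  case (mon c1 w)
  show ?case using y
  proof (induction y rule: Pol_induct)
    case zero then show ?case by (simp add: Qnull_zero)
  next
    case (add a b)
    have "scal c1 * mon w * (a + b) - (a + b) * (scal c1 * mon w) = (scal c1 * mon w * a - a * (scal c1 * mon w)) + (scal c1 * mon w * b - b * (scal c1 * mon w))"
      by (simp add: algebra_simps)
    then show ?case using add Qnull_add by simp
  next
    case (mon c2 v)
    have "\<forall>a\<in>set w. \<forall>b\<in>set v. csign a b = 1" using c mon.hyps \<open>set w \<subseteq> A\<close> by blast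
    then have z: "mon w * mon v - mon v * mon w \<in> Qnull" by (rule Qnull_comm_words)
    have "scal c1 * mon w * (scal c2 * mon v) - scal c2 * mon v * (scal c1 * mon w) = scal (c1 * c2) * (mon w * mon v - mon v * mon w)"
    proof -
      have "scal c1 * mon w * (scal c2 * mon v) = scal (c1 * c2) * (mon w * mon v)"
        using mon_scal_mult[of c1 w c2 v] by (simp add: mon_append)
      moreover have "scal c2 * mon v * (scal c1 * mon w) = scal (c1 * c2) * (mon v * mon w)"
        using mon_scal_mult[of c2 v c1 w] by (simp add: mon_append mult.commute)
      ultimately show ?thesis by (simp add: right_diff_distrib)
    qed
    then show ?case using Qnull_scal[OF z] by simp
  qed
qed

section \<open>Q_ideal is exactly the null space\<close>

definition Qid :: "nat \<Rightarrow> fpoly set" where "Qid n = {x. coeff x \<in> Q_ideal n}"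

abbreviation Qpol :: "nat \<Rightarrow> fpoly set" where "Qpol n \<equiv> Pol (Q_letters n)"

lemma Qid_zero: "0 \<in> Qid n"
  by (simp add: Qid_def Q_ideal_def coeff_zero ideal_gen.zero)
lemma Qid_add: "x \<in> Qid n \<Longrightarrow> y \<in> Qid n \<Longrightarrow> x + y \<in> Qid n"
  by (simp add: Qid_def Q_ideal_def coeff_plus ideal_gen.add)
lemma Qid_mult: "x \<in> Qid n \<Longrightarrow> p \<in> Qpol n \<Longrightarrow> r \<in> Qpol n \<Longrightarrow> p * x * r \<in> Qid n"
  by (simp add: Qid_def Q_ideal_def coeff_times ideal_gen.mul coeff_in_ncpolys)
lemma Qid_gen: "coeff x \<in> Q_rels n \<Longrightarrow> x \<in> Qid n"
  by (simp add: Qid_def Q_ideal_def ideal_gen.gen)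
lemma Qid_lmult: "x \<in> Qid n \<Longrightarrow> p \<in> Qpol n \<Longrightarrow> p * x \<in> Qid n"
  using Qid_mult[of x n p 1] by (simp add: Pol_one)
lemma Qid_rmult: "x \<in> Qid n \<Longrightarrow> r \<in> Qpol n \<Longrightarrow> x * r \<in> Qid n"
  using Qid_mult[of x n 1 r] by (simp add: Pol_one)
lemma Qid_scal: "x \<in> Qid n \<Longrightarrow> scal c * x \<in> Qid n"
  by (rule Qid_lmult) (simp_all add: Pol_scal)

definition qcong :: "nat \<Rightarrow> fpoly \<Rightarrow> fpoly \<Rightarrow> bool" where "qcong n x y \<longleftrightarrow> x - y \<in> Qid n"

lemma qcong_refl: "qcong n x x" by (simp add: qcong_def Qid_zero)
lemma qcong_trans: "qcong n x y \<Longrightarrow> qcong n y z \<Longrightarrow> qcong n x z"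
  unfolding qcong_def using Qid_add by fastforce
lemma qcong_lmult: "qcong n x y \<Longrightarrow> p \<in> Qpol n \<Longrightarrow> qcong n (p * x) (p * y)"
  unfolding qcong_def using Qid_lmult by (metis right_diff_distrib)
lemma qcong_rmult: "qcong n x y \<Longrightarrow> r \<in> Qpol n \<Longrightarrow> qcong n (x * r) (y * r)"
  unfolding qcong_def using Qid_rmult by (metis left_diff_distrib)
lemma qcong_scal: "qcong n x y \<Longrightarrow> qcong n (scal c * x) (scal c * y)"
  using qcong_lmult Pol_scal by blast
lemma qcong_add: "qcong n x y \<Longrightarrow> qcong n x' y' \<Longrightarrow> qcong n (x + x') (y + y')"
  unfolding qcong_def using Qid_add by (metis add_diff_add)
lemma qcong_sum: "(\<And>i. i \<in> A \<Longrightarrow> qcong n (f i) (g i)) \<Longrightarrow> qcong n (sum f A) (sum g A)"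
  by (induction A rule: infinite_finite_induct) (auto intro: qcong_refl qcong_add)

lemma Q_letters_iff: "x \<in> Q_letters n \<longleftrightarrow> 1 \<le> x div 2 \<and> x div 2 < n"
proof
  assume "x \<in> Q_letters n" then show "1 \<le> x div 2 \<and> x div 2 < n" by (auto simp: Q_letters_def)
next
  assume h: "1 \<le> x div 2 \<and> x div 2 < n"
  have "x = 2 * (x div 2) \<or> x = 2 * (x div 2) + 1" by presburger
  then show "x \<in> Q_letters n" using h unfolding Q_letters_def by (intro UN_I[of "x div 2"]) auto
qed

lemma dist_nat_ge_2: "\<not> dist (real i) (real j) \<le> 1 \<Longrightarrow> 2 \<le> dist (real i) (real j)"
proof -
  assume h: "\<not> dist (real i) (real j) \<le> 1"
  have "dist (real i) (real j) = real (if i \<le> j then j - i else i - j)"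
    by (auto simp: dist_real_def of_nat_diff)
  with h show ?thesis by (auto split: if_splits)
qed

lemma anticomm_UV: "anticomm (2 * i) (2 * j + 1) \<longleftrightarrow> dist (real i) (real j) \<le> 1"
  by (auto simp: anticomm_def dist_real_def)

lemma rel_comm_even:
  assumes a: "a \<in> Q_letters n" and b: "b \<in> Q_letters n" and ev: "even a"
  shows "mon [a] * mon [b] - scal (csign a b) * (mon [b] * mon [a]) \<in> Qid n"
proof -
  obtain i where i: "a = 2 * i" "i \<in> {1..<n}" using a ev by (auto simp: Q_letters_iff elim!: evenE)
  show ?thesis
  proof (cases "even b")
    case True
    then obtain j where j: "b = 2 * j" "j \<in> {1..<n}" using b by (auto simp: Q_letters_iff elim!: evenE)
    have "csign a b = 1" using i j by (simp add: csign_def anticomm_def)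
    moreover have "coeff (Ugen i * Ugen j - Ugen j * Ugen i) \<in> Q_rels n"
      using i j by (simp add: Q_rels_def coeff_minus coeff_times coeff_Ugen) blast
    ultimately show ?thesis using i j by (simp add: Ugen_def Qid_gen scal_one)
  next
    case False
    then obtain j where j: "b = 2 * j + 1" "j \<in> {1..<n}" using b
      by (auto simp: Q_letters_iff elim!: oddE)
    show ?thesis
    proof (cases "dist (real i) (real j) \<le> 1")
      case True
      have "csign a b = -1" using i j True anticomm_UV by (simp add: csign_def)
      moreover have "coeff (Ugen i * Vgen j + Vgen j * Ugen i) \<in> Q_rels n"
        using i j True by (simp add: Q_rels_def coeff_plus coeff_times coeff_Ugen coeff_Vgen) blast
      ultimately show ?thesis using i j by (simp add: Ugen_def Vgen_def Qid_gen scal_uminus scal_one)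
    next
      case False
      have "csign a b = 1" using i j False anticomm_UV by (simp add: csign_def)
      moreover have "coeff (Ugen i * Vgen j - Vgen j * Ugen i) \<in> Q_rels n"
        using i j dist_nat_ge_2[OF False] by (simp add: Q_rels_def coeff_minus coeff_times coeff_Ugen coeff_Vgen) blast
      ultimately show ?thesis using i j by (simp add: Ugen_def Vgen_def Qid_gen scal_one)
    qed
  qed
qed

lemma comm_rel_swap:
  assumes "c * c = 1"
  shows "x * y - scal c * (y * x) = scal (- c) * (y * x - scal c * (x * y))"
proof -
  have "scal (- c) * (scal c * (x * y)) = - (x * y)"
    using assms by (simp add: mult.assoc[symmetric] scal_mult[symmetric] scal_uminus scal_one)
  then show ?thesis by (simp add: right_diff_distrib scal_uminus)
qed

lemma rel_ab:
  assumes a: "a \<in> Q_letters n" and b: "b \<in> Q_letters n"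
  shows "mon [a] * mon [b] - scal (csign a b) * (mon [b] * mon [a]) \<in> Qid n"
proof (cases "even a \<or> even b")
  case True
  then show ?thesis
  proof
    assume "even a" then show ?thesis by (rule rel_comm_even[OF a b])
  next
    assume "even b"
    from Qid_scal[OF rel_comm_even[OF b a this], of "- csign a b"] show ?thesis
      by (simp add: comm_rel_swap[OF csign_sq, symmetric] csign_sym[of b a])
  qed
next
  case False
  obtain i where i: "a = 2 * i + 1" "i \<in> {1..<n}" using a False by (auto simp: Q_letters_iff elim!: oddE)
  obtain j where j: "b = 2 * j + 1" "j \<in> {1..<n}" using b False by (auto simp: Q_letters_iff elim!: oddE)
  have "csign a b = 1" using i j by (simp add: csign_def anticomm_def)
  moreover have "coeff (Vgen i * Vgen j - Vgen j * Vgen i) \<in> Q_rels n"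
    using i j by (simp add: Q_rels_def coeff_minus coeff_times coeff_Vgen) blast
  ultimately show ?thesis using i j by (simp add: Vgen_def Qid_gen scal_one)
qed

lemma rel_aa:
  assumes a: "a \<in> Q_letters n"
  shows "mon [a] * mon [a] + 1 \<in> Qid n"
proof (cases "even a")
  case True
  then obtain i where i: "a = 2 * i" "i \<in> {1..<n}" using a by (auto simp: Q_letters_iff elim!: evenE)
  have "coeff (Ugen i * Ugen i + 1) \<in> Q_rels n" using i by (simp add: Q_rels_def coeff_plus coeff_times coeff_Ugen coeff_one) blast
  then show ?thesis using i by (simp add: Ugen_def Qid_gen)
next
  case False
  then obtain i where i: "a = 2 * i + 1" "i \<in> {1..<n}" using a by (auto simp: Q_letters_iff elim!: oddE)
  have "coeff (Vgen i * Vgen i + 1) \<in> Q_rels n" using i by (simp add: Q_rels_def coeff_plus coeff_times coeff_Vgen coeff_one) blast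
  then show ?thesis using i by (simp add: Vgen_def Qid_gen)
qed

lemma qcong_pass:
  assumes x: "x \<in> Q_letters n" and ys: "set ys \<subseteq> Q_letters n" and nx: "x \<notin> set ys"
  shows "qcong n (mon ys * mon [x]) (scal (pass_sign x ys) * (mon [x] * mon ys))"
  using ys nx
proof (induction ys)
  case Nil then show ?case by (simp add: pass_sign_def scal_one mon_nil qcong_refl)
next
  case (Cons z ys)
  have z: "z \<in> Q_letters n" "z \<noteq> x" and ys': "set ys \<subseteq> Q_letters n" "x \<notin> set ys" using Cons.prems by auto
  have mz: "mon [z] \<in> Qpol n" using z by (simp add: Pol_mon)
  have mys: "mon ys \<in> Qpol n" using ys' by (simp add: Pol_mon)
  have e1: "mon (z # ys) * mon [x] = mon [z] * (mon ys * mon [x])" by (simp add: mon_Cons[of z ys] mult.assoc)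
  have c1: "qcong n (mon [z] * (mon ys * mon [x])) (mon [z] * (scal (pass_sign x ys) * (mon [x] * mon ys)))"
    using Cons.IH[OF ys'] mz by (rule qcong_lmult)
  have e2: "mon [z] * (scal (pass_sign x ys) * (mon [x] * mon ys)) = scal (pass_sign x ys) * ((mon [z] * mon [x]) * mon ys)"
    by (simp add: mult.assoc[symmetric] scal_comm[of _ "mon [z]", symmetric])
  have c2: "qcong n (scal (pass_sign x ys) * ((mon [z] * mon [x]) * mon ys)) (scal (pass_sign x ys) * ((scal (csign z x) * (mon [x] * mon [z])) * mon ys))"
    using rel_ab[OF z(1) x] mys by (intro qcong_scal qcong_rmult) (simp_all add: qcong_def)
  have e3: "scal (pass_sign x ys) * ((scal (csign z x) * (mon [x] * mon [z])) * mon ys) = scal (pass_sign x (z # ys)) * (mon [x] * mon (z # ys))"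
  proof -
    have "pass_sign x (z # ys) = csign z x * pass_sign x ys" by (simp add: pass_sign_def)
    then have "scal (pass_sign x (z # ys)) = scal (pass_sign x ys) * scal (csign z x)" by (simp add: scal_mult[symmetric] mult.commute)
    then show ?thesis by (simp add: mon_Cons[of z ys] mult.assoc)
  qed
  from c1 e1 e2 have "qcong n (mon (z # ys) * mon [x]) (scal (pass_sign x ys) * ((mon [z] * mon [x]) * mon ys))" by simp
  from qcong_trans[OF this c2] show ?case by (simp only: e3)
qed

lemma qcong_cancel:
  assumes x: "x \<in> Q_letters n" and ys: "set ys \<subseteq> Q_letters n" and nx: "x \<notin> set ys"
  shows "qcong n (mon (x # ys) * mon [x]) (scal (- pass_sign x ys) * mon ys)"
proof -
  let ?p = "scal (pass_sign x ys)"
  have mx: "mon [x] \<in> Qpol n" using x by (simp add: Pol_mon)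
  have c1: "qcong n (mon [x] * (mon ys * mon [x])) (mon [x] * (?p * (mon [x] * mon ys)))"
    using qcong_pass[OF x ys nx] mx by (rule qcong_lmult)
  have "mon [x] * (?p * (mon [x] * mon ys)) = ?p * (mon [x] * mon [x] * mon ys)"
    by (simp add: mult.assoc[symmetric] scal_comm[of _ "mon [x]", symmetric])
  also have "\<dots> = ?p * ((mon [x] * mon [x] + 1) * mon ys) - ?p * mon ys"
    by (simp add: distrib_left distrib_right)
  finally have e: "mon [x] * (?p * (mon [x] * mon ys)) = ?p * ((mon [x] * mon [x] + 1) * mon ys) - ?p * mon ys" .
  have "?p * ((mon [x] * mon [x] + 1) * mon ys) \<in> Qid n"
    using rel_aa[OF x] ys by (intro Qid_scal Qid_rmult Pol_mon) auto
  then have c2: "qcong n (?p * ((mon [x] * mon [x] + 1) * mon ys) - ?p * mon ys) (scal (- pass_sign x ys) * mon ys)"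
    unfolding qcong_def by (simp add: scal_uminus)
  have "mon (x # ys) * mon [x] = mon [x] * (mon ys * mon [x])" by (simp add: mon_Cons[of x ys] mult.assoc)
  with qcong_trans[OF c1[unfolded e] c2] show ?thesis by simp
qed

lemma qcong_ins:
  assumes L: "strict_sorted L" "set L \<subseteq> Q_letters n" and x: "x \<in> Q_letters n"
  shows "qcong n (mon L * mon [x]) (scal (fst (ins x L)) * mon (snd (ins x L)))"
  using L
proof (induction L)
  case Nil then show ?case by (simp add: scal_one mon_nil qcong_refl)
next
  case (Cons y ys)
  have ys: "strict_sorted ys" "set ys \<subseteq> Q_letters n" and y: "y \<in> Q_letters n" and gy: "\<forall>z\<in>set ys. y < z"
    using Cons.prems by auto
  consider (less) "y < x" | (eq) "y = x" | (greater) "x < y" by linarith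
  then show ?case
  proof cases
    case less
    have "qcong n (mon [y] * (mon ys * mon [x])) (mon [y] * (scal (fst (ins x ys)) * mon (snd (ins x ys))))"
      using Cons.IH[OF ys] y by (intro qcong_lmult Pol_mon) auto
    moreover have "mon [y] * (scal (fst (ins x ys)) * mon (snd (ins x ys))) = scal (fst (ins x ys)) * mon (y # snd (ins x ys))"
      by (simp add: mon_Cons[of y "snd (ins x ys)"] mult.assoc[symmetric] scal_comm[of _ "mon [y]", symmetric])
    ultimately show ?thesis using less by (simp add: mon_Cons[of y ys] mult.assoc)
  next
    case eq
    then show ?thesis using qcong_cancel[OF x ys(2)] gy by auto
  next
    case greater
    have "x \<notin> set (y # ys)" using gy greater by auto
    then have "qcong n (mon (y # ys) * mon [x]) (scal (pass_sign x (y # ys)) * (mon [x] * mon (y # ys)))"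
      using qcong_pass[OF x] Cons.prems by auto
    then show ?thesis using greater by (simp add: mon_Cons[of x "y # ys"])
  qed
qed

lemma qcong_nf:
  assumes "set w \<subseteq> Q_letters n"
  shows "qcong n (mon w) (scal (fst (nf w)) * mon (snd (nf w)))"
  using assms
proof (induction w rule: rev_induct)
  case Nil then show ?case by (simp add: nf_def scal_one qcong_refl)
next
  case (snoc x w)
  have w: "set w \<subseteq> Q_letters n" and x: "x \<in> Q_letters n" using snoc.prems by auto
  have sL: "set (snd (nf w)) \<subseteq> Q_letters n" using w odd_letters_sub[of w] by (simp add: nf_set)
  have mx: "mon [x] \<in> Qpol n" using x by (simp add: Pol_mon)
  have c1: "qcong n (mon w * mon [x]) (scal (fst (nf w)) * mon (snd (nf w)) * mon [x])"
    using snoc.IH[OF w] mx by (rule qcong_rmult)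
  have c2: "qcong n (scal (fst (nf w)) * (mon (snd (nf w)) * mon [x]))
      (scal (fst (nf w)) * (scal (fst (ins x (snd (nf w)))) * mon (snd (ins x (snd (nf w))))))"
    using qcong_ins[OF nf_strict_sorted sL x] by (rule qcong_scal)
  have nfe: "nf (w @ [x]) = (fst (nf w) * fst (ins x (snd (nf w))), snd (ins x (snd (nf w))))"
    by (simp add: nf_def nf_run_snoc nf_step_def)
  have e3: "scal (fst (nf w)) * (scal (fst (ins x (snd (nf w)))) * mon (snd (ins x (snd (nf w)))))
      = scal (fst (nf (w @ [x]))) * mon (snd (nf (w @ [x])))"
    by (simp only: nfe fst_conv snd_conv scal_mult mult.assoc)
  from c1 have "qcong n (mon (w @ [x])) (scal (fst (nf w)) * (mon (snd (nf w)) * mon [x]))"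
    by (simp only: mon_append mult.assoc)
  from qcong_trans[OF this c2] show ?case by (simp only: e3)
qed

text \<open>nf_coeff x M is the coefficient of the sorted word M once x is reduced to normal form.\<close>
definition nf_coeff :: "fpoly \<Rightarrow> nat list \<Rightarrow> complex" where
  "nf_coeff x M = lin (\<lambda>a. fst (nf a) * (if snd (nf a) = M then 1 else 0)) x"

lemma qnull_nf_coeff: "qnull x \<Longrightarrow> nf_coeff x M = 0"
  unfolding qnull_def nf_coeff_def by (drule spec[where x="\<lambda>N. if N = M then 1 else 0"]) simp

lemma lin_group:
  "lin (\<lambda>a. fst (nf a) * g (snd (nf a))) x = (\<Sum>M\<in>(\<lambda>a. snd (nf a)) ` supp (coeff x). nf_coeff x M * g M)"
proof -
  let ?A = "supp (coeff x)"
  have fA: "finite ?A" by (rule fin_coeff)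
  have "lin (\<lambda>a. fst (nf a) * g (snd (nf a))) x = (\<Sum>a\<in>?A. coeff x a * (fst (nf a) * g (snd (nf a))))"
    by (simp add: lin_expl)
  also have "\<dots> = (\<Sum>M\<in>(\<lambda>a. snd (nf a)) ` ?A. \<Sum>a\<in>{a\<in>?A. snd (nf a) = M}. coeff x a * (fst (nf a) * g (snd (nf a))))"
    by (rule sum.group[symmetric]) (use fA in auto)
  also have "\<dots> = (\<Sum>M\<in>(\<lambda>a. snd (nf a)) ` ?A. nf_coeff x M * g M)"
  proof (rule sum.cong[OF refl])
    fix M
    have "nf_coeff x M = (\<Sum>a\<in>?A. coeff x a * (fst (nf a) * (if snd (nf a) = M then 1 else 0)))"
      by (simp add: nf_coeff_def lin_expl)
    also have "\<dots> = (\<Sum>a\<in>{a\<in>?A. snd (nf a) = M}. coeff x a * fst (nf a))"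
      by (simp add: sum.inter_filter[OF fA]) (rule sum.cong, auto)
    finally show "(\<Sum>a\<in>{a\<in>?A. snd (nf a) = M}. coeff x a * (fst (nf a) * g (snd (nf a)))) = nf_coeff x M * g M"
      by (simp add: sum_distrib_right mult.assoc)
  qed
  finally show ?thesis .
qed

lemma nf_coeff_qnull: "(\<And>M. nf_coeff x M = 0) \<Longrightarrow> qnull x"
  unfolding qnull_def by (simp add: lin_group)

lemma scal_sum: "scal (\<Sum>a\<in>B. f a) = (\<Sum>a\<in>B. scal (f a))"
  by (induction B rule: infinite_finite_induct) (simp_all add: scal_zero scal_add)

text \<open>Completeness: a null polynomial on the letters of Q_n lies in Q_ideal, because modulo
  Q_ideal it equals the sum over M of nf_coeff x M * mon M, which is zero.\<close>
lemma completeness: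
  assumes x: "x \<in> Qpol n" and m: "qnull x"
  shows "x \<in> Qid n"
proof -
  let ?A = "supp (coeff x)"
  have fA: "finite ?A" by (rule fin_coeff)
  have sw: "set a \<subseteq> Q_letters n" if "a \<in> ?A" for a using x that by (auto simp: Pol_def)
  have "qcong n (\<Sum>a\<in>?A. scal (coeff x a) * mon a) (\<Sum>a\<in>?A. scal (coeff x a) * (scal (fst (nf a)) * mon (snd (nf a))))"
    by (intro qcong_sum qcong_scal qcong_nf sw)
  then have c: "qcong n x (\<Sum>a\<in>?A. scal (coeff x a * fst (nf a)) * mon (snd (nf a)))"
    using fpoly_expand[of x] by (simp add: scal_mult mult.assoc)
  have "(\<Sum>a\<in>?A. scal (coeff x a * fst (nf a)) * mon (snd (nf a)))
     = (\<Sum>M\<in>(\<lambda>a. snd (nf a)) ` ?A. \<Sum>a\<in>{a\<in>?A. snd (nf a) = M}. scal (coeff x a * fst (nf a)) * mon (snd (nf a)))"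
    by (rule sum.group[symmetric]) (use fA in auto)
  also have "\<dots> = (\<Sum>M\<in>(\<lambda>a. snd (nf a)) ` ?A. scal (nf_coeff x M) * mon M)"
  proof (rule sum.cong[OF refl])
    fix M
    have "nf_coeff x M = (\<Sum>a\<in>{a\<in>?A. snd (nf a) = M}. coeff x a * fst (nf a))"
      by (simp add: nf_coeff_def lin_expl sum.inter_filter[OF fA]) (rule sum.cong, auto)
    then show "(\<Sum>a\<in>{a\<in>?A. snd (nf a) = M}. scal (coeff x a * fst (nf a)) * mon (snd (nf a))) = scal (nf_coeff x M) * mon M"
      by (simp add: sum_distrib_right scal_sum)
  qed
  also have "\<dots> = 0" using qnull_nf_coeff[OF m] by (simp add: scal_zero)
  finally show ?thesis using c by (simp add: qcong_def)
qed

lemma Qnull_letter_comm: "mon [a] * mon [b] - scal (csign a b) * (mon [b] * mon [a]) \<in> Qnull"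
proof (cases "a = b")
  case True then show ?thesis using Qnull_zero by (simp add: csign_refl scal_one)
next
  case False then show ?thesis using Qnull_comm[OF False] by (simp add: mon_append[symmetric])
qed

lemma Qrels_Qnull: "r \<in> Q_rels n \<Longrightarrow> finite (supp r) \<and> fpoly_of r \<in> Qnull"
proof -
  assume r: "r \<in> Q_rels n"
  have sq: "Ugen i * Ugen i + 1 \<in> Qnull" "Vgen i * Vgen i + 1 \<in> Qnull" for i
    using Qnull_sq[of "2*i"] Qnull_sq[of "2*i+1"] by (simp_all add: Ugen_def Vgen_def mon_append[symmetric])
  have UV1: "Ugen i * Vgen j + Vgen j * Ugen i \<in> Qnull" if "dist (real i) (real j) \<le> 1" for i j
    using Qnull_letter_comm[of "2*i" "2*j+1"] that anticomm_UV[of i j] by (simp add: csign_def Ugen_def Vgen_def scal_uminus scal_one)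
  have UV2: "Ugen i * Vgen j - Vgen j * Ugen i \<in> Qnull" if "\<not> dist (real i) (real j) \<le> 1" for i j
    using Qnull_letter_comm[of "2*i" "2*j+1"] that anticomm_UV[of i j] by (simp add: csign_def Ugen_def Vgen_def scal_one)
  have UU: "Ugen i * Ugen j - Ugen j * Ugen i \<in> Qnull" for i j
    using Qnull_letter_comm[of "2*i" "2*j"] by (simp add: csign_def anticomm_def Ugen_def scal_one)
  have VV: "Vgen i * Vgen j - Vgen j * Vgen i \<in> Qnull" for i j
    using Qnull_letter_comm[of "2*i+1" "2*j+1"] by (simp add: csign_def anticomm_def Vgen_def scal_one)
  have L: "r = coeff x \<Longrightarrow> x \<in> Qnull \<Longrightarrow> finite (supp r) \<and> fpoly_of r \<in> Qnull" for x
    using fin_coeff by (simp add: coeff_inverse)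
  from r consider (a) i where "r = Uq i \<star> Uq i \<oplus> ncone"
    | (b) i where "r = Vq i \<star> Vq i \<oplus> ncone"
    | (c) i j where "r = Uq i \<star> Vq j \<oplus> Vq j \<star> Uq i" "dist (real i) (real j) \<le> 1"
    | (d) i j where "r = Uq i \<star> Vq j \<ominus> Vq j \<star> Uq i" "dist (real i) (real j) \<ge> 2"
    | (e) i j where "r = Uq i \<star> Uq j \<ominus> Uq j \<star> Uq i"
    | (f) i j where "r = Vq i \<star> Vq j \<ominus> Vq j \<star> Vq i"
    unfolding Q_rels_def by blast
  then show ?thesis
  proof cases
    case a then show ?thesis using L[OF _ sq(1)] by (simp add: coeff_plus coeff_times coeff_Ugen coeff_one)
  next
    case b then show ?thesis using L[OF _ sq(2)] by (simp add: coeff_plus coeff_times coeff_Vgen coeff_one)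
  next
    case c then show ?thesis using L[OF _ UV1[OF c(2)]] by (simp add: coeff_plus coeff_times coeff_Ugen coeff_Vgen)
  next
    case d
    then have "\<not> dist (real i) (real j) \<le> 1" by simp
    then show ?thesis using d L[OF _ UV2] by (simp add: coeff_minus coeff_times coeff_Ugen coeff_Vgen)
  next
    case e then show ?thesis using L[OF _ UU] by (simp add: coeff_minus coeff_times coeff_Ugen)
  next
    case f then show ?thesis using L[OF _ VV] by (simp add: coeff_minus coeff_times coeff_Vgen)
  qed
qed

lemma Qideal_Qnull: "f \<in> Q_ideal n \<Longrightarrow> finite (supp f) \<and> fpoly_of f \<in> Qnull"
  unfolding Q_ideal_def
proof (induction f rule: ideal_gen.induct)
  case (gen r) then show ?case by (rule Qrels_Qnull)
next
  case zero
  have "fpoly_of nczero = 0" by (simp add: zero_fpoly_def)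
  then show ?case by (simp add: fin_zero Qnull_zero)
next
  case (add a b)
  then have "fpoly_of (a \<oplus> b) = fpoly_of a + fpoly_of b" by (simp add: plus_fpoly_def fpoly_of_inverse)
  then show ?case using add by (simp add: fin_add Qnull_add)
next
  case (mul a p r)
  have fpoly: "finite (supp p)" "finite (supp r)" using mul by (auto simp: ncpolys_on_def supp_def)
  then have "fpoly_of (p \<star> a \<star> r) = fpoly_of p * fpoly_of a * fpoly_of r" using mul by (simp add: times_fpoly_def fpoly_of_inverse finite_supp_conv)
  then show ?case using mul fpoly by (simp add: finite_supp_conv Qnull_mult)
qed

lemma Qid_Qnull: "x \<in> Qid n \<Longrightarrow> x \<in> Qnull"
  using Qideal_Qnull[of "coeff x" n] by (simp add: Qid_def coeff_inverse)

lemma qq_eq: "qq = Complex (1/2) (sqrt 3 / 2)"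
proof -
  have "Re (2 * of_real pi * \<i> / 6) = 0" "Im (2 * of_real pi * \<i> / 6) = pi / 3" by simp_all
  then have "qq = cis (pi / 3)" unfolding qq_def by (simp add: exp_eq_polar)
  then show ?thesis by (simp add: cis.code cos_60 sin_60)
qed

lemma qq_sq: "qq * qq = qq - 1"
  unfolding qq_eq by (simp add: complex_eq_iff field_simps)

lemma qq_nz: "qq \<noteq> 0" unfolding qq_eq by (simp add: complex_eq_iff)

lemma qq_cnj: "cnj qq = 1 - qq"
  unfolding qq_eq by (simp add: complex_eq_iff)

lemma qq_cnj_mult: "qq * cnj qq = 1"
  unfolding qq_cnj using qq_sq by (simp add: algebra_simps)

lemma qq_one: "1 + qq \<noteq> 0" unfolding qq_eq by (simp add: complex_eq_iff)

lemma qq3: "qq * qq * qq = -1"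
proof -
  have "qq * qq * qq = (qq - 1) * qq" using qq_sq by simp
  also have "\<dots> = qq * qq - qq" by (simp add: algebra_simps)
  also have "\<dots> = -1" using qq_sq by simp
  finally show ?thesis .
qed

section \<open>The conjugate-linear anti-involution dag\<close>

text \<open>dag reverses words, conjugates coefficients and negates every letter; on Q it is the
  adjoint operation, since the letters are unitaries squaring to -1.\<close>

definition dag_coeffs :: "ncpoly \<Rightarrow> ncpoly" where
  "dag_coeffs f = (\<lambda>w. cnj (f (rev w)) * (-1) ^ length w)"

lemma supp_dag_coeffs: "supp (dag_coeffs f) = rev ` supp f"
proof -
  have "supp (dag_coeffs f) = {w. f (rev w) \<noteq> 0}" by (auto simp: supp_def dag_coeffs_def)
  also have "\<dots> = rev ` supp f" by (auto simp: supp_def image_iff) (metis rev_rev_ident)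
  finally show ?thesis .
qed

definition dag :: "fpoly \<Rightarrow> fpoly" where "dag x = fpoly_of (dag_coeffs (coeff x))"

lemma coeff_dag: "coeff (dag x) = dag_coeffs (coeff x)"
  unfolding dag_def by (rule fpoly_of_inverse) (simp add: supp_dag_coeffs fin_coeff)

lemma dag_add: "dag (x + y) = dag x + dag y"
  by (simp add: coeff_inject[symmetric] coeff_dag coeff_plus dag_coeffs_def ncadd_def fun_eq_iff distrib_right)

lemma dag_zero: "dag 0 = 0"
  by (simp add: coeff_inject[symmetric] coeff_dag coeff_zero dag_coeffs_def nczero_def fun_eq_iff)

lemma dag_scal: "dag (scal c * x) = scal (cnj c) * dag x"
  by (simp add: coeff_inject[symmetric] coeff_dag coeff_scal_mul dag_coeffs_def ncsmul_def fun_eq_iff)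

lemma dag_mon: "dag (mon w) = scal ((-1) ^ length w) * mon (rev w)"
  by (simp add: coeff_inject[symmetric] coeff_dag coeff_scal_mul coeff_mon dag_coeffs_def ncsmul_def fun_eq_iff)
     (metis length_rev rev_rev_ident)

lemma dag_one: "dag 1 = 1"
  using dag_mon[of "[]"] by (simp add: mon_nil scal_one)

lemma dag_mult: "dag (x * y) = dag y * dag x"
proof (induction x y rule: fpoly_pair_induct)
  case (mon c w d v)
  have "dag (scal c * mon w * (scal d * mon v)) = dag (scal (c * d) * mon (w @ v))"
    by (simp only: mon_scal_mult)
  also have "\<dots> = scal (cnj (c * d) * (-1) ^ (length w + length v)) * mon (rev v @ rev w)"
    by (simp only: dag_scal dag_mon length_append rev_append complex_cnj_mult scal_mult mult.assoc)
  also have "\<dots> = scal (cnj d * (-1) ^ length v * (cnj c * (-1) ^ length w)) * mon (rev v @ rev w)"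
    by (simp add: power_add mult_ac)
  also have "\<dots> = scal (cnj d * (-1) ^ length v) * mon (rev v) * (scal (cnj c * (-1) ^ length w) * mon (rev w))"
    by (rule mon_scal_mult[symmetric])
  finally show ?case by (simp only: dag_scal dag_mon scal_mult mult.assoc)
qed (simp_all add: dag_zero dag_add distrib_left distrib_right)

lemma dag_Pol: "x \<in> Pol L \<Longrightarrow> dag x \<in> Pol L"
  by (auto simp: Pol_def coeff_dag supp_dag_coeffs)

lemma dag_mon1: "dag (mon [a]) = - mon [a]"
  by (simp add: dag_mon scal_uminus scal_one)

section \<open>Faithfulness of tau\<close>

definition empty_part :: "complex \<times> nat list \<Rightarrow> complex" where "empty_part st = (if snd st = [] then fst st else 0)"

text \<open>A word followed by its reverse reduces to (-1)^length: the middle letters cancel in pairs.\<close>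
lemma nf_run_rev: "strict_sorted (snd st) \<Longrightarrow> nf_run st (b @ rev b) = rescale ((-1) ^ length b) st"
proof (induction b rule: rev_induct)
  case Nil then show ?case by (simp add: rescale_def)
next
  case (snoc x b)
  have "nf_run st ((b @ [x]) @ rev (b @ [x])) = nf_run st (b @ [x, x] @ rev b)" by simp
  also have "\<dots> = (- fst (nf_run st (b @ rev b)), snd (nf_run st (b @ rev b)))"
    by (rule nf_run_rel_sq[OF snoc.prems])
  also have "\<dots> = rescale ((-1) ^ length (b @ [x])) st" using snoc by (simp add: rescale_def)
  finally show ?case .
qed

lemma fst_nf_cases: "fst (nf w) = 1 \<or> fst (nf w) = -1"
  using fst_nf_run_cases[of "[]" w] by (simp add: nf_def)

lemma cnj_fst_nf: "cnj (fst (nf w)) = fst (nf w)"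
  using fst_nf_cases[of w] by auto

text \<open>Orthogonality of normal forms: continuing from the sorted word M by rev b reaches 1
  exactly when M is the normal form of b.\<close>
lemma rev_run_empty:
  assumes M: "strict_sorted M"
  shows "(-1) ^ length b * empty_part (nf_run (1, M) (rev b)) = (if M = snd (nf b) then fst (nf b) else 0)"
proof (cases "M = snd (nf b)")
  case True
  have "(1, M) = rescale (fst (nf b)) (nf b)" using True fst_nf_sq[of b] by (simp add: rescale_def)
  then have "nf_run (1, M) (rev b) = rescale (fst (nf b)) (nf_run (nf b) (rev b))" by (simp add: nf_run_rescale)
  also have "nf_run (nf b) (rev b) = nf_run (1, []) (b @ rev b)" by (simp add: nf_def nf_run_append)
  also have "\<dots> = rescale ((-1) ^ length b) (1, [])" by (rule nf_run_rev) simp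
  finally have "nf_run (1, M) (rev b) = (fst (nf b) * (-1) ^ length b, [])" by (simp add: rescale_def)
  then show ?thesis using True by (simp add: empty_part_def mult.commute[of _ "fst (nf b)"] mult.assoc[symmetric]
      power_add[symmetric] mult_2[symmetric] power_mult)
next
  case False
  have "set M \<noteq> set (snd (nf b))" using False M nf_strict_sorted[of b] strict_sorted_equal by blast
  then have "set (snd (nf_run (1, M) (rev b))) \<noteq> {}"
    using M by (auto simp: nf_run_set nf_set symdiff_def odd_letters_def)
  then show ?thesis using False by (auto simp: empty_part_def)
qed

lemma word_tr_empty_part: "word_tr w = empty_part (nf w)" by (simp add: word_tr_def empty_part_def)

lemma word_tr_append_rev: "word_tr (a @ rev b) = fst (nf a) * empty_part (nf_run (1, snd (nf a)) (rev b))"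
  by (simp add: word_tr_empty_part nf_append empty_part_def)

lemma tau_dag: "tau (x * dag x) = (\<Sum>M\<in>(\<lambda>a. snd (nf a)) ` supp (coeff x). cnj (nf_coeff x M) * nf_coeff x M)"
proof -
  let ?A = "supp (coeff x)"
  have fA: "finite ?A" by (rule fin_coeff)
  have inj: "inj_on rev ?A" by (simp add: inj_on_def)
  have "tau (x * dag x) = (\<Sum>a\<in>?A. \<Sum>b\<in>supp (coeff (dag x)). coeff x a * coeff (dag x) b * word_tr (a @ b))"
    by (simp add: tau_def lin_mult)
  also have "\<dots> = (\<Sum>a\<in>?A. \<Sum>b\<in>?A. coeff x a * coeff (dag x) (rev b) * word_tr (a @ rev b))"
    by (simp add: coeff_dag supp_dag_coeffs sum.reindex[OF inj])
  also have "\<dots> = (\<Sum>a\<in>?A. \<Sum>b\<in>?A. coeff x a * cnj (coeff x b) * fst (nf a) * ((-1) ^ length b * empty_part (nf_run (1, snd (nf a)) (rev b))))"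
    by (simp add: coeff_dag dag_coeffs_def word_tr_append_rev mult_ac)
  also have "\<dots> = (\<Sum>a\<in>?A. \<Sum>b\<in>?A. coeff x a * cnj (coeff x b) * fst (nf a) * (if snd (nf a) = snd (nf b) then fst (nf b) else 0))"
    by (simp add: rev_run_empty nf_strict_sorted)
  also have "\<dots> = (\<Sum>b\<in>?A. cnj (coeff x b) * fst (nf b) * (\<Sum>a\<in>?A. coeff x a * (fst (nf a) * (if snd (nf a) = snd (nf b) then 1 else 0))))"
    by (subst sum.swap) (simp add: sum_distrib_left mult_ac if_distrib cong: if_cong)
  also have "\<dots> = (\<Sum>b\<in>?A. cnj (coeff x b) * fst (nf b) * nf_coeff x (snd (nf b)))"
    by (simp add: nf_coeff_def lin_expl)
  also have "\<dots> = cnj (\<Sum>b\<in>?A. coeff x b * (fst (nf b) * cnj (nf_coeff x (snd (nf b)))))"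
    by (simp add: cnj_fst_nf mult_ac)
  also have "(\<Sum>b\<in>?A. coeff x b * (fst (nf b) * cnj (nf_coeff x (snd (nf b))))) = lin (\<lambda>b. fst (nf b) * cnj (nf_coeff x (snd (nf b)))) x"
    by (simp add: lin_expl)
  also have "\<dots> = (\<Sum>M\<in>(\<lambda>a. snd (nf a)) ` ?A. nf_coeff x M * cnj (nf_coeff x M))"
    by (rule lin_group)
  finally show ?thesis by (simp add: mult.commute)
qed

lemma nf_coeff_outside: "M \<notin> (\<lambda>a. snd (nf a)) ` supp (coeff x) \<Longrightarrow> nf_coeff x M = 0"
  unfolding nf_coeff_def lin_expl by (rule sum.neutral) auto

lemma faithful: "tau (x * dag x) = 0 \<Longrightarrow> qnull x"
proof -
  assume h: "tau (x * dag x) = 0"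
  let ?I = "(\<lambda>a. snd (nf a)) ` supp (coeff x)"
  have fI: "finite ?I" using fin_coeff by simp
  have e: "cnj (nf_coeff x M) * nf_coeff x M = complex_of_real ((cmod (nf_coeff x M))^2)" for M
    by (subst complex_norm_square) (rule mult.commute)
  have "(\<Sum>M\<in>?I. complex_of_real ((cmod (nf_coeff x M))^2)) = 0" using h tau_dag[of x] e by simp
  then have "(\<Sum>M\<in>?I. (cmod (nf_coeff x M))^2) = 0"
    by (metis of_real_eq_0_iff of_real_sum)
  then have "\<forall>M\<in>?I. (cmod (nf_coeff x M))^2 = 0"
    by (rule sum_nonneg_eq_0_iff[OF fI, THEN iffD1, rotated]) simp
  then have "nf_coeff x M = 0" for M using nf_coeff_outside[of M x] by (cases "M \<in> ?I") auto
  then show "qnull x" by (rule nf_coeff_qnull)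
qed

section \<open>dag preserves the image of phi modulo Q_ideal\<close>

lemma dag_Sgen_identity:
  "dag (Sgen i) - (scal (- qq) + scal (- qq * qq) * Sgen i)
     = scal (- qq / 2) * (Ugen i * Vgen i + Vgen i * Ugen i)"
proof -
  let ?a = "2 * i" and ?b = "2 * i + 1"
  let ?k = "- 1 / (2 * qq)"
  have dS: "dag (Sgen i) = scal (cnj ?k) * (1 - Ugen i - Vgen i + Vgen i * Ugen i)"
    unfolding Sgen_def dag_scal by (simp add: dag_add dag_mult dag_one Ugen_def Vgen_def dag_mon1)
  have ck: "cnj ?k = - qq / 2"
    using qq_cnj_mult qq_nz by (simp add: field_simps)
  have kq: "- qq * qq * ?k = qq / 2" using qq_nz by (simp add: field_simps)
  have e1: "Ugen i * Vgen i = mon [?a, ?b]" "Vgen i * Ugen i = mon [?b, ?a]" "Ugen i = mon [?a]"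
    "Vgen i = mon [?b]" "(1::fpoly) = mon []"
    by (simp_all add: Ugen_def Vgen_def mon_append[symmetric] mon_nil)
  have "coeff (scal (- qq / 2) * (1 - Ugen i - Vgen i + Vgen i * Ugen i)
      - (scal (- qq) + scal (- qq * qq) * (scal ?k * (1 + Ugen i + Vgen i + Ugen i * Vgen i)))) v
    = coeff (scal (- qq / 2) * (Ugen i * Vgen i + Vgen i * Ugen i)) v" for v
    unfolding e1(1,2) unfolding e1(3,4,5) using kq
    by (simp add: coeff_plus coeff_minus coeff_scal_mul coeff_scal coeff_mon ncadd_def ncsub_def ncsmul_def ncone_def)
  then have "scal (- qq / 2) * (1 - Ugen i - Vgen i + Vgen i * Ugen i)
      - (scal (- qq) + scal (- qq * qq) * (scal ?k * (1 + Ugen i + Vgen i + Ugen i * Vgen i)))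
    = scal (- qq / 2) * (Ugen i * Vgen i + Vgen i * Ugen i)"
    by (simp add: coeff_inject[symmetric] fun_eq_iff)
  then show ?thesis unfolding dS ck unfolding Sgen_def .
qed

text \<open>In Q_n the anticommutator vanishes, so dag s_i is congruent to -q - q^2 s_i.\<close>
lemma dag_Sgen:
  assumes i: "i \<in> {1..<n}"
  shows "qcong n (dag (Sgen i)) (scal (- qq) + scal (- qq * qq) * Sgen i)"
proof -
  have "Uq i \<star> Vq i \<oplus> Vq i \<star> Uq i \<in> Q_rels n"
    using i unfolding Q_rels_def by (intro UnI1 UnI2 CollectI exI[of _ i]) simp
  then have "Ugen i * Vgen i + Vgen i * Ugen i \<in> Qid n"
    by (intro Qid_gen) (simp add: coeff_plus coeff_times coeff_Ugen coeff_Vgen)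
  then show ?thesis unfolding qcong_def dag_Sgen_identity by (rule Qid_scal)
qed

lemma qcong_mult: "qcong n x y \<Longrightarrow> qcong n x' y' \<Longrightarrow> x' \<in> Qpol n \<Longrightarrow> y \<in> Qpol n \<Longrightarrow> qcong n (x * x') (y * y')"
  by (metis qcong_lmult qcong_rmult qcong_trans)

lemma dag_Sgen_word:
  assumes "set w \<subseteq> {1..<n}"
  shows "\<exists>b\<in>Pol {1..<n}. qcong n (dag (prod_list (map Sgen w))) (subst_hom Sgen b)"
  using assms
proof (induction w)
  case Nil then show ?case by (intro bexI[of _ 1]) (simp_all add: dag_one subst_hom_one qcong_refl Pol_one)
next
  case (Cons x w)
  then obtain b where b: "b \<in> Pol {1..<n}" "qcong n (dag (prod_list (map Sgen w))) (subst_hom Sgen b)" by auto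
  have x: "x \<in> {1..<n}" using Cons.prems by auto
  define g where "g = scal (- qq) + scal (- qq * qq) * Ggen x"
  have "subst_hom Sgen g = scal (- qq) + scal (- qq * qq) * Sgen x"
    by (simp add: g_def subst_hom_add subst_hom_scal subst_hom_one Ggen_def subst_hom_mon)
      (metis subst_hom_one subst_hom_scal mult_1_right)
  then have cx: "qcong n (dag (Sgen x)) (subst_hom Sgen g)" using dag_Sgen[OF x] by simp
  have "qcong n (dag (prod_list (map Sgen w)) * dag (Sgen x)) (subst_hom Sgen b * subst_hom Sgen g)"
    by (rule qcong_mult[OF b(2) cx dag_Pol[OF Sgen_Pol[OF x]] subst_Sgen_Pol[OF b(1)]])
  moreover have "b * g \<in> Pol {1..<n}"
    unfolding g_def by (intro Pol_mult Pol_add Pol_scal b(1) Ggen_Pol x)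
  ultimately show ?case by (intro bexI[of _ "b * g"]) (simp_all add: subst_hom_mult dag_mult)
qed

lemma dag_img:
  assumes a: "a \<in> Pol {1..<n}"
  shows "\<exists>b\<in>Pol {1..<n}. qcong n (dag (subst_hom Sgen a)) (subst_hom Sgen b)"
  using a
proof (induction a rule: Pol_induct)
  case zero then show ?case by (intro bexI[of _ 0]) (simp_all add: subst_hom_zero dag_zero qcong_refl Pol_zero)
next
  case (add a b)
  then obtain a' b' where "a' \<in> Pol {1..<n}" "qcong n (dag (subst_hom Sgen a)) (subst_hom Sgen a')"
    "b' \<in> Pol {1..<n}" "qcong n (dag (subst_hom Sgen b)) (subst_hom Sgen b')" by blast
  then show ?case by (intro bexI[of _ "a' + b'"]) (simp_all add: subst_hom_add dag_add qcong_add Pol_add)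
next
  case (mon c w)
  then obtain b where b: "b \<in> Pol {1..<n}" "qcong n (dag (prod_list (map Sgen w))) (subst_hom Sgen b)"
    using dag_Sgen_word by blast
  show ?case
    by (intro bexI[of _ "scal (cnj c) * b"]) (use b in \<open>simp_all add: subst_hom_scal subst_hom_mon dag_scal qcong_scal Pol_mult Pol_scal\<close>)
qed

section \<open>The Hecke relations for the s_i\<close>

text \<open>Shifting all letters by 2k (i.e. u_i, v_i to u_(i+k), v_(i+k)) preserves commutation
  signs and normal forms, hence nullity.  This reduces the braid and quadratic relations
  to a single computation on the letters 0..3.\<close>

definition shift_letter :: "nat \<Rightarrow> nat \<Rightarrow> nat" where "shift_letter k j = j + 2 * k"

lemma csign_shift: "csign (shift_letter k a) (shift_letter k b) = csign a b"
proof -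
  have "(a + 2 * k) mod 2 = a mod 2" "(a + 2 * k) div 2 = a div 2 + k" for a by simp_all
  then show ?thesis by (simp add: csign_def anticomm_def shift_letter_def)
qed

lemma shift_letter_eq: "shift_letter k = (\<lambda>j. j + 2 * k)" by (rule ext) (simp add: shift_letter_def)

lemma pass_sign_shift: "pass_sign (shift_letter k x) (map (shift_letter k) zs) = pass_sign x zs"
  by (induction zs) (simp_all add: pass_sign_def csign_shift)

lemma pass_sign_shift_plus: "pass_sign (x + 2 * k) (map (\<lambda>a. a + 2 * k) zs) = pass_sign x zs"
  using pass_sign_shift[of k x zs] by (simp add: shift_letter_eq)

lemma pass_sign_shift_plus_Cons: "pass_sign (x + 2 * k) ((a + 2 * k) # map (\<lambda>a. a + 2 * k) zs) = pass_sign x (a # zs)"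
  using pass_sign_shift_plus[of x k "a # zs"] by simp

lemma ins_shift: "ins (shift_letter k x) (map (shift_letter k) L) = (fst (ins x L), map (shift_letter k) (snd (ins x L)))"
  by (induction L) (auto simp: shift_letter_def pass_sign_shift_plus pass_sign_shift_plus_Cons)

lemma nf_run_shift: "nf_run (c, map (shift_letter k) L) (map (shift_letter k) w) = (fst (nf_run (c, L) w), map (shift_letter k) (snd (nf_run (c, L) w)))"
proof (induction w arbitrary: c L)
  case Nil then show ?case by simp
next
  case (Cons x w)
  have "nf_step (c, map (shift_letter k) L) (shift_letter k x) = (fst (nf_step (c, L) x), map (shift_letter k) (snd (nf_step (c, L) x)))"
    by (simp add: nf_step_def ins_shift)
  then show ?case using Cons.IH by (simp add: nf_run_Cons)
qed

lemma nf_shift: "nf (map (shift_letter k) w) = (fst (nf w), map (shift_letter k) (snd (nf w)))"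
  using nf_run_shift[of 1 k "[]" w] by (simp add: nf_def)

definition shift :: "nat \<Rightarrow> fpoly \<Rightarrow> fpoly" where "shift k x = subst_hom (\<lambda>j. mon [shift_letter k j]) x"

lemma prod_mon_map: "prod_list (map (\<lambda>j. mon [f j]) w) = mon (map f w)"
  by (induction w) (simp_all add: mon_nil mon_Cons[of _ "map f _"])

lemma lin_shift: "lin h (shift k x) = lin (\<lambda>a. h (map (shift_letter k) a)) x"
proof -
  have x: "x \<in> Pol UNIV" by (simp add: Pol_def)
  then show ?thesis
  proof (induction x rule: Pol_induct)
    case zero then show ?case by (simp add: shift_def subst_hom_zero lin_zero)
  next
    case (add a b) then show ?case by (simp add: shift_def subst_hom_add lin_add)
  next
    case (mon c w) then show ?case by (simp add: shift_def subst_hom_scal subst_hom_mon prod_mon_map lin_scal lin_mon)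
  qed
qed

lemma qnull_shift: assumes "qnull x" shows "qnull (shift k x)"
  unfolding qnull_def
proof
  fix g
  have "lin (\<lambda>a. fst (nf a) * (\<lambda>M. g (map (shift_letter k) M)) (snd (nf a))) x = 0"
    using assms unfolding qnull_def by (rule spec)
  then show "lin (\<lambda>a. fst (nf a) * g (snd (nf a))) (shift k x) = 0" by (simp add: lin_shift nf_shift)
qed

lemma shift_mult: "shift k (x * y) = shift k x * shift k y" by (simp add: shift_def subst_hom_mult)
lemma shift_add: "shift k (x + y) = shift k x + shift k y" by (simp add: shift_def subst_hom_add)
lemma shift_diff: "shift k (x - y) = shift k x - shift k y" by (simp add: shift_def subst_hom_diff)
lemma shift_scal: "shift k (scal c * x) = scal c * shift k x" by (simp add: shift_def subst_hom_scal)
lemma shift_one: "shift k 1 = 1" by (simp add: shift_def subst_hom_one)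
lemma shift_scal_const: "shift k (scal c) = scal c" using shift_scal[of k c 1] by (simp add: shift_one)
lemma shift_mon: "shift k (mon [j]) = mon [j + 2 * k]" by (simp add: shift_def subst_hom_mon shift_letter_def)

definition twin :: "nat \<Rightarrow> nat \<Rightarrow> fpoly" where "twin a b = 1 + mon [a] + mon [b] + mon [a] * mon [b]"

definition s_scale :: complex where "s_scale = - 1 / (2 * qq)"

lemma Sgen_twin: "Sgen i = scal s_scale * twin (2 * i) (2 * i + 1)"
  by (simp add: Sgen_def s_scale_def twin_def Ugen_def Vgen_def)

lemma shift_twin: "shift k (twin a b) = twin (a + 2 * k) (b + 2 * k)"
  by (simp add: twin_def shift_add shift_mult shift_one shift_mon)

lemma braid_model: "qnull (twin 0 1 * twin 2 3 * twin 0 1 - twin 2 3 * twin 0 1 * twin 2 3)"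
  unfolding qnull_def
proof
  fix g :: "nat list \<Rightarrow> complex"
  show "lin (\<lambda>a. fst (nf a) * g (snd (nf a))) (twin 0 1 * twin 2 3 * twin 0 1 - twin 2 3 * twin 0 1 * twin 2 3) = 0"
    unfolding twin_def
    apply (simp only: distrib_left distrib_right mult_1_left mult_1_right mon_append[symmetric] append.simps)
    apply (simp only: lin_add lin_diff lin_mon)
    apply (simp add: nf_def nf_run_def nf_step_def pass_sign_def csign_def anticomm_def)
    done
qed

lemma quad_model: "qnull (twin 0 1 * twin 0 1 - 2 * twin 0 1 + 4)"
  unfolding qnull_def
proof
  fix g :: "nat list \<Rightarrow> complex"
  have e: "(2::fpoly) * y = scal 2 * y" "(4::fpoly) = scal 4 * mon []" for y by (simp_all add: scal_numeral mon_nil)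
  show "lin (\<lambda>a. fst (nf a) * g (snd (nf a))) (twin 0 1 * twin 0 1 - 2 * twin 0 1 + 4) = 0"
    unfolding twin_def e
    apply (simp only: distrib_left distrib_right mult_1_left mult_1_right mon_append[symmetric] append.simps)
    apply (simp only: lin_add lin_diff lin_mon lin_scal lin_scal_const mon_nil[symmetric])
    apply (simp add: lin_mon nf_def nf_run_def nf_step_def pass_sign_def csign_def anticomm_def)
    done
qed

lemma s_scale_facts: "s_scale * s_scale = 1 / (4 * qq * qq)" "s_scale - qq * s_scale = - 2 / (4 * qq * qq)" "- qq = 4 / (4 * qq * qq)"
proof -
  show "s_scale * s_scale = 1 / (4 * qq * qq)" using qq_nz by (simp add: s_scale_def field_simps)
  have "(s_scale - qq * s_scale) * (4 * qq * qq) = - 2 * qq * (1 - qq)" using qq_nz by (simp add: s_scale_def field_simps)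
  also have "\<dots> = -2 * qq + 2 * (qq * qq)" by (simp add: algebra_simps)
  also have "\<dots> = -2" using qq_sq by simp
  finally show "s_scale - qq * s_scale = - 2 / (4 * qq * qq)" by (rule eq_divide_imp[rotated]) (use qq_nz in simp)
  have "(- qq) * (4 * qq * qq) = - 4 * (qq * qq * qq)" by (simp add: algebra_simps)
  also have "\<dots> = 4" using qq3 by simp
  finally have "(- qq) * (4 * qq * qq) = 4" .
  then show "- qq = 4 / (4 * qq * qq)" by (rule eq_divide_imp[rotated]) (use qq_nz in simp)
qed

lemma twin_Pol: "twin a b \<in> Pol {a, b}"
  unfolding twin_def by (intro Pol_add Pol_mult Pol_one Pol_mon) auto

lemma Sgen_letters: "Sgen i \<in> Pol {2 * i, 2 * i + 1}"
  unfolding Sgen_twin using twin_Pol by (auto intro: Pol_mult Pol_scal)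

lemma shift_Pol: "x \<in> Pol L \<Longrightarrow> (\<And>j. j \<in> L \<Longrightarrow> j + 2 * k \<in> L') \<Longrightarrow> shift k x \<in> Pol L'"
  unfolding shift_def shift_letter_def by (rule subst_hom_Pol) (auto intro: Pol_mon)

lemma Qnull_from_qnull: "qnull x \<Longrightarrow> x \<in> Qpol n \<Longrightarrow> x \<in> Qnull"
  using completeness Qid_Qnull by blast

lemma shift_letters_in_Q:
  assumes "i \<ge> 1" "j \<in> {0, 1, 2, 3}"
  shows "j + 2 * i \<in> Q_letters (i + 2)"
  using assms by (auto simp: Q_letters_iff)

lemma braid_Qnull:
  assumes i: "i \<ge> 1"
  shows "Sgen i * Sgen (i + 1) * Sgen i - Sgen (i + 1) * Sgen i * Sgen (i + 1) \<in> Qnull"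
proof -
  let ?x0 = "twin 0 1 * twin 2 3 * twin 0 1 - twin 2 3 * twin 0 1 * twin 2 3"
  have a: "twin 0 1 \<in> Pol {0, 1, 2, 3}" by (rule Pol_mono[OF twin_Pol]) auto
  have b: "twin 2 3 \<in> Pol {0, 1, 2, 3}" by (rule Pol_mono[OF twin_Pol]) auto
  have x0: "?x0 \<in> Pol {0, 1, 2, 3}" by (intro Pol_diff Pol_mult a b)
  have "shift i ?x0 \<in> Qpol (i + 2)" using x0 by (rule shift_Pol) (use shift_letters_in_Q i in auto)
  then have z: "shift i ?x0 \<in> Qnull" using qnull_shift[OF braid_model] Qnull_from_qnull by blast
  have e: "0 + 2 * i = 2 * i" "1 + 2 * i = 2 * i + 1" "2 + 2 * i = 2 * (i + 1)" "3 + 2 * i = 2 * (i + 1) + 1"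
    by simp_all
  have sx: "shift i (twin 0 1) = twin (2 * i) (2 * i + 1)" "shift i (twin 2 3) = twin (2 * (i + 1)) (2 * (i + 1) + 1)"
    by (simp_all only: shift_twin e)
  have "Sgen i * Sgen (i + 1) * Sgen i - Sgen (i + 1) * Sgen i * Sgen (i + 1) = scal (s_scale * s_scale * s_scale) * shift i ?x0"
    by (simp only: Sgen_twin shift_diff shift_mult sx scal_mult_mult right_diff_distrib)
  then show ?thesis using Qnull_scal[OF z] by simp
qed

lemma scal_quad_expand:
  "(scal k * X + 1) * (scal k * X - scal c) = scal (k * k) * (X * X) + scal (k - c * k) * X - scal c"
proof -
  have a: "scal k * X * (scal k * X) = scal (k * k) * (X * X)" by (rule scal_mult_mult)
  have b: "scal k * X * scal c = scal (c * k) * X"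
    by (simp only: mult.assoc scal_comm[of c X, symmetric]) (simp only: mult.assoc[symmetric] scal_mult[symmetric] mult.commute)
  have c: "scal (k - c * k) * X = scal k * X - scal (c * k) * X" by (simp add: scal_minus left_diff_distrib)
  have "(scal k * X + 1) * (scal k * X - scal c) = scal k * X * (scal k * X) - scal k * X * scal c + (scal k * X - scal c)"
    by (simp only: distrib_right mult_1_left right_diff_distrib) (simp add: algebra_simps)
  then show ?thesis unfolding a b c by (simp add: algebra_simps)
qed

lemma quad_Sgen_identity:
  "(Sgen i + 1) * (Sgen i - scal qq)
     = scal (1 / (4 * qq * qq)) * (twin (2 * i) (2 * i + 1) * twin (2 * i) (2 * i + 1) - 2 * twin (2 * i) (2 * i + 1) + 4)"
proof -
  let ?X = "twin (2 * i) (2 * i + 1)"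
  define c where "c = 1 / (4 * qq * qq)"
  have n1: "s_scale * s_scale = c" and n2: "s_scale - qq * s_scale = - (c * 2)"
    using s_scale_facts unfolding c_def by simp_all
  have "c * 4 = 4 / (4 * qq * qq)" unfolding c_def by simp
  then have "qq = - (c * 4)" using s_scale_facts(3) by (metis minus_minus)
  then have n3: "scal qq = - scal (c * 4)" using scal_uminus[of "c * 4"] by metis
  have e2: "scal c * (2 * ?X) = scal (c * 2) * ?X"
    by (simp only: scal_numeral[symmetric] mult.assoc[symmetric] scal_mult)
  have e4: "scal c * (4::fpoly) = scal (c * 4)"
    by (simp only: scal_numeral[symmetric] scal_mult)
  have "scal c * (?X * ?X - 2 * ?X + 4) = scal c * (?X * ?X) - scal (c * 2) * ?X + scal (c * 4)"
    by (simp only: distrib_left right_diff_distrib e2 e4)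
  moreover have "scal (s_scale * s_scale) * (?X * ?X) + scal (s_scale - qq * s_scale) * ?X - scal qq
      = scal c * (?X * ?X) - scal (c * 2) * ?X + scal (c * 4)"
    by (simp only: n1 n2 n3 scal_uminus) (simp add: algebra_simps)
  ultimately show ?thesis
    unfolding Sgen_twin scal_quad_expand c_def by simp
qed

lemma quad_Qnull:
  assumes i: "i \<ge> 1"
  shows "(Sgen i + 1) * (Sgen i - scal qq) \<in> Qnull"
proof -
  let ?X = "twin (2 * i) (2 * i + 1)"
  let ?x0 = "twin 0 1 * twin 0 1 - 2 * twin 0 1 + 4"
  have x0: "?x0 \<in> Pol {0, 1}"
    using twin_Pol[of 0 1] by (intro Pol_add Pol_diff Pol_mult Pol_numeral)
  have "shift i ?x0 \<in> Qpol (i + 2)" using x0 by (rule shift_Pol) (use shift_letters_in_Q i in auto)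
  then have z: "shift i ?x0 \<in> Qnull" using qnull_shift[OF quad_model] Qnull_from_qnull by blast
  have n: "shift i (numeral k) = numeral k" for k using shift_scal_const[of i "numeral k"] by (simp add: scal_numeral)
  have "shift i ?x0 = ?X * ?X - 2 * ?X + 4"
    by (simp add: shift_diff shift_add shift_mult shift_twin n)
  then show ?thesis using Qnull_scal[OF z] by (simp add: quad_Sgen_identity)
qed

text \<open>Distant s_i commute: their letters pairwise commute.\<close>
lemma far_Qnull:
  assumes "1 < dist (real i) (real j)"
  shows "Sgen i * Sgen j - Sgen j * Sgen i \<in> Qnull"
proof -
  have "Sgen i \<in> Pol {2 * i, 2 * i + 1}" "Sgen j \<in> Pol {2 * j, 2 * j + 1}"
    by (rule Sgen_letters)+
  moreover have "\<forall>a\<in>{2 * i, 2 * i + 1}. \<forall>b\<in>{2 * j, 2 * j + 1}. csign a b = 1"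
  proof -
    have "\<not> anticomm (2 * i) (2 * j + 1)" "\<not> anticomm (2 * i + 1) (2 * j)"
      using assms anticomm_UV[of i j] anticomm_UV[of j i] anticomm_sym by (auto simp: dist_commute)
    moreover have "\<not> anticomm (2 * i) (2 * j)" "\<not> anticomm (2 * i + 1) (2 * j + 1)" by (simp_all add: anticomm_def)
    ultimately show ?thesis by (auto simp: csign_def)
  qed
  ultimately show ?thesis by (rule Qnull_comm_Pol)
qed

lemma hecke_rels_Qnull:
  assumes "r \<in> hecke_rels {1..}"
  shows "finite (supp r) \<and> subst_hom Sgen (fpoly_of r) \<in> Qnull"
proof -
  have L: "r = coeff x \<Longrightarrow> subst_hom Sgen x \<in> Qnull \<Longrightarrow> finite (supp r) \<and> subst_hom Sgen (fpoly_of r) \<in> Qnull" for x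
    using fin_coeff by (simp add: coeff_inverse)
  from assms consider (a) i where "r = ncvar i \<star> ncvar (i+1) \<star> ncvar i \<ominus> ncvar (i+1) \<star> ncvar i \<star> ncvar (i+1)" "i \<ge> 1"
    | (b) i j where "r = ncvar i \<star> ncvar j \<ominus> ncvar j \<star> ncvar i" "dist (real i) (real j) > 1"
    | (c) i where "r = (ncvar i \<oplus> ncone) \<star> (ncvar i \<ominus> qq \<cdot> ncone)" "i \<ge> 1"
    unfolding hecke_rels_def by auto
  then show ?thesis
  proof cases
    case a
    have "r = coeff (Ggen i * Ggen (i+1) * Ggen i - Ggen (i+1) * Ggen i * Ggen (i+1))" using a by (simp add: coeff_minus coeff_times coeff_Ggen)
    moreover have "subst_hom Sgen (Ggen i * Ggen (i+1) * Ggen i - Ggen (i+1) * Ggen i * Ggen (i+1)) \<in> Qnull"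
      using braid_Qnull[OF a(2)] by (simp add: subst_hom_diff subst_hom_mult Ggen_def subst_hom_mon)
    ultimately show ?thesis by (rule L)
  next
    case b
    have "r = coeff (Ggen i * Ggen j - Ggen j * Ggen i)" using b by (simp add: coeff_minus coeff_times coeff_Ggen)
    moreover have "subst_hom Sgen (Ggen i * Ggen j - Ggen j * Ggen i) \<in> Qnull"
      using far_Qnull[OF b(2)] by (simp add: subst_hom_diff subst_hom_mult Ggen_def subst_hom_mon)
    ultimately show ?thesis by (rule L)
  next
    case c
    have "r = coeff ((Ggen i + 1) * (Ggen i - scal qq))" using c by (simp add: coeff_minus coeff_times coeff_Ggen coeff_plus coeff_one coeff_scal)
    moreover have "subst_hom Sgen ((Ggen i + 1) * (Ggen i - scal qq)) = (Sgen i + 1) * (Sgen i - scal qq)"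
      using subst_hom_scal[of Sgen qq 1] by (simp add: subst_hom_diff subst_hom_mult subst_hom_add subst_hom_one Ggen_def subst_hom_mon)
    ultimately show ?thesis using L quad_Qnull[OF c(2)] by simp
  qed
qed

lemma hecke_Qnull: "f \<in> hecke_ideal {1..} \<Longrightarrow> finite (supp f) \<and> subst_hom Sgen (fpoly_of f) \<in> Qnull"
  unfolding hecke_ideal_def
proof (induction f rule: ideal_gen.induct)
  case (gen r) then show ?case by (rule hecke_rels_Qnull)
next
  case zero
  have "fpoly_of nczero = 0" by (simp add: zero_fpoly_def)
  then show ?case by (simp add: fin_zero Qnull_zero subst_hom_zero)
next
  case (add a b)
  then show ?case by (simp add: fpoly_of_add fin_add subst_hom_add Qnull_add)
next
  case (mul a p r)
  have "finite (supp p)" "finite (supp r)" using mul polys_fin by auto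
  then show ?case using mul by (simp add: fpoly_of_mul finite_supp_conv subst_hom_mult Qnull_mult)
qed

section \<open>tau o phi is a Markov trace\<close>

definition markov_tr :: "ncpoly \<Rightarrow> complex" where
  "markov_tr f = (if f \<in> ncpolys_on {1..} then tau (subst_hom Sgen (fpoly_of f)) else 0)"

text \<open>If X avoids the letters u_m, v_m then tau (X * s_m) = s_scale * tau X: the three
  non-constant words of s_m contain a letter occurring once, killing the trace.\<close>
lemma tau_mult_Sgen_fresh:
  assumes XL: "X \<in> Pol {j. j < 2 * m}"
  shows "tau (X * Sgen m) = s_scale * tau X"
proof -
  have nl: "\<forall>c\<in>supp (coeff X). l \<notin> set c" if "l \<ge> 2 * m" for l
  proof
    fix c assume "c \<in> supp (coeff X)"
    then have "set c \<subseteq> {j. j < 2 * m}" using XL by (auto simp: Pol_def)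
    then show "l \<notin> set c" using that by auto
  qed
  have v1: "tau (X * mon [2 * m]) = 0" by (rule tau_vanish[OF nl[of "2 * m"]]) simp_all
  have v2: "tau (X * mon [2 * m + 1]) = 0" by (rule tau_vanish[OF nl[of "2 * m + 1"]]) simp_all
  have v3: "tau (X * mon [2 * m, 2 * m + 1]) = 0" by (rule tau_vanish[OF nl[of "2 * m"]]) simp_all
  have "X * Sgen m = scal s_scale * (X + X * mon [2 * m] + X * mon [2 * m + 1] + X * mon [2 * m, 2 * m + 1])"
    unfolding Sgen_twin twin_def
    by (simp add: distrib_left mult.assoc[symmetric] scal_comm[of s_scale X, symmetric] mon_append[symmetric])
  then show ?thesis by (simp only: tau_scal tau_add v1 v2 v3) simp
qed

lemma markov_parameter: "(1 / (1 + qq)) * (qq - s_scale) = eta"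
proof -
  have "(2 * (qq - s_scale)) * qq = 2 * (qq * qq) + 1" using qq_nz by (simp add: s_scale_def field_simps)
  also have "\<dots> = (1 + qq) * qq" using qq_sq by (simp add: algebra_simps)
  finally have "2 * (qq - s_scale) = 1 + qq" using qq_nz by simp
  then show ?thesis using qq_one by (simp add: eta_def field_simps)
qed

lemma markov_tr_markov_property:
  assumes m: "m \<ge> 1" and x: "x \<in> ncpolys_on {1..<m}"
  shows "markov_tr (x \<star> e_el m) = eta * markov_tr x"
proof -
  have xP: "x \<in> ncpolys_on {1..}" using x by (rule polys_mono) auto
  have Ae: "fpoly_of (e_el m) = scal (1 / (1 + qq)) * (scal qq - Ggen m)"
    by (metis (no_types, lifting) coeff_Ggen coeff_inverse coeff_minus coeff_scal coeff_scal_mul e_el_def)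
  have eP: "e_el m \<in> ncpolys_on {1..}"
  proof -
    have "e_el m = coeff (scal (1 / (1 + qq)) * (scal qq - Ggen m))"
      by (simp add: e_el_def coeff_scal_mul coeff_minus coeff_scal coeff_Ggen)
    moreover have "scal (1 / (1 + qq)) * (scal qq - Ggen m) \<in> Pol {1..}"
      using m by (intro Pol_mult Pol_scal Pol_diff) (simp add: Ggen_def Pol_mon)
    ultimately show ?thesis by (simp add: coeff_in_ncpolys)
  qed
  define X where "X = subst_hom Sgen (fpoly_of x)"
  have XL: "X \<in> Pol {j. j < 2 * m}"
    unfolding X_def
    by (rule subst_hom_Pol[OF fpoly_of_Pol[OF x]]) (auto intro: Pol_mono[OF Sgen_letters])
  have "markov_tr (x \<star> e_el m) = tau (X * (scal (1 / (1 + qq)) * (scal qq - Sgen m)))"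
    using polys_mul[OF xP eP] xP eP
    by (simp add: markov_tr_def X_def fpoly_of_mul polys_fin Ae subst_hom_mult subst_hom_scal subst_hom_diff Ggen_def subst_hom_mon subst_hom_scal_const)
  also have "X * (scal (1 / (1 + qq)) * (scal qq - Sgen m)) = scal (1 / (1 + qq)) * (scal qq * X - X * Sgen m)"
  proof -
    have c: "X * scal (1 / (1 + qq)) = scal (1 / (1 + qq)) * X" by (rule scal_comm[symmetric])
    have "X * (scal (1 / (1 + qq)) * (scal qq - Sgen m)) = scal (1 / (1 + qq)) * (X * scal qq - X * Sgen m)"
      by (simp only: mult.assoc[symmetric] c) (simp only: mult.assoc right_diff_distrib)
    then show ?thesis by (simp only: scal_comm[of qq X, symmetric])
  qed
  also have "tau \<dots> = (1 / (1 + qq)) * (qq - s_scale) * tau X"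
    by (simp only: tau_scal tau_diff tau_mult_Sgen_fresh[OF XL] mult.assoc left_diff_distrib)
  also have "\<dots> = eta * tau X" by (simp only: markov_parameter)
  finally show ?thesis using xP by (simp add: markov_tr_def X_def)
qed

lemma markov_tr_is_markov_trace: "is_markov_trace markov_tr"
  unfolding is_markov_trace_def
proof (intro conjI)
  show "\<forall>f. f \<notin> ncpolys_on {1..} \<longrightarrow> markov_tr f = 0" by (simp add: markov_tr_def)
  show "\<forall>f\<in>ncpolys_on {1..}. \<forall>g\<in>ncpolys_on {1..}. markov_tr (f \<oplus> g) = markov_tr f + markov_tr g"
    by (simp add: markov_tr_def polys_add fpoly_of_add polys_fin subst_hom_add tau_add)
  show "\<forall>f\<in>ncpolys_on {1..}. \<forall>c. markov_tr (c \<cdot> f) = c * markov_tr f"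
    by (simp add: markov_tr_def polys_smul fpoly_of_smul polys_fin subst_hom_scal tau_scal)
  show "\<forall>f\<in>hecke_ideal {1..}. markov_tr f = 0"
    using hecke_Qnull tau_Qnull by (simp add: markov_tr_def)
  show "markov_tr ncone = 1"
  proof -
    have "ncone \<in> ncpolys_on {1..}" using coeff_in_ncpolys[OF Pol_one] by (simp add: coeff_one)
    moreover have "fpoly_of ncone = 1" by (simp add: one_fpoly_def)
    ultimately show ?thesis by (simp add: markov_tr_def subst_hom_one tau_one)
  qed
  show "\<forall>a\<in>ncpolys_on {1..}. \<forall>b\<in>ncpolys_on {1..}. markov_tr (a \<star> b) = markov_tr (b \<star> a)"
    by (simp add: markov_tr_def polys_mul fpoly_of_mul polys_fin subst_hom_mult tau_comm)
  show "\<forall>m\<ge>1. \<forall>x\<in>ncpolys_on {1..<m}. markov_tr (x \<star> e_el m) = eta * markov_tr x"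
    using markov_tr_markov_property by blast
qed

section \<open>Reduction in the Hecke algebra\<close>

text \<open>The classical decomposition H_(m+1) = H_m + H_m g_(m+1) H_m, proved by induction on m.
  It is what makes a Markov trace unique.\<close>

definition Hid :: "fpoly set" where "Hid = {y. coeff y \<in> hecke_ideal {1..}}"

lemma Hid_zero: "0 \<in> Hid" by (simp add: Hid_def hecke_ideal_def coeff_zero ideal_gen.zero)
lemma Hid_add: "x \<in> Hid \<Longrightarrow> y \<in> Hid \<Longrightarrow> x + y \<in> Hid"
  by (simp add: Hid_def hecke_ideal_def coeff_plus ideal_gen.add)
lemma Hid_mult: "y \<in> Hid \<Longrightarrow> p \<in> Pol1 \<Longrightarrow> r \<in> Pol1 \<Longrightarrow> p * y * r \<in> Hid"
  by (simp add: Hid_def hecke_ideal_def coeff_times ideal_gen.mul coeff_in_ncpolys)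
lemma Hid_gen: "coeff y \<in> hecke_rels {1..} \<Longrightarrow> y \<in> Hid"
  by (simp add: Hid_def hecke_ideal_def ideal_gen.gen)
lemma Hid_lmult: "y \<in> Hid \<Longrightarrow> p \<in> Pol1 \<Longrightarrow> p * y \<in> Hid"
  using Hid_mult[of y p 1] by (simp add: Pol_one)
lemma Hid_rmult: "y \<in> Hid \<Longrightarrow> r \<in> Pol1 \<Longrightarrow> y * r \<in> Hid"
  using Hid_mult[of y 1 r] by (simp add: Pol_one)
lemma Hid_scal: "y \<in> Hid \<Longrightarrow> scal c * y \<in> Hid" by (rule Hid_lmult) (simp_all add: Pol_scal)
lemma Hid_uminus: "y \<in> Hid \<Longrightarrow> - y \<in> Hid"
  using Hid_scal[of y "-1"] by (simp add: scal_uminus scal_one)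

definition hcong :: "fpoly \<Rightarrow> fpoly \<Rightarrow> bool" where "hcong x y \<longleftrightarrow> x - y \<in> Hid"

lemma hcong_refl: "hcong x x" by (simp add: hcong_def Hid_zero)
lemma hcong_sym: "hcong x y \<Longrightarrow> hcong y x" unfolding hcong_def using Hid_uminus by fastforce
lemma hcong_trans: "hcong x y \<Longrightarrow> hcong y z \<Longrightarrow> hcong x z" unfolding hcong_def using Hid_add by fastforce
lemma hcong_lmult: "hcong x y \<Longrightarrow> p \<in> Pol1 \<Longrightarrow> hcong (p * x) (p * y)"
  unfolding hcong_def using Hid_lmult by (metis right_diff_distrib)
lemma hcong_rmult: "hcong x y \<Longrightarrow> r \<in> Pol1 \<Longrightarrow> hcong (x * r) (y * r)"
  unfolding hcong_def using Hid_rmult by (metis left_diff_distrib)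
lemma hcong_mult3: "hcong x y \<Longrightarrow> p \<in> Pol1 \<Longrightarrow> r \<in> Pol1 \<Longrightarrow> hcong (p * x * r) (p * y * r)"
  using hcong_lmult hcong_rmult by blast
lemma hcong_scal: "hcong x y \<Longrightarrow> hcong (scal c * x) (scal c * y)" using hcong_lmult Pol_scal by blast
lemma hcong_add: "hcong x y \<Longrightarrow> hcong x' y' \<Longrightarrow> hcong (x + x') (y + y')"
  unfolding hcong_def using Hid_add by (metis add_diff_add)

lemma hecke_braid: "i \<ge> 1 \<Longrightarrow> hcong (Ggen i * Ggen (i+1) * Ggen i) (Ggen (i+1) * Ggen i * Ggen (i+1))"
  unfolding hcong_def by (rule Hid_gen) (auto simp: hecke_rels_def coeff_minus coeff_times coeff_Ggen)

lemma hecke_far: "i \<ge> 1 \<Longrightarrow> j \<ge> 1 \<Longrightarrow> 1 < dist (real i) (real j) \<Longrightarrow> hcong (Ggen i * Ggen j) (Ggen j * Ggen i)"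
  unfolding hcong_def by (rule Hid_gen) (auto simp: hecke_rels_def coeff_minus coeff_times coeff_Ggen)

lemma hecke_quad: "i \<ge> 1 \<Longrightarrow> hcong (Ggen i * Ggen i) (scal (qq - 1) * Ggen i + scal qq)"
proof -
  assume i: "i \<ge> 1"
  have "(Ggen i + 1) * (Ggen i - scal qq) \<in> Hid"
    by (rule Hid_gen) (use i in \<open>auto simp: hecke_rels_def coeff_minus coeff_times coeff_Ggen coeff_plus coeff_one coeff_scal\<close>)
  moreover have "(Ggen i + 1) * (Ggen i - scal qq) = Ggen i * Ggen i - (scal (qq - 1) * Ggen i + scal qq)"
    by (simp add: algebra_simps scal_minus scal_one scal_comm[of qq "Ggen i", symmetric])
  ultimately show ?thesis by (simp add: hcong_def)
qed

lemma far_dist: "j + 2 \<le> i \<Longrightarrow> 1 < dist (real i) (real j)"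
  by (simp add: dist_real_def)

lemma comm_Ggen:
  assumes i: "i \<ge> 1" and x: "x \<in> Pol A" and A: "\<And>j. j \<in> A \<Longrightarrow> 1 \<le> j \<and> j + 2 \<le> i"
  shows "hcong (Ggen i * x) (x * Ggen i)"
  using x
proof (induction x rule: Pol_induct)
  case zero then show ?case by (simp add: hcong_refl)
next
  case (add a b) then show ?case by (simp add: distrib_left distrib_right hcong_add)
next
  case (mon c w)
  have "hcong (Ggen i * mon w) (mon w * Ggen i)" using mon
  proof (induction w)
    case Nil then show ?case by (simp add: mon_nil hcong_refl)
  next
    case (Cons j w)
    have j: "1 \<le> j" "j + 2 \<le> i" using Cons.prems A by auto
    have w: "set w \<subseteq> A" using Cons.prems by auto
    have mw: "mon w \<in> Pol1" using w A by (intro Pol_mon) auto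
    have "Ggen i * mon (j # w) = (Ggen i * Ggen j) * mon w" by (simp add: Ggen_def mon_Cons[of j w] mult.assoc)
    moreover have "hcong ((Ggen i * Ggen j) * mon w) ((Ggen j * Ggen i) * mon w)"
      using hecke_far[OF i j(1) far_dist[OF j(2)]] mw by (rule hcong_rmult)
    moreover have "hcong (Ggen j * (Ggen i * mon w)) (Ggen j * (mon w * Ggen i))"
      using Cons.IH[OF w] Ggen_Pol1[OF j(1)] by (rule hcong_lmult)
    moreover have "Ggen j * (mon w * Ggen i) = mon (j # w) * Ggen i" by (simp add: Ggen_def mon_Cons[of j w] mult.assoc)
    ultimately show ?case by (metis hcong_trans mult.assoc)
  qed
  then have "hcong (scal c * (Ggen i * mon w)) (scal c * (mon w * Ggen i))" by (rule hcong_scal)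
  moreover have "Ggen i * (scal c * mon w) = scal c * (Ggen i * mon w)"
    by (simp add: mult.assoc[symmetric] scal_comm[of c "Ggen i", symmetric])
  ultimately show ?case by (simp add: mult.assoc)
qed

inductive_set Gspan :: "nat \<Rightarrow> fpoly set" for m where
  span_zero: "0 \<in> Gspan m"
| span_gen: "b \<in> Pol {1..<m} \<Longrightarrow> c \<in> Pol {1..<m} \<Longrightarrow> b * Ggen m * c \<in> Gspan m"
| span_add: "h \<in> Gspan m \<Longrightarrow> h' \<in> Gspan m \<Longrightarrow> h + h' \<in> Gspan m"

lemma Gspan_Pol: "m \<ge> 1 \<Longrightarrow> h \<in> Gspan m \<Longrightarrow> h \<in> Pol {1..m}"
proof -
  assume m: "m \<ge> 1" and h: "h \<in> Gspan m"
  from h show ?thesis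
  proof induction
    case span_zero then show ?case by (simp add: Pol_zero)
  next
    case (span_gen b c)
    then show ?case using m
      by (intro Pol_mult Ggen_Pol) (auto elim: Pol_mono)
  next
    case (span_add h h') then show ?case by (simp add: Pol_add)
  qed
qed

lemma Gspan_lmult: "h \<in> Gspan m \<Longrightarrow> p \<in> Pol {1..<m} \<Longrightarrow> p * h \<in> Gspan m"
proof (induction h rule: Gspan.induct)
  case span_zero then show ?case by (simp add: Gspan.span_zero)
next
  case (span_gen b c)
  have "p * (b * Ggen m * c) = (p * b) * Ggen m * c" by (simp add: mult.assoc)
  then show ?case using span_gen by (simp add: Gspan.span_gen Pol_mult)
next
  case (span_add h h') then show ?case by (simp add: distrib_left Gspan.span_add)
qed

lemma Gspan_scal: "h \<in> Gspan m \<Longrightarrow> scal c * h \<in> Gspan m"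
  using Gspan_lmult Pol_scal by blast

text \<open>reducible m x: modulo the Hecke relations, x lies in H_(m-1) + H_(m-1) g_m H_(m-1).\<close>
definition reducible :: "nat \<Rightarrow> fpoly \<Rightarrow> bool" where
  "reducible m x \<longleftrightarrow> (\<exists>a\<in>Pol {1..<m}. \<exists>h\<in>Gspan m. hcong x (a + h))"

lemma reducible_zero: "reducible m 0"
  unfolding reducible_def by (rule bexI[of _ 0], rule bexI[of _ 0]) (simp_all add: hcong_refl Gspan.span_zero Pol_zero)

lemma reducible_add: "reducible m x \<Longrightarrow> reducible m y \<Longrightarrow> reducible m (x + y)"
proof -
  assume "reducible m x" "reducible m y"
  then obtain a h a' h' where H: "a \<in> Pol {1..<m}" "h \<in> Gspan m" "hcong x (a + h)" "a' \<in> Pol {1..<m}" "h' \<in> Gspan m" "hcong y (a' + h')"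
    unfolding reducible_def by blast
  have c: "hcong (x + y) ((a + h) + (a' + h'))" using hcong_add[OF H(3) H(6)] .
  have e: "(a + h) + (a' + h') = (a + a') + (h + h')" by (simp add: add_ac)
  have "a + a' \<in> Pol {1..<m}" using H by (simp add: Pol_add)
  moreover have "h + h' \<in> Gspan m" using H by (simp add: Gspan.span_add)
  moreover have "hcong (x + y) ((a + a') + (h + h'))" using c unfolding e .
  ultimately show ?thesis unfolding reducible_def by blast
qed

lemma reducible_scal: "reducible m x \<Longrightarrow> reducible m (scal c * x)"
proof -
  assume "reducible m x"
  then obtain a h where "a \<in> Pol {1..<m}" "h \<in> Gspan m" "hcong x (a + h)" unfolding reducible_def by blast
  then show ?thesis unfolding reducible_def
    by (intro bexI[of _ "scal c * a"] bexI[of _ "scal c * h"]) (auto intro: Pol_mult Pol_scal Gspan_scal dest: hcong_scal simp: distrib_left)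
qed

lemma reducible_hcong: "hcong x y \<Longrightarrow> reducible m y \<Longrightarrow> reducible m x"
  unfolding reducible_def using hcong_trans by blast

lemma reducible_low: "a \<in> Pol {1..<m} \<Longrightarrow> reducible m a"
  unfolding reducible_def by (intro bexI[of _ a] bexI[of _ 0]) (simp_all add: hcong_refl Gspan.span_zero)

lemma reducible_Gspan: "h \<in> Gspan m \<Longrightarrow> reducible m h"
  unfolding reducible_def by (intro bexI[of _ 0] bexI[of _ h]) (simp_all add: hcong_refl Pol_zero)

lemma reducible_Gj:
  assumes j: "j \<in> {1..<m}" and x: "reducible m x" and m: "m \<ge> 1"
  shows "reducible m (Ggen j * x)"
proof -
  obtain a h where a: "a \<in> Pol {1..<m}" and h: "h \<in> Gspan m" and c: "hcong x (a + h)" using x unfolding reducible_def by blast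
  have gj: "Ggen j \<in> Pol {1..<m}" using j by (rule Ggen_Pol)
  have "hcong (Ggen j * x) (Ggen j * a + Ggen j * h)" using hcong_lmult[OF c Pol_Pol1'[OF gj]] by (simp add: distrib_left)
  then show ?thesis unfolding reducible_def using a h gj by (blast intro: Pol_mult Gspan_lmult)
qed

definition all_reducible :: "nat \<Rightarrow> bool" where "all_reducible m \<longleftrightarrow> (\<forall>x\<in>Pol {1..m}. reducible m x)"

text \<open>Reduction of g_n a g_n c with a below g_(n-1): a commutes with g_n, and then the
  quadratic relation replaces g_n g_n by (q - 1) g_n + q.\<close>
lemma reduce_low_word:
  fixes m :: nat
  defines "n \<equiv> m + 1"
  assumes a': "a' \<in> Pol {1..<m}" and c: "c \<in> Pol {1..m}"
  shows "reducible n (Ggen n * (a' * Ggen n * c))"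
proof -
  have n1: "n \<ge> 1" by (simp add: n_def)
  have Gn: "Ggen n \<in> Pol1" using n1 by (rule Ggen_Pol1)
  have a'n: "a' \<in> Pol {1..<n}" using a' by (rule Pol_mono) (auto simp: n_def)
  have cn: "c \<in> Pol {1..<n}" using c by (simp add: n_def atLeastLessThanSuc_atLeastAtMost)
  have a'P: "a' \<in> Pol1" using a' by (rule Pol_Pol1')
  have cP: "c \<in> Pol1" using c by (rule Pol_Pol1)
  have "hcong (Ggen n * a') (a' * Ggen n)"
    by (rule comm_Ggen[OF n1 a']) (auto simp: n_def)
  then have "hcong (Ggen n * a' * (Ggen n * c)) (a' * Ggen n * (Ggen n * c))"
    by (rule hcong_rmult) (intro Pol_mult Gn cP)
  then have f1: "hcong (Ggen n * (a' * Ggen n * c)) (a' * (Ggen n * Ggen n) * c)"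
    by (simp only: mult.assoc)
  have f2: "hcong (a' * (Ggen n * Ggen n) * c) (a' * (scal (qq - 1) * Ggen n + scal qq) * c)"
    using hecke_quad[OF n1] a'P cP by (rule hcong_mult3)
  have e: "a' * (scal (qq - 1) * Ggen n + scal qq) * c = scal (qq - 1) * (a' * Ggen n * c) + scal qq * (a' * c)"
  proof -
    have c1: "a' * scal (qq - 1) = scal (qq - 1) * a'" and c2: "a' * scal qq = scal qq * a'"
      by (rule scal_comm[symmetric])+
    have "a' * (scal (qq - 1) * Ggen n + scal qq) * c = (a' * scal (qq - 1)) * Ggen n * c + (a' * scal qq) * c"
      by (simp only: distrib_left distrib_right mult.assoc)
    then show ?thesis by (simp only: c1 c2 mult.assoc)
  qed
  have "reducible n (scal (qq - 1) * (a' * Ggen n * c) + scal qq * (a' * c))"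
    using Gspan.span_gen[OF a'n cn] Pol_mult[OF a'n cn]
    by (intro reducible_add reducible_scal reducible_Gspan reducible_low)
  with hcong_trans[OF f1 f2] show ?thesis unfolding e by (rule reducible_hcong)
qed

text \<open>Reduction of g_n (b g_m c') g_n c with b, c' below g_m: both commute with g_n, and
  then the braid relation turns g_n g_m g_n into g_m g_n g_m.\<close>
lemma reduce_braid_word:
  fixes m :: nat
  defines "n \<equiv> m + 1"
  assumes m1: "m \<ge> 1" and b': "b' \<in> Pol {1..<m}" and c': "c' \<in> Pol {1..<m}" and c: "c \<in> Pol {1..m}"
  shows "reducible n (Ggen n * (b' * Ggen m * c' * Ggen n * c))"
proof -
  have n1: "n \<ge> 1" by (simp add: n_def)
  have Gn: "Ggen n \<in> Pol1" using n1 by (rule Ggen_Pol1)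
  have b'P: "b' \<in> Pol1" using b' by (rule Pol_Pol1')
  have c'P: "c' \<in> Pol1" using c' by (rule Pol_Pol1')
  have cP: "c \<in> Pol1" using c by (rule Pol_Pol1)
  have Gm: "Ggen m \<in> Pol1" using m1 by (rule Ggen_Pol1)
  have cb: "hcong (Ggen n * b') (b' * Ggen n)" by (rule comm_Ggen[OF n1 b']) (auto simp: n_def)
  have cc: "hcong (c' * Ggen n) (Ggen n * c')" by (rule hcong_sym, rule comm_Ggen[OF n1 c']) (auto simp: n_def)
  have s1: "hcong ((Ggen n * b') * (Ggen m * c' * Ggen n * c)) ((b' * Ggen n) * (Ggen m * c' * Ggen n * c))"
    using cb by (rule hcong_rmult) (intro Pol_mult Gm c'P Gn cP)
  have s2: "hcong ((b' * Ggen n * Ggen m) * (c' * Ggen n) * c) ((b' * Ggen n * Ggen m) * (Ggen n * c') * c)"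
    using cc by (rule hcong_mult3) (intro Pol_mult b'P Gn Gm cP)+
  have s3: "hcong (b' * (Ggen n * Ggen m * Ggen n) * (c' * c)) (b' * (Ggen m * Ggen n * Ggen m) * (c' * c))"
    using hcong_sym[OF hecke_braid[OF m1], folded n_def] b'P by (rule hcong_mult3) (intro Pol_mult c'P cP)
  have e1: "Ggen n * (b' * Ggen m * c' * Ggen n * c) = (Ggen n * b') * (Ggen m * c' * Ggen n * c)"
    and e2: "(b' * Ggen n) * (Ggen m * c' * Ggen n * c) = (b' * Ggen n * Ggen m) * (c' * Ggen n) * c"
    and e3: "(b' * Ggen n * Ggen m) * (Ggen n * c') * c = b' * (Ggen n * Ggen m * Ggen n) * (c' * c)"
    and e4: "b' * (Ggen m * Ggen n * Ggen m) * (c' * c) = (b' * Ggen m) * Ggen n * (Ggen m * c' * c)"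
    by (simp_all add: mult.assoc)
  have "hcong (Ggen n * (b' * Ggen m * c' * Ggen n * c)) ((b' * Ggen m) * Ggen n * (Ggen m * c' * c))"
    using hcong_trans[OF hcong_trans[OF s1[folded e1, unfolded e2] s2[unfolded e3]] s3[unfolded e4]] .
  moreover have "reducible n ((b' * Ggen m) * Ggen n * (Ggen m * c' * c))"
  proof -
    have "b' \<in> Pol {1..<n}" "c' \<in> Pol {1..<n}" using b' c' by (auto elim!: Pol_mono simp: n_def)
    moreover have "Ggen m \<in> Pol {1..<n}" by (rule Ggen_Pol) (use m1 in \<open>auto simp: n_def\<close>)
    moreover have "c \<in> Pol {1..<n}" using c by (simp add: n_def atLeastLessThanSuc_atLeastAtMost)
    ultimately show ?thesis by (intro reducible_Gspan Gspan.span_gen Pol_mult)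
  qed
  ultimately show ?thesis by (rule reducible_hcong)
qed

lemma reduce_Gn_word:
  assumes Rm: "m \<ge> 1 \<Longrightarrow> all_reducible m"
  defines "n \<equiv> m + 1"
  assumes b: "b \<in> Pol {1..m}" and c: "c \<in> Pol {1..m}"
  shows "reducible n (Ggen n * (b * Ggen n * c))"
proof (cases "m = 0")
  case True
  have "b \<in> Pol {1..<m}" using b True by (simp add: Pol_def)
  then show ?thesis using reduce_low_word[OF _ c] by (simp add: n_def)
next
  case False
  then have m1: "m \<ge> 1" by simp
  then obtain a' h' where a': "a' \<in> Pol {1..<m}" and h': "h' \<in> Gspan m" and cb: "hcong b (a' + h')"
    using Rm b unfolding all_reducible_def reducible_def by blast
  have Gn: "Ggen n \<in> Pol1" by (rule Ggen_Pol1) (simp add: n_def)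
  have "reducible n (Ggen n * (h' * Ggen n * c))" using h'
  proof (induction h' rule: Gspan.induct)
    case (span_gen b' c') then show ?case
      using reduce_braid_word[OF m1 _ _ c] by (simp add: n_def mult.assoc)
  qed (simp_all add: reducible_zero distrib_left distrib_right reducible_add)
  then have "reducible n (Ggen n * (a' * Ggen n * c) + Ggen n * (h' * Ggen n * c))"
    using reduce_low_word[OF a' c] by (intro reducible_add) (simp_all add: n_def)
  moreover have "hcong (Ggen n * b * (Ggen n * c)) (Ggen n * (a' + h') * (Ggen n * c))"
    using cb Gn by (rule hcong_mult3) (intro Pol_mult Gn Pol_Pol1[OF c])
  moreover have "Ggen n * (a' + h') * (Ggen n * c) = Ggen n * (a' * Ggen n * c) + Ggen n * (h' * Ggen n * c)"
    by (simp add: algebra_simps)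
  ultimately show ?thesis by (metis reducible_hcong mult.assoc)
qed

lemma reducible_Gn:
  assumes Rm: "m \<ge> 1 \<Longrightarrow> all_reducible m" and x: "reducible (m + 1) x"
  shows "reducible (m + 1) (Ggen (m + 1) * x)"
proof -
  let ?n = "m + 1"
  obtain a h where a: "a \<in> Pol {1..<?n}" and h: "h \<in> Gspan ?n" and c: "hcong x (a + h)" using x unfolding reducible_def by blast
  have Gn: "Ggen ?n \<in> Pol1" by (rule Ggen_Pol1) simp
  have low: "Pol {1..<?n} = Pol {1..m}" by (simp add: atLeastLessThanSuc_atLeastAtMost)
  have "hcong (Ggen ?n * x) (Ggen ?n * a + Ggen ?n * h)" using hcong_lmult[OF c Gn] by (simp add: distrib_left)
  moreover have "reducible ?n (Ggen ?n * a)"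
    using a by (intro reducible_Gspan) (metis Gspan.span_gen Pol_one mult_1_left)
  moreover have "reducible ?n (Ggen ?n * h)" using h
  proof (induction h rule: Gspan.induct)
    case span_zero then show ?case by (simp add: reducible_zero)
  next
    case (span_gen b c) then show ?case using reduce_Gn_word[OF Rm] low by simp
  next
    case (span_add h h') then show ?case by (simp add: distrib_left reducible_add)
  qed
  ultimately show ?thesis using reducible_add reducible_hcong by blast
qed

lemma all_reducible_Suc: "(m \<ge> 1 \<Longrightarrow> all_reducible m) \<Longrightarrow> all_reducible (m + 1)"
proof -
  assume Rm: "m \<ge> 1 \<Longrightarrow> all_reducible m"
  let ?n = "m + 1"
  have mon_reducible: "set w \<subseteq> {1..?n} \<Longrightarrow> reducible ?n (mon w)" for w
  proof (induction w)
    case Nil then show ?case using reducible_low[of 1 ?n] by (simp add: mon_nil Pol_one)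
  next
    case (Cons j w)
    then have gw: "reducible ?n (mon w)" and j: "j \<in> {1..?n}" by auto
    have e: "mon (j # w) = Ggen j * mon w" by (simp add: Ggen_def mon_Cons[of j w])
    show ?case
    proof (cases "j = ?n")
      case True then show ?thesis using e reducible_Gn[OF Rm gw] by simp
    next
      case False
      then have "j \<in> {1..<?n}" using j by auto
      then show ?thesis using e reducible_Gj[OF _ gw] by simp
    qed
  qed
  show ?thesis unfolding all_reducible_def
  proof
    fix x assume "x \<in> Pol {1..?n}"
    then show "reducible ?n x"
    proof (induction x rule: Pol_induct)
      case zero then show ?case by (rule reducible_zero)
    next
      case (add a b) then show ?case using reducible_add by blast
    next
      case (mon c w) then show ?case by (intro reducible_scal mon_reducible)
    qed
  qed
qed

lemma all_reducible_holds: "m \<ge> 1 \<Longrightarrow> all_reducible m"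
proof (induction m)
  case 0 then show ?case by simp
next
  case (Suc m) then show ?case using all_reducible_Suc[of m] by simp
qed

section \<open>Uniqueness of the Markov trace\<close>

lemma Pol_empty: "x \<in> Pol {} \<Longrightarrow> x = scal (coeff x []) * 1"
proof -
  assume x: "x \<in> Pol {}"
  have "coeff x w = (if w = [] then coeff x [] else 0)" for w
  proof (cases "w = []")
    case False
    then have "w \<notin> supp (coeff x)" using x by (auto simp: Pol_def)
    then show ?thesis using False by (simp add: supp_def)
  qed simp
  then have r: "\<And>w. w \<noteq> [] \<Longrightarrow> coeff x w = 0" by simp
  have "coeff x = coeff (scal (coeff x []) * 1)"
  proof (rule ext)
    fix w show "coeff x w = coeff (scal (coeff x []) * 1) w"
      using r[of w] by (cases "w = []") (simp_all add: coeff_scal ncsmul_def ncone_def)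
  qed
  then show ?thesis by (simp add: coeff_inject)
qed

lemma Pol_finite_letters: "x \<in> Pol {1..} \<Longrightarrow> \<exists>m. x \<in> Pol {1..m}"
proof -
  assume x: "x \<in> Pol {1..}"
  let ?A = "\<Union>w\<in>supp (coeff x). set w"
  have fA: "finite ?A" using fin_coeff by simp
  show ?thesis
  proof (intro exI[of _ "Max (insert 0 ?A)"])
    show "x \<in> Pol {1..Max (insert 0 ?A)}" unfolding Pol_def
    proof (intro CollectI ballI subsetI)
      fix w j assume w: "w \<in> supp (coeff x)" and j: "j \<in> set w"
      have "j \<ge> 1" using x w j by (auto simp: Pol_def)
      moreover have "j \<le> Max (insert 0 ?A)" using fA w j by (intro Max_ge) auto
      ultimately show "j \<in> {1..Max (insert 0 ?A)}" by simp
    qed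
  qed
qed

locale markov_trace =
  fixes T :: "ncpoly \<Rightarrow> complex"
  assumes mt: "is_markov_trace T"
begin

definition trf :: "fpoly \<Rightarrow> complex" where "trf x = T (coeff x)"

lemma Pol1_polys: "x \<in> Pol1 \<Longrightarrow> coeff x \<in> ncpolys_on {1..}" by (rule coeff_in_ncpolys)

lemma trf_add: "x \<in> Pol1 \<Longrightarrow> y \<in> Pol1 \<Longrightarrow> trf (x + y) = trf x + trf y"
  using mt Pol1_polys unfolding is_markov_trace_def trf_def by (simp add: coeff_plus)

lemma trf_scal: "x \<in> Pol1 \<Longrightarrow> trf (scal c * x) = c * trf x"
  using mt Pol1_polys unfolding is_markov_trace_def trf_def by (simp add: coeff_scal_mul)

lemma trf_diff: "x \<in> Pol1 \<Longrightarrow> y \<in> Pol1 \<Longrightarrow> trf (x - y) = trf x - trf y"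
proof -
  assume x: "x \<in> Pol1" and y: "y \<in> Pol1"
  have e: "x - y = x + scal (-1) * y" by (simp add: scal_uminus scal_one)
  have ys: "scal (-1) * y \<in> Pol1" using y by (intro Pol_mult Pol_scal)
  have "trf (x - y) = trf x + trf (scal (-1) * y)" by (simp only: e trf_add[OF x ys])
  also have "\<dots> = trf x + (-1) * trf y" by (simp only: trf_scal[OF y])
  finally show ?thesis by simp
qed

lemma trf_Hid: "x \<in> Hid \<Longrightarrow> trf x = 0"
  using mt unfolding is_markov_trace_def trf_def Hid_def by simp

lemma trf_one: "trf 1 = 1"
  using mt unfolding is_markov_trace_def trf_def by (simp add: coeff_one)

lemma trf_comm: "x \<in> Pol1 \<Longrightarrow> y \<in> Pol1 \<Longrightarrow> trf (x * y) = trf (y * x)"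
  using mt Pol1_polys unfolding is_markov_trace_def trf_def by (simp add: coeff_times)

lemma trf_zero: "trf 0 = 0"
  using trf_scal[OF Pol_zero, of 0] by (simp add: scal_zero)

lemma trf_base:
  assumes "x \<in> Pol {}"
  shows "trf x = coeff x []"
proof -
  have "trf x = trf (scal (coeff x []) * 1)" using Pol_empty[OF assms] by (rule arg_cong)
  also have "\<dots> = coeff x []" using trf_scal[OF Pol_one] trf_one by simp
  finally show ?thesis .
qed

lemma trf_decompose:
  assumes "x \<in> Pol1" "a \<in> Pol1" "h \<in> Pol1" and c: "hcong x (a + h)"
  shows "trf x = trf a + trf h"
proof -
  have "trf x = trf (x - (a + h)) + trf (a + h)"
    using trf_add[of "x - (a + h)" "a + h"] assms by (simp add: Pol_add Pol_diff)
  moreover have "trf (x - (a + h)) = 0" using c by (simp add: hcong_def trf_Hid)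
  ultimately show ?thesis using trf_add assms by simp
qed

definition Egen :: "nat \<Rightarrow> fpoly" where "Egen m = scal (1 / (1 + qq)) * (scal qq - Ggen m)"

lemma coeff_Egen: "coeff (Egen m) = e_el m"
  by (simp add: Egen_def e_el_def coeff_scal_mul coeff_minus coeff_scal coeff_Ggen)

lemma trf_markov: "m \<ge> 1 \<Longrightarrow> x \<in> Pol {1..<m} \<Longrightarrow> trf (x * Egen m) = eta * trf x"
  using mt coeff_in_ncpolys unfolding is_markov_trace_def trf_def by (simp add: coeff_times coeff_Egen)

lemma Ggen_via_Egen: "Ggen m = scal qq - scal (1 + qq) * Egen m"
proof -
  have "scal (1 + qq) * Egen m = scal ((1 + qq) * (1 / (1 + qq))) * (scal qq - Ggen m)"
    by (simp only: Egen_def mult.assoc[symmetric] scal_mult)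
  also have "(1 + qq) * (1 / (1 + qq)) = 1" using qq_one by simp
  finally have "scal (1 + qq) * Egen m = scal qq - Ggen m" by (simp add: scal_one)
  then show ?thesis by (simp add: algebra_simps)
qed

lemma Egen_Pol1: "m \<ge> 1 \<Longrightarrow> Egen m \<in> Pol1"
  unfolding Egen_def by (intro Pol_mult Pol_scal Pol_diff Ggen_Pol1)

lemma trf_mult_Ggen: "m \<ge> 1 \<Longrightarrow> z \<in> Pol {1..<m} \<Longrightarrow> trf (z * Ggen m) = (qq - (1 + qq) * eta) * trf z"
proof -
  assume m: "m \<ge> 1" and z: "z \<in> Pol {1..<m}"
  have zP: "z \<in> Pol1" using z by (rule Pol_Pol1')
  have "z * Ggen m = scal qq * z - scal (1 + qq) * (z * Egen m)"
    by (simp add: Ggen_via_Egen right_diff_distrib mult.assoc[symmetric] scal_comm[of qq z, symmetric] scal_comm[of "1 + qq" z, symmetric])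
  moreover have "scal qq * z \<in> Pol1" "scal (1 + qq) * (z * Egen m) \<in> Pol1" "z * Egen m \<in> Pol1"
    using zP Egen_Pol1[OF m] by (auto intro: Pol_mult Pol_scal)
  ultimately have "trf (z * Ggen m) = trf (scal qq * z) - trf (scal (1 + qq) * (z * Egen m))"
    by (simp add: trf_diff)
  also have "\<dots> = qq * trf z - (1 + qq) * (eta * trf z)"
    using zP trf_markov[OF m z] \<open>z * Egen m \<in> Pol1\<close> by (simp add: trf_scal)
  finally show ?thesis by (simp add: algebra_simps)
qed

lemma trf_span_gen:
  assumes n: "n \<ge> 1" and b: "b \<in> Pol {1..<n}" and c: "c \<in> Pol {1..<n}"
  shows "trf (b * Ggen n * c) = (qq - (1 + qq) * eta) * trf (c * b)"
proof -
  have "b * Ggen n \<in> Pol1" using b n by (intro Pol_mult Pol_Pol1' Ggen_Pol1)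
  from trf_comm[OF this Pol_Pol1'[OF c]]
  have "trf (b * Ggen n * c) = trf (c * b * Ggen n)" by (simp only: mult.assoc)
  also have "\<dots> = (qq - (1 + qq) * eta) * trf (c * b)"
    using b c by (intro trf_mult_Ggen n Pol_mult)
  finally show ?thesis .
qed

end

lemma trf_agree_Gspan:
  assumes T: "markov_trace T" and T': "markov_trace T'" and n: "n \<ge> 1"
    and agree: "\<And>y. y \<in> Pol {1..<n} \<Longrightarrow> markov_trace.trf T y = markov_trace.trf T' y"
    and h: "h \<in> Gspan n"
  shows "markov_trace.trf T h = markov_trace.trf T' h"
  using h
proof (induction h rule: Gspan.induct)
  case span_zero
  then show ?case using markov_trace.trf_zero[OF T] markov_trace.trf_zero[OF T'] by simp
next
  case (span_gen b c)
  then have "c * b \<in> Pol {1..<n}" by (intro Pol_mult)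
  then show ?case
    using markov_trace.trf_span_gen[OF T n span_gen] markov_trace.trf_span_gen[OF T' n span_gen] agree by simp
next
  case (span_add h h')
  have "h \<in> Pol1" "h' \<in> Pol1" using Pol_Pol1[OF Gspan_Pol[OF n span_add(1)]] Pol_Pol1[OF Gspan_Pol[OF n span_add(2)]] .
  then show ?case using span_add markov_trace.trf_add[OF T] markov_trace.trf_add[OF T'] by simp
qed

text \<open>Two Markov traces agree on H_m for every m, by induction on m: H_(m+1) = H_m + Gspan (m+1)
  modulo the Hecke relations.\<close>
lemma trf_unique:
  assumes T: "markov_trace T" and T': "markov_trace T'"
  shows "x \<in> Pol {1..m} \<Longrightarrow> markov_trace.trf T x = markov_trace.trf T' x"
proof (induction m arbitrary: x)
  case 0
  then have "x \<in> Pol {}" by simp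
  then show ?case using markov_trace.trf_base[OF T] markov_trace.trf_base[OF T'] by simp
next
  case (Suc m x)
  let ?n = "m + 1"
  have low: "Pol {1..<?n} = Pol {1..m}" by (simp add: atLeastLessThanSuc_atLeastAtMost)
  have xn: "x \<in> Pol {1..?n}" using Suc.prems by simp
  obtain a h where a: "a \<in> Pol {1..<?n}" and h: "h \<in> Gspan ?n" and c: "hcong x (a + h)"
    using all_reducible_holds[of ?n] xn unfolding all_reducible_def reducible_def by auto
  have parts: "x \<in> Pol1" "a \<in> Pol1" "h \<in> Pol1"
    using Pol_Pol1[OF xn] Pol_Pol1'[OF a] Pol_Pol1[OF Gspan_Pol[OF _ h]] by simp_all
  have "markov_trace.trf T a = markov_trace.trf T' a" using Suc.IH a low by simp
  moreover have "markov_trace.trf T h = markov_trace.trf T' h"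
    by (rule trf_agree_Gspan[OF T T' _ _ h]) (use Suc.IH low in auto)
  ultimately show ?case
    using markov_trace.trf_decompose[OF T parts c] markov_trace.trf_decompose[OF T' parts c] by simp
qed

lemma markov_unique:
  assumes "is_markov_trace T" "is_markov_trace T'"
  shows "T = T'"
proof
  fix f
  have T: "markov_trace T" and T': "markov_trace T'" using assms by (simp_all add: markov_trace_def)
  show "T f = T' f"
  proof (cases "f \<in> ncpolys_on {1..}")
    case False then show ?thesis using assms by (simp add: is_markov_trace_def)
  next
    case True
    then have A: "fpoly_of f \<in> Pol1" and R: "coeff (fpoly_of f) = f" using fpoly_of_Pol polys_fin by (auto simp: fpoly_of_inverse)
    then obtain m where "fpoly_of f \<in> Pol {1..m}" using Pol_finite_letters by blast
    then have "markov_trace.trf T (fpoly_of f) = markov_trace.trf T' (fpoly_of f)" by (rule trf_unique[OF T T'])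
    then show ?thesis using R by (simp add: markov_trace.trf_def[OF T] markov_trace.trf_def[OF T'])
  qed
qed

lemma tr_eq_markov_tr: "tr = markov_tr"
  unfolding tr_def by (rule the_equality) (simp_all add: markov_tr_is_markov_trace markov_unique)

lemma tr_via_tau:
  assumes a: "a' \<in> Pol {1..<n}" and b: "b' \<in> Pol {1..<n}"
  shows "tr (coeff a' \<star> coeff b') = tau (subst_hom Sgen a' * subst_hom Sgen b')"
proof -
  have "a' * b' \<in> Pol {1..<n}" using a b by (rule Pol_mult)
  then have "coeff (a' * b') \<in> ncpolys_on {1..}" by (intro coeff_in_ncpolys) (erule Pol_mono, auto)
  then show ?thesis by (simp add: tr_eq_markov_tr markov_tr_def coeff_times[symmetric] coeff_inverse subst_hom_mult)
qed

section \<open>The kernel of phi is Ann(tr)\<close>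

text \<open>If phi a vanishes in Q_n, then tr (a b) = tau (phi b * phi a) = 0 for all b.\<close>
lemma kernel_in_Ann:
  assumes a': "a' \<in> Pol {1..<n}" and X: "subst_hom Sgen a' \<in> Qid n"
  shows "coeff a' \<in> Ann_tr n"
proof -
  have XZ: "subst_hom Sgen a' \<in> Qnull" using X by (rule Qid_Qnull)
  have "tr (coeff a' \<star> b) = 0" if b: "b \<in> ncpolys_on {1..<n}" for b
  proof -
    obtain b' where b': "b' \<in> Pol {1..<n}" and be: "b = coeff b'" using b ncpolys_on_coeff by blast
    have "tr (coeff a' \<star> b) = tau (subst_hom Sgen b' * subst_hom Sgen a')"
      by (simp add: be tr_via_tau[OF a' b'] tau_comm)
    then show ?thesis using Qnull_tau[OF XZ] by simp
  qed
  then show ?thesis using coeff_in_ncpolys[OF a'] by (simp add: Ann_tr_def)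
qed

text \<open>If a annihilates the trace, then with dag (phi a) congruent to phi b we get
  tau (phi a * dag (phi a)) = tr (a b) = 0, so phi a is null by faithfulness and lies in
  Q_ideal by completeness.\<close>
lemma Ann_in_kernel:
  assumes a': "a' \<in> Pol {1..<n}" and ann: "coeff a' \<in> Ann_tr n"
  shows "subst_hom Sgen a' \<in> Qid n"
proof -
  define X where "X = subst_hom Sgen a'"
  obtain b' where b': "b' \<in> Pol {1..<n}" and cb: "qcong n (dag X) (subst_hom Sgen b')"
    using dag_img[OF a'] unfolding X_def by blast
  have "tr (coeff a' \<star> coeff b') = 0"
    using ann coeff_in_ncpolys[OF b'] by (simp add: Ann_tr_def)
  then have t1: "tau (X * subst_hom Sgen b') = 0" by (simp add: X_def tr_via_tau[OF a' b'])
  have "dag X - subst_hom Sgen b' \<in> Qnull" using cb by (simp add: qcong_def Qid_Qnull)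
  then have t2: "tau (X * (dag X - subst_hom Sgen b')) = 0" by (rule Qnull_tau)
  have "tau (X * dag X) = tau (X * subst_hom Sgen b') + tau (X * (dag X - subst_hom Sgen b'))"
    by (simp add: tau_add[symmetric] distrib_left[symmetric])
  then have "qnull X" using t1 t2 by (intro faithful) simp
  moreover have "X \<in> Qpol n" unfolding X_def using a' by (rule subst_Sgen_Pol)
  ultimately show ?thesis unfolding X_def[symmetric] by (rule completeness[rotated])
qed

text \<open>Both halves follow from the results above; the argument does not need n >= 2.\<close>
theorem lemma3p2:
  fixes n :: nat
  assumes "n \<ge> 2"
  shows "(\<forall>a\<in>ncpolys_on {1..<n}. phi a \<in> Q_ideal n \<longleftrightarrow> a \<in> Ann_tr n)
    \<and> (\<forall>x\<in>ncpolys_on (Q_letters n).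
          (\<exists>a\<in>ncpolys_on {1..<n}. x \<ominus> phi a \<in> Q_ideal n)
          \<longleftrightarrow> (\<exists>y\<in>subalg_gen (s_el ` {1..<n}). x \<ominus> y \<in> Q_ideal n))"
proof (intro conjI ballI)
  fix a assume "a \<in> ncpolys_on {1..<n}"
  then obtain a' where a': "a' \<in> Pol {1..<n}" and ae: "a = coeff a'" using ncpolys_on_coeff by blast
  have "phi a \<in> Q_ideal n \<longleftrightarrow> subst_hom Sgen a' \<in> Qid n" by (simp add: ae phi_coeff Qid_def)
  then show "phi a \<in> Q_ideal n \<longleftrightarrow> a \<in> Ann_tr n"
    using kernel_in_Ann[OF a'] Ann_in_kernel[OF a'] ae by blast
next
  fix x
  show "(\<exists>a\<in>ncpolys_on {1..<n}. x \<ominus> phi a \<in> Q_ideal n)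
          \<longleftrightarrow> (\<exists>y\<in>subalg_gen (s_el ` {1..<n}). x \<ominus> y \<in> Q_ideal n)"
    unfolding phi_image[symmetric] by blast
qed

end
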